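(* Let $r_0>0$ and let $(X_t)_{t\in(0,r_0]}$ be a family of Banach spaces with bounded linear injective operators $j_{s,r}\in L(X_r;X_s)$ with dense image for $0<s\le r\le r_0$, such that $j_{s,s}=\mathrm{Id}$ and $j_{s,c}j_{c,r}=j_{s,r}$ for $0<s\le c\le r\le r_0$. Let $\mathcal{B}$ be a Banach space and $U\subset\mathcal{B}$ a non-empty open convex set. Let $(Q_{s,r}(u))$ be an equivariant $(\gamma,0)$-regular family, write $Q_s(u)=Q_{s,s}(u)\in L(X_s)$, and suppose $\mathbf{1}-Q_s(u)$ is invertible for all $0<s\le r_0$, $u\in U$, with inverse $R_s(u)=(\mathbf{1}-Q_s(u))^{-1}$ uniformly bounded for $\epsilon<s\le r_0$ (and $u\in U$) for every $\epsilon>0$. Then the family $R_{s,r}(u)=j_{s,r}R_r(u)$, $0<s<r\le r_0$, is again equivariant and $(\gamma,0)$-regular.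
   Context: For $\gamma>0$ with $\gamma\le r_0$, let $I_0=\{(s,r)\in(0,r_0]^2:s\le r\}$. A family of operators $M_{s,r}(u)\in L(X_r,X_s)$, $(s,r)\in I_0$, $u\in U$, is equivariant and $(\gamma,0)$-regular if (i) $j_{s,s'}M_{s',r'}(u)=M_{s,r}(u)j_{r,r'}$ for all $(s,r),(s',r')\in I_0$ with $s<s'$, $r<r'$, and (ii) $u\mapsto M_{s,r}(u)\in L(X_r,X_s)$ is $C^t$ for all $(s,r)\in I_0$ and $0\le t<\gamma\wedge(r-s)$. For $t=k+\alpha$ ($k\in\mathbb{N}_0$, $\alpha\in(0,1]$), $C^t$ means $k$ times Fréchet differentiable with bounded derivatives and $\alpha$-Hölder $k$-th derivative; $C^0$ means continuous. *)

theory Defs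
  imports "HOL-Analysis.Analysis"
begin

text \<open>Scale of Banach spaces X_t, t in (0,r0], realised as subspaces V t of one ambient
real vector space, each with its own norm nrm t.\<close>

definition is_norm_on :: "'x::real_vector set \<Rightarrow> ('x \<Rightarrow> real) \<Rightarrow> bool" where
  "is_norm_on W n \<longleftrightarrow>
     (\<forall>x\<in>W. 0 \<le> n x) \<and> (\<forall>x\<in>W. n x = 0 \<longleftrightarrow> x = 0) \<and>
     (\<forall>x\<in>W. \<forall>a. n (a *\<^sub>R x) = \<bar>a\<bar> * n x) \<and>
     (\<forall>x\<in>W. \<forall>y\<in>W. n (x + y) \<le> n x + n y)"

definition is_banach_on :: "'x::real_vector set \<Rightarrow> ('x \<Rightarrow> real) \<Rightarrow> bool" where
  "is_banach_on W n \<longleftrightarrow> subspace W \<and> is_norm_on W n \<and>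
     (\<forall>f::nat \<Rightarrow> 'x. (\<forall>i. f i \<in> W) \<longrightarrow>
        (\<forall>e>0. \<exists>N. \<forall>m\<ge>N. \<forall>k\<ge>N. n (f m - f k) < e) \<longrightarrow>
        (\<exists>x\<in>W. \<forall>e>0. \<exists>N. \<forall>m\<ge>N. n (f m - x) < e))"

definition bounded_op ::
  "(real \<Rightarrow> 'x::real_vector set) \<Rightarrow> (real \<Rightarrow> 'x \<Rightarrow> real) \<Rightarrow> real \<Rightarrow> real \<Rightarrow> ('x \<Rightarrow> 'x) \<Rightarrow> bool" where
  "bounded_op V nrm s r T \<longleftrightarrow>
     (\<forall>x\<in>V r. T x \<in> V s) \<and>
     (\<forall>x\<in>V r. \<forall>y\<in>V r. T (x + y) = T x + T y) \<and>
     (\<forall>x\<in>V r. \<forall>a. T (a *\<^sub>R x) = a *\<^sub>R T x) \<and>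
     (\<exists>C. \<forall>x\<in>V r. nrm s (T x) \<le> C * nrm r x)"

definition opnorm ::
  "(real \<Rightarrow> 'x::real_vector set) \<Rightarrow> (real \<Rightarrow> 'x \<Rightarrow> real) \<Rightarrow> real \<Rightarrow> real \<Rightarrow> ('x \<Rightarrow> 'x) \<Rightarrow> real" where
  "opnorm V nrm s r T = Sup {nrm s (T x) | x. x \<in> V r \<and> nrm r x \<le> 1}"

definition banach_scale ::
  "real \<Rightarrow> (real \<Rightarrow> 'x::real_vector set) \<Rightarrow> (real \<Rightarrow> 'x \<Rightarrow> real) \<Rightarrow> (real \<Rightarrow> real \<Rightarrow> 'x \<Rightarrow> 'x) \<Rightarrow> bool" where
  "banach_scale r0 V nrm j \<longleftrightarrow>
     (\<forall>t. 0 < t \<and> t \<le> r0 \<longrightarrow> is_banach_on (V t) (nrm t)) \<and>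
     (\<forall>s r. 0 < s \<and> s \<le> r \<and> r \<le> r0 \<longrightarrow>
        bounded_op V nrm s r (j s r) \<and> inj_on (j s r) (V r) \<and>
        (\<forall>y\<in>V s. \<forall>e>0. \<exists>x\<in>V r. nrm s (j s r x - y) < e)) \<and>
     (\<forall>s. 0 < s \<and> s \<le> r0 \<longrightarrow> (\<forall>x\<in>V s. j s s x = x)) \<and>
     (\<forall>s c r. 0 < s \<and> s \<le> c \<and> c \<le> r \<and> r \<le> r0 \<longrightarrow>
        (\<forall>x\<in>V r. j s c (j c r x) = j s r x))"

text \<open>For t = k + alpha, k in N, alpha in (0,1]:
  D j u hs is the j-th Frechet derivative at u applied to the directions hs.\<close>
definition C_k_alpha ::
  "(real \<Rightarrow> 'x::real_vector set) \<Rightarrow> (real \<Rightarrow> 'x \<Rightarrow> real) \<Rightarrow> real \<Rightarrow> real \<Rightarrow>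
   'b::real_normed_vector set \<Rightarrow> nat \<Rightarrow> real \<Rightarrow> ('b \<Rightarrow> 'x \<Rightarrow> 'x) \<Rightarrow> bool" where
  "C_k_alpha V nrm s r U k \<alpha> F \<longleftrightarrow>
    (\<exists>D :: nat \<Rightarrow> 'b \<Rightarrow> 'b list \<Rightarrow> 'x \<Rightarrow> 'x.
      (\<forall>u\<in>U. \<forall>x\<in>V r. D 0 u [] x = F u x) \<and>
      (\<forall>i\<le>k. \<forall>u\<in>U. \<forall>hs. length hs = i \<longrightarrow> bounded_op V nrm s r (D i u hs)) \<and>
      (\<forall>i\<le>k. \<forall>u\<in>U. \<forall>hs p a h h'. length hs = i \<and> p < i \<longrightarrow>
          (\<forall>x\<in>V r. D i u (hs[p := a *\<^sub>R h + h']) x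
                      = a *\<^sub>R D i u (hs[p := h]) x + D i u (hs[p := h']) x)) \<and>
      (\<forall>i\<le>k. \<forall>u\<in>U. \<exists>C. \<forall>hs. length hs = i \<longrightarrow>
          opnorm V nrm s r (D i u hs) \<le> C * prod_list (map norm hs)) \<and>
      (\<forall>i<k. \<forall>u\<in>U. \<forall>e>0. \<exists>d>0. \<forall>h. norm h < d \<and> u + h \<in> U \<longrightarrow>
          (\<forall>hs. length hs = i \<longrightarrow>
             opnorm V nrm s r (\<lambda>x. D i (u + h) hs x - D i u hs x - D (Suc i) u (h # hs) x)
               \<le> e * norm h * prod_list (map norm hs))) \<and>
      (\<forall>i. 1 \<le> i \<and> i \<le> k \<longrightarrow> (\<exists>C. \<forall>u\<in>U. \<forall>hs. length hs = i \<longrightarrow>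
          opnorm V nrm s r (D i u hs) \<le> C * prod_list (map norm hs))) \<and>
      (\<exists>C. \<forall>u\<in>U. \<forall>v\<in>U. \<forall>hs. length hs = k \<longrightarrow>
          opnorm V nrm s r (\<lambda>x. D k u hs x - D k v hs x)
            \<le> C * norm (u - v) powr \<alpha> * prod_list (map norm hs)))"

definition C_t ::
  "(real \<Rightarrow> 'x::real_vector set) \<Rightarrow> (real \<Rightarrow> 'x \<Rightarrow> real) \<Rightarrow> real \<Rightarrow> real \<Rightarrow>
   'b::real_normed_vector set \<Rightarrow> real \<Rightarrow> ('b \<Rightarrow> 'x \<Rightarrow> 'x) \<Rightarrow> bool" where
  "C_t V nrm s r U t F \<longleftrightarrow>
     (if t = 0 then
        (\<forall>u\<in>U. \<forall>e>0. \<exists>d>0. \<forall>v\<in>U. norm (v - u) < d \<longrightarrow>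
            opnorm V nrm s r (\<lambda>x. F v x - F u x) < e)
      else C_k_alpha V nrm s r U (nat (\<lceil>t\<rceil> - 1)) (t - real (nat (\<lceil>t\<rceil> - 1))) F)"

definition equivariant_regular ::
  "real \<Rightarrow> (real \<Rightarrow> 'x::real_vector set) \<Rightarrow> (real \<Rightarrow> 'x \<Rightarrow> real) \<Rightarrow> (real \<Rightarrow> real \<Rightarrow> 'x \<Rightarrow> 'x) \<Rightarrow>
   'b::real_normed_vector set \<Rightarrow> real \<Rightarrow> (real \<Rightarrow> real \<Rightarrow> 'b \<Rightarrow> 'x \<Rightarrow> 'x) \<Rightarrow> bool" where
  "equivariant_regular r0 V nrm j U \<gamma> M \<longleftrightarrow>
     (\<forall>s r u. 0 < s \<and> s \<le> r \<and> r \<le> r0 \<and> u \<in> U \<longrightarrow> bounded_op V nrm s r (M s r u)) \<and>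
     (\<forall>s r s' r' u. 0 < s \<and> s \<le> r \<and> r \<le> r0 \<and> 0 < s' \<and> s' \<le> r' \<and> r' \<le> r0 \<and>
          s < s' \<and> r < r' \<and> u \<in> U \<longrightarrow>
        (\<forall>x\<in>V r'. j s s' (M s' r' u x) = M s r u (j r r' x))) \<and>
     (\<forall>s r t. 0 < s \<and> s \<le> r \<and> r \<le> r0 \<and> 0 \<le> t \<and> t < min \<gamma> (r - s) \<longrightarrow>
        C_t V nrm s r U t (M s r))"

end

theory Submission
  imports Defs
begin


locale scale_setting =
  fixes r0 :: real and V :: "real \<Rightarrow> 'x::real_vector set" and nrm :: "real \<Rightarrow> 'x \<Rightarrow> real"
    and j :: "real \<Rightarrow> real \<Rightarrow> 'x \<Rightarrow> 'x" and U :: "'b::real_normed_vector set"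
  assumes scale: "banach_scale r0 V nrm j" and open_U: "open U"
begin

abbreviation level :: "real \<Rightarrow> bool" where "level t \<equiv> 0 < t \<and> t \<le> r0"
abbreviation "bop \<equiv> bounded_op V nrm"
abbreviation "opn \<equiv> opnorm V nrm"

lemma banach_V: "level t \<Longrightarrow> is_banach_on (V t) (nrm t)"
  using scale[unfolded banach_scale_def, THEN conjunct1] by blast

lemma subspace_V: assumes "level t" shows "subspace (V t)"
  using banach_V[OF assms] unfolding is_banach_on_def by (elim conjE)

lemma norm_on_V: assumes "level t" shows "is_norm_on (V t) (nrm t)"
  using banach_V[OF assms] unfolding is_banach_on_def by (elim conjE)

lemma V_zero: "level t \<Longrightarrow> 0 \<in> V t"
  by (rule subspace_0[OF subspace_V])
lemma V_add: "level t \<Longrightarrow> x \<in> V t \<Longrightarrow> y \<in> V t \<Longrightarrow> x + y \<in> V t"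
  by (rule subspace_add[OF subspace_V])
lemma V_diff: "level t \<Longrightarrow> x \<in> V t \<Longrightarrow> y \<in> V t \<Longrightarrow> x - y \<in> V t"
  by (rule subspace_diff[OF subspace_V])
lemma V_scaleR: "level t \<Longrightarrow> x \<in> V t \<Longrightarrow> c *\<^sub>R x \<in> V t"
  by (rule subspace_scale[OF subspace_V])
lemma V_minus: "level t \<Longrightarrow> x \<in> V t \<Longrightarrow> - x \<in> V t"
  by (rule subspace_neg[OF subspace_V])

lemma nrm_nonneg: assumes "level t" "x \<in> V t" shows "0 \<le> nrm t x"
  using norm_on_V[OF assms(1)] assms(2) unfolding is_norm_on_def by (elim conjE) (rule bspec)
lemma nrm_eq_0_iff: assumes "level t" "x \<in> V t" shows "nrm t x = 0 \<longleftrightarrow> x = 0"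
  using norm_on_V[OF assms(1)] assms(2) unfolding is_norm_on_def by (elim conjE) (rule bspec)
lemma nrm_scaleR: assumes "level t" "x \<in> V t" shows "nrm t (c *\<^sub>R x) = \<bar>c\<bar> * nrm t x"
  using norm_on_V[OF assms(1)] assms(2) unfolding is_norm_on_def by (elim conjE) simp
lemma nrm_triangle: assumes "level t" "x \<in> V t" "y \<in> V t" shows "nrm t (x + y) \<le> nrm t x + nrm t y"
  using norm_on_V[OF assms(1)] assms(2,3) unfolding is_norm_on_def by (elim conjE) simp
lemma nrm_zero: "level t \<Longrightarrow> nrm t 0 = 0"
  using nrm_eq_0_iff[OF _ V_zero] by simp
lemma nrm_minus: "level t \<Longrightarrow> x \<in> V t \<Longrightarrow> nrm t (- x) = nrm t x"
  using nrm_scaleR[of t x "-1"] by simp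
lemma nrm_diff_le: "level t \<Longrightarrow> x \<in> V t \<Longrightarrow> y \<in> V t \<Longrightarrow> nrm t (x - y) \<le> nrm t x + nrm t y"
  using nrm_triangle[of t x "-y"] nrm_minus[of t y] V_minus by simp

lemma bop_in: "bop a b T \<Longrightarrow> x \<in> V b \<Longrightarrow> T x \<in> V a"
  unfolding bounded_op_def by blast
lemma bop_add: "bop a b T \<Longrightarrow> x \<in> V b \<Longrightarrow> y \<in> V b \<Longrightarrow> T (x + y) = T x + T y"
  unfolding bounded_op_def by blast
lemma bop_scaleR: "bop a b T \<Longrightarrow> x \<in> V b \<Longrightarrow> T (c *\<^sub>R x) = c *\<^sub>R T x"
  unfolding bounded_op_def by blast
lemma bop_zero: "level b \<Longrightarrow> bop a b T \<Longrightarrow> T 0 = 0"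
  using bop_scaleR[of a b T 0 0] V_zero by simp
lemma bop_minus: "bop a b T \<Longrightarrow> x \<in> V b \<Longrightarrow> T (- x) = - T x"
  using bop_scaleR[of a b T x "-1"] by simp
lemma bop_diff: "level b \<Longrightarrow> bop a b T \<Longrightarrow> x \<in> V b \<Longrightarrow> y \<in> V b \<Longrightarrow> T (x - y) = T x - T y"
  using bop_add[of a b T x "-y"] bop_minus[of a b T y] V_minus by simp

lemma bopI:
  assumes "level b" "\<forall>x\<in>V b. T x \<in> V a" "\<forall>x\<in>V b. \<forall>y\<in>V b. T (x + y) = T x + T y"
    "\<forall>x\<in>V b. \<forall>c. T (c *\<^sub>R x) = c *\<^sub>R T x" "\<forall>x\<in>V b. nrm a (T x) \<le> C * nrm b x"
  shows "bop a b T"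
  using assms unfolding bounded_op_def by blast

lemma bop_cong:
  assumes "level b" and eq: "\<And>x. x \<in> V b \<Longrightarrow> T x = T' x" and T: "bop a b T"
  shows "bop a b T'"
proof -
  obtain C where C: "\<forall>x\<in>V b. nrm a (T x) \<le> C * nrm b x"
    using T unfolding bounded_op_def by blast
  show ?thesis
  proof (rule bopI[OF \<open>level b\<close>, where C = C])
    show "\<forall>x\<in>V b. T' x \<in> V a" "\<forall>x\<in>V b. nrm a (T' x) \<le> C * nrm b x"
      using bop_in[OF T] C eq by auto
    show "\<forall>x\<in>V b. \<forall>y\<in>V b. T' (x + y) = T' x + T' y"
      using bop_add[OF T] eq V_add[OF \<open>level b\<close>] by metis
    show "\<forall>x\<in>V b. \<forall>c. T' (c *\<^sub>R x) = c *\<^sub>R T' x"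
      using bop_scaleR[OF T] eq V_scaleR[OF \<open>level b\<close>] by metis
  qed
qed

lemma opn_cong:
  assumes "\<And>x. x \<in> V b \<Longrightarrow> T x = T' x"
  shows "opn a b T = opn a b T'"
proof -
  have "{nrm a (T x) |x. x \<in> V b \<and> nrm b x \<le> 1} = {nrm a (T' x) |x. x \<in> V b \<and> nrm b x \<le> 1}"
    using assms by metis
  then show ?thesis unfolding opnorm_def by simp
qed

lemma opn_upper:
  assumes "level b" "bop a b T" "x \<in> V b" "nrm b x \<le> 1"
  shows "nrm a (T x) \<le> opn a b T"
  unfolding opnorm_def
proof (rule cSup_upper)
  obtain C where C: "\<forall>x\<in>V b. nrm a (T x) \<le> C * nrm b x"
    using assms(2) unfolding bounded_op_def by blast
  have "nrm a (T y) \<le> \<bar>C\<bar>" if "y \<in> V b" "nrm b y \<le> 1" for y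
  proof -
    have "C * nrm b y \<le> \<bar>C\<bar> * nrm b y"
      using nrm_nonneg[OF assms(1) that(1)] by (simp add: mult_right_mono)
    also have "\<dots> \<le> \<bar>C\<bar>"
      using that nrm_nonneg[OF assms(1) that(1)] by (simp add: mult_left_le)
    finally show ?thesis using C that(1) by force
  qed
  then show "bdd_above {nrm a (T x) |x. x \<in> V b \<and> nrm b x \<le> 1}"
    by (intro bdd_aboveI[where M = "\<bar>C\<bar>"]) blast
qed (use assms in blast)

lemma opn_nonneg:
  assumes "level a" "level b" "bop a b T"
  shows "0 \<le> opn a b T"
  using opn_upper[OF assms(2,3) V_zero[OF assms(2)]] nrm_zero[OF assms(2)]
    nrm_nonneg[OF assms(1) bop_in[OF assms(3) V_zero[OF assms(2)]]] by simp

lemma opn_bound: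
  assumes la: "level a" and lb: "level b" and T: "bop a b T" and x: "x \<in> V b"
  shows "nrm a (T x) \<le> opn a b T * nrm b x"
proof (cases "x = 0")
  case True
  then show ?thesis using bop_zero[OF lb T] nrm_zero[OF la] nrm_zero[OF lb] by simp
next
  case False
  define n where "n = nrm b x"
  have n: "n > 0" using nrm_nonneg[OF lb x] nrm_eq_0_iff[OF lb x] False n_def by force
  have "nrm b ((1/n) *\<^sub>R x) = 1" using nrm_scaleR[OF lb x] n n_def by simp
  then have "nrm a (T ((1/n) *\<^sub>R x)) \<le> opn a b T"
    using opn_upper[OF lb T V_scaleR[OF lb x]] by simp
  moreover have "nrm a (T ((1/n) *\<^sub>R x)) = (1/n) * nrm a (T x)"
    using bop_scaleR[OF T x] nrm_scaleR[OF la bop_in[OF T x]] n by simp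
  ultimately have "(1/n) * nrm a (T x) \<le> opn a b T" by simp
  then show ?thesis using n n_def by (simp add: field_simps)
qed

lemma opn_least:
  assumes lb: "level b" and C: "0 \<le> C" and bound: "\<forall>x\<in>V b. nrm a (T x) \<le> C * nrm b x"
  shows "opn a b T \<le> C"
  unfolding opnorm_def
proof (rule cSup_least)
  show "{nrm a (T x) |x. x \<in> V b \<and> nrm b x \<le> 1} \<noteq> {}"
    using V_zero[OF lb] nrm_zero[OF lb] by auto
next
  fix y assume "y \<in> {nrm a (T x) |x. x \<in> V b \<and> nrm b x \<le> 1}"
  then obtain x where x: "x \<in> V b" "nrm b x \<le> 1" "y = nrm a (T x)" by blast
  have "C * nrm b x \<le> C" using C x(2) by (simp add: mult_left_le)
  then show "y \<le> C" using bound x by force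
qed

lemma opn_le_0_imp_zero:
  assumes la: "level a" and lb: "level b" and T: "bop a b T" and "opn a b T \<le> 0" and x: "x \<in> V b"
  shows "T x = 0"
proof -
  have "nrm a (T x) \<le> 0"
    using opn_bound[OF la lb T x] \<open>opn a b T \<le> 0\<close> nrm_nonneg[OF lb x]
    by (smt (verit) mult_nonpos_nonneg)
  then show ?thesis using nrm_nonneg[OF la bop_in[OF T x]] nrm_eq_0_iff[OF la bop_in[OF T x]] by simp
qed

lemma bop_comp:
  assumes la: "level a" and lc: "level c" and lb: "level b" and S: "bop a c S" and T: "bop c b T"
  shows "bop a b (\<lambda>x. S (T x))" and "opn a b (\<lambda>x. S (T x)) \<le> opn a c S * opn c b T"
proof -
  have bound: "\<forall>x\<in>V b. nrm a (S (T x)) \<le> (opn a c S * opn c b T) * nrm b x"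
  proof
    fix x assume x: "x \<in> V b"
    have "nrm a (S (T x)) \<le> opn a c S * nrm c (T x)" using opn_bound[OF la lc S bop_in[OF T x]] .
    also have "\<dots> \<le> opn a c S * (opn c b T * nrm b x)"
      using opn_bound[OF lc lb T x] opn_nonneg[OF la lc S] by (simp add: mult_left_mono)
    finally show "nrm a (S (T x)) \<le> (opn a c S * opn c b T) * nrm b x" by (simp add: mult.assoc)
  qed
  show "bop a b (\<lambda>x. S (T x))"
    by (rule bopI[OF lb _ _ _ bound])
      (use bop_in[OF S bop_in[OF T]] bop_add[OF T] bop_add[OF S bop_in[OF T] bop_in[OF T]]
         bop_scaleR[OF T] bop_scaleR[OF S bop_in[OF T]] in auto)
  show "opn a b (\<lambda>x. S (T x)) \<le> opn a c S * opn c b T"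
    using opn_least[OF lb _ bound] opn_nonneg[OF la lc S] opn_nonneg[OF lc lb T] by simp
qed

lemma opn_comp_le:
  assumes la: "level a" and lc: "level c" and lb: "level b" and S: "bop a c S" and T: "bop c b T"
    and X: "opn a c S \<le> X" and Y: "opn c b T \<le> Y"
  shows "opn a b (\<lambda>x. S (T x)) \<le> X * Y"
proof -
  have "opn a b (\<lambda>x. S (T x)) \<le> opn a c S * opn c b T" using bop_comp(2)[OF la lc lb S T] .
  also have "\<dots> \<le> X * Y"
    by (rule mult_mono[OF X Y]) (use opn_nonneg[OF la lc S] opn_nonneg[OF lc lb T] X in auto)
  finally show ?thesis .
qed

lemma bop_add_op:
  assumes la: "level a" and lb: "level b" and S: "bop a b S" and T: "bop a b T"
  shows "bop a b (\<lambda>x. S x + T x)" and "opn a b (\<lambda>x. S x + T x) \<le> opn a b S + opn a b T"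
proof -
  have bound: "\<forall>x\<in>V b. nrm a (S x + T x) \<le> (opn a b S + opn a b T) * nrm b x"
    using nrm_triangle[OF la bop_in[OF S] bop_in[OF T]] opn_bound[OF la lb S] opn_bound[OF la lb T]
    by (fastforce simp: algebra_simps)
  show "bop a b (\<lambda>x. S x + T x)"
    by (rule bopI[OF lb _ _ _ bound])
      (use bop_in[OF S] bop_in[OF T] V_add[OF la] bop_add[OF S] bop_add[OF T]
         bop_scaleR[OF S] bop_scaleR[OF T] in \<open>auto simp: algebra_simps\<close>)
  show "opn a b (\<lambda>x. S x + T x) \<le> opn a b S + opn a b T"
    using opn_least[OF lb _ bound] opn_nonneg[OF la lb S] opn_nonneg[OF la lb T] by linarith
qed

lemma bop_diff_op:
  assumes la: "level a" and lb: "level b" and S: "bop a b S" and T: "bop a b T"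
  shows "bop a b (\<lambda>x. S x - T x)" and "opn a b (\<lambda>x. S x - T x) \<le> opn a b S + opn a b T"
proof -
  have bound: "\<forall>x\<in>V b. nrm a (S x - T x) \<le> (opn a b S + opn a b T) * nrm b x"
    using nrm_diff_le[OF la bop_in[OF S] bop_in[OF T]] opn_bound[OF la lb S] opn_bound[OF la lb T]
    by (fastforce simp: algebra_simps)
  show "bop a b (\<lambda>x. S x - T x)"
    by (rule bopI[OF lb _ _ _ bound])
      (use bop_in[OF S] bop_in[OF T] V_diff[OF la] bop_add[OF S] bop_add[OF T]
         bop_scaleR[OF S] bop_scaleR[OF T] in \<open>auto simp: algebra_simps\<close>)
  show "opn a b (\<lambda>x. S x - T x) \<le> opn a b S + opn a b T"
    using opn_least[OF lb _ bound] opn_nonneg[OF la lb S] opn_nonneg[OF la lb T] by linarith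
qed

lemma bop_scaleR_op:
  assumes la: "level a" and lb: "level b" and T: "bop a b T"
  shows "bop a b (\<lambda>x. c *\<^sub>R T x)" and "opn a b (\<lambda>x. c *\<^sub>R T x) \<le> \<bar>c\<bar> * opn a b T"
proof -
  have bound: "\<forall>x\<in>V b. nrm a (c *\<^sub>R T x) \<le> (\<bar>c\<bar> * opn a b T) * nrm b x"
    using nrm_scaleR[OF la bop_in[OF T]] opn_bound[OF la lb T]
    by (simp add: mult.assoc mult_left_mono)
  show "bop a b (\<lambda>x. c *\<^sub>R T x)"
    by (rule bopI[OF lb _ _ _ bound])
      (use bop_in[OF T] V_scaleR[OF la] bop_add[OF T] bop_scaleR[OF T]
         in \<open>auto simp: scaleR_add_right\<close>)
  show "opn a b (\<lambda>x. c *\<^sub>R T x) \<le> \<bar>c\<bar> * opn a b T"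
    by (rule opn_least[OF lb mult_nonneg_nonneg[OF abs_ge_zero opn_nonneg[OF la lb T]] bound])
qed

lemma opn_add_le:
  assumes la: "level a" and lb: "level b" and S: "bop a b S" and T: "bop a b T"
    and "opn a b S \<le> X" "opn a b T \<le> Y" and eq: "\<And>x. x \<in> V b \<Longrightarrow> P x = S x + T x"
  shows "opn a b P \<le> X + Y"
proof -
  have "opn a b P = opn a b (\<lambda>x. S x + T x)" by (rule opn_cong) (rule eq)
  also have "\<dots> \<le> opn a b S + opn a b T" by (rule bop_add_op(2)[OF la lb S T])
  finally show ?thesis using assms(5,6) by simp
qed

lemma bop_diff3_op:
  assumes "level a" "level b" "bop a b A" "bop a b B" "bop a b C"
  shows "bop a b (\<lambda>x. A x - B x - C x)"
  using bop_diff_op(1)[OF assms(1,2) bop_diff_op(1)[OF assms(1-4)] assms(5)] .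

lemma opn_sum2_le:
  assumes la: "level a" and lc: "level c" and ld: "level d" and lb: "level b"
    and S1: "bop a c S1" and T1: "bop c b T1" and S2: "bop a d S2" and T2: "bop d b T2"
    and "opn a c S1 \<le> X1" "opn c b T1 \<le> Y1" "opn a d S2 \<le> X2" "opn d b T2 \<le> Y2"
    and eq: "\<And>x. x \<in> V b \<Longrightarrow> P x = S1 (T1 x) + S2 (T2 x)"
  shows "opn a b P \<le> X1 * Y1 + X2 * Y2"
proof -
  have "opn a b P = opn a b (\<lambda>x. S1 (T1 x) + S2 (T2 x))" by (rule opn_cong) (rule eq)
  also have "\<dots> \<le> opn a b (\<lambda>x. S1 (T1 x)) + opn a b (\<lambda>x. S2 (T2 x))"
    by (rule bop_add_op(2)[OF la lb bop_comp(1)[OF la lc lb S1 T1] bop_comp(1)[OF la ld lb S2 T2]])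
  also have "\<dots> \<le> X1 * Y1 + X2 * Y2"
    using opn_comp_le[OF la lc lb S1 T1] opn_comp_le[OF la ld lb S2 T2] assms(9-12) by (simp add: add_mono)
  finally show ?thesis .
qed

lemma opn_sum3_le:
  assumes la: "level a" and lc: "level c" and ld: "level d" and le: "level e" and lb: "level b"
    and S1: "bop a c S1" and T1: "bop c b T1" and S2: "bop a d S2" and T2: "bop d b T2"
    and S3: "bop a e S3" and T3: "bop e b T3"
    and "opn a c S1 \<le> X1" "opn c b T1 \<le> Y1" "opn a d S2 \<le> X2" "opn d b T2 \<le> Y2"
    and "opn a e S3 \<le> X3" "opn e b T3 \<le> Y3"
    and eq: "\<And>x. x \<in> V b \<Longrightarrow> P x = S1 (T1 x) + S2 (T2 x) + S3 (T3 x)"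
  shows "opn a b P \<le> X1 * Y1 + X2 * Y2 + X3 * Y3"
proof -
  have "opn a b P = opn a b (\<lambda>x. (S1 (T1 x) + S2 (T2 x)) + S3 (T3 x))" by (rule opn_cong) (rule eq)
  also have "\<dots> \<le> opn a b (\<lambda>x. S1 (T1 x) + S2 (T2 x)) + opn a b (\<lambda>x. S3 (T3 x))"
    by (rule bop_add_op(2)[OF la lb bop_add_op(1)[OF la lb] bop_comp(1)[OF la le lb S3 T3]])
      (rule bop_comp(1)[OF la lc lb S1 T1], rule bop_comp(1)[OF la ld lb S2 T2])
  also have "\<dots> \<le> (X1 * Y1 + X2 * Y2) + X3 * Y3"
    by (rule add_mono[OF opn_sum2_le[OF la lc ld lb S1 T1 S2 T2 assms(12-15)]
          opn_comp_le[OF la le lb S3 T3 assms(16,17)]]) simp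
  finally show ?thesis .
qed

end


type_synonym ('b, 'x) mfam = "'b \<Rightarrow> 'b list \<Rightarrow> 'x \<Rightarrow> 'x"

abbreviation nprod :: "'b::real_normed_vector list \<Rightarrow> real" where
  "nprod hs \<equiv> prod_list (map norm hs)"

lemma nprod_nonneg: "0 \<le> nprod hs"
  by (induction hs) auto

definition ct_order :: "real \<Rightarrow> nat" where
  "ct_order t = nat (\<lceil>t\<rceil> - 1)"

definition ct_exponent :: "real \<Rightarrow> real" where
  "ct_exponent t = t - real (ct_order t)"

lemma ct_order_le_1: "0 < t \<Longrightarrow> t \<le> 1 \<Longrightarrow> ct_order t = 0"
  unfolding ct_order_def by (simp add: ceiling_le_one)

lemma ct_exponent_le_1: "0 < t \<Longrightarrow> t \<le> 1 \<Longrightarrow> ct_exponent t = t"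
  unfolding ct_exponent_def using ct_order_le_1 by simp

lemma ct_order_gt_1:
  assumes "1 < t"
  shows "ct_order t = Suc (ct_order (t - 1))"
proof -
  have "2 \<le> \<lceil>t\<rceil>" using assms by (metis ceiling_le_iff le_less_trans linorder_not_le of_int_1
        one_add_one of_int_add zle_add1_eq_le)
  moreover have "\<lceil>t - 1\<rceil> = \<lceil>t\<rceil> - 1" by (simp add: ceiling_diff_one)
  moreover have "2 \<le> nat \<lceil>t\<rceil>" using calculation(1) by (simp add: le_nat_iff)
  ultimately show ?thesis unfolding ct_order_def by (simp add: nat_diff_distrib')
qed

lemma ct_exponent_gt_1: "1 < t \<Longrightarrow> ct_exponent t = ct_exponent (t - 1)"
  unfolding ct_exponent_def using ct_order_gt_1 by simp

lemma le_0_if_le_eps_mult: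
  fixes X K :: real
  assumes "0 \<le> K" and "\<And>e. 0 < e \<Longrightarrow> X \<le> e * K"
  shows "X \<le> 0"
proof (rule ccontr)
  assume "\<not> X \<le> 0"
  then have X: "0 < X" by simp
  show False
  proof (cases "K = 0")
    case True
    then show False using assms(2)[of 1] X by simp
  next
    case False
    then have K: "0 < K" using assms(1) by simp
    have "X \<le> (X / (2 * K)) * K" using assms(2)[of "X / (2 * K)"] X K by simp
    also have "\<dots> = X / 2" using K by simp
    finally show False using X by simp
  qed
qed

context scale_setting
begin

definition bop_fam :: "real \<Rightarrow> real \<Rightarrow> nat \<Rightarrow> ('b, 'x) mfam \<Rightarrow> bool" where
  "bop_fam a b m F \<longleftrightarrow> (\<forall>u\<in>U. \<forall>hs. length hs = m \<longrightarrow> bop a b (F u hs))"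

definition mlin_fam :: "real \<Rightarrow> real \<Rightarrow> nat \<Rightarrow> ('b, 'x) mfam \<Rightarrow> bool" where
  "mlin_fam a b m F \<longleftrightarrow> bop_fam a b m F \<and>
     (\<forall>u\<in>U. \<forall>hs p c h h'. length hs = m \<and> p < m \<longrightarrow>
        (\<forall>x\<in>V b. F u (hs[p := c *\<^sub>R h + h']) x = c *\<^sub>R F u (hs[p := h]) x + F u (hs[p := h']) x)) \<and>
     (\<exists>C. \<forall>u\<in>U. \<forall>hs. length hs = m \<longrightarrow> opn a b (F u hs) \<le> C * nprod hs)"

definition fam_cont :: "real \<Rightarrow> real \<Rightarrow> nat \<Rightarrow> ('b, 'x) mfam \<Rightarrow> bool" where
  "fam_cont a b m F \<longleftrightarrow> (\<forall>u\<in>U. \<forall>e>0. \<exists>d>0. \<forall>v\<in>U. norm (v - u) < d \<longrightarrow>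
      (\<forall>hs. length hs = m \<longrightarrow> opn a b (\<lambda>x. F v hs x - F u hs x) \<le> e * nprod hs))"

definition fam_holder :: "real \<Rightarrow> real \<Rightarrow> nat \<Rightarrow> real \<Rightarrow> ('b, 'x) mfam \<Rightarrow> bool" where
  "fam_holder a b m \<alpha> F \<longleftrightarrow> (\<exists>C. \<forall>u\<in>U. \<forall>v\<in>U. \<forall>hs. length hs = m \<longrightarrow>
      opn a b (\<lambda>x. F u hs x - F v hs x) \<le> C * norm (u - v) powr \<alpha> * nprod hs)"

definition fam_has_deriv :: "real \<Rightarrow> real \<Rightarrow> nat \<Rightarrow> ('b, 'x) mfam \<Rightarrow> ('b, 'x) mfam \<Rightarrow> bool" where
  "fam_has_deriv a b m F G \<longleftrightarrow> (\<forall>u\<in>U. \<forall>e>0. \<exists>d>0. \<forall>h. norm h < d \<and> u + h \<in> U \<longrightarrow>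
      (\<forall>hs. length hs = m \<longrightarrow>
         opn a b (\<lambda>x. F (u + h) hs x - F u hs x - G u (h # hs) x) \<le> e * norm h * nprod hs))"

definition deriv_tower :: "real \<Rightarrow> real \<Rightarrow> nat \<Rightarrow> nat \<Rightarrow> real \<Rightarrow> (nat \<Rightarrow> ('b, 'x) mfam) \<Rightarrow> bool" where
  "deriv_tower a b m k \<alpha> D \<longleftrightarrow> (\<forall>i\<le>k. mlin_fam a b (i + m) (D i)) \<and>
     (\<forall>i<k. fam_has_deriv a b (i + m) (D i) (D (Suc i))) \<and> fam_holder a b (k + m) \<alpha> (D k)"

abbreviation fam_eq :: "real \<Rightarrow> nat \<Rightarrow> ('b, 'x) mfam \<Rightarrow> ('b, 'x) mfam \<Rightarrow> bool" where
  "fam_eq b m F F' \<equiv> (\<forall>u\<in>U. \<forall>hs. length hs = m \<longrightarrow> (\<forall>x\<in>V b. F u hs x = F' u hs x))"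

text \<open>\<open>fam_C a b m t F\<close>: the map \<open>u \<mapsto> F u\<close> into the \<open>m\<close>-linear maps with values in
  \<open>L(X\<^sub>b, X\<^sub>a)\<close> is \<open>C\<^sup>t\<close>, with derivatives bounded uniformly on \<open>U\<close> from order 0 on.\<close>

definition fam_C :: "real \<Rightarrow> real \<Rightarrow> nat \<Rightarrow> real \<Rightarrow> ('b, 'x) mfam \<Rightarrow> bool" where
  "fam_C a b m t F \<longleftrightarrow> (if t = 0 then mlin_fam a b m F \<and> fam_cont a b m F
     else \<exists>D. fam_eq b m (D 0) F \<and> deriv_tower a b m (ct_order t) (ct_exponent t) D)"

lemma bop_famD: "bop_fam a b m F \<Longrightarrow> u \<in> U \<Longrightarrow> length hs = m \<Longrightarrow> bop a b (F u hs)"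
  unfolding bop_fam_def by blast

lemma mlin_fam_bop_fam: "mlin_fam a b m F \<Longrightarrow> bop_fam a b m F"
  unfolding mlin_fam_def by (elim conjE)

lemma mlin_fam_bop: "mlin_fam a b m F \<Longrightarrow> u \<in> U \<Longrightarrow> length hs = m \<Longrightarrow> bop a b (F u hs)"
  using bop_famD[OF mlin_fam_bop_fam] by blast

lemma mlin_fam_linear:
  "mlin_fam a b m F \<Longrightarrow> u \<in> U \<Longrightarrow> length hs = m \<Longrightarrow> p < m \<Longrightarrow> x \<in> V b \<Longrightarrow>
   F u (hs[p := c *\<^sub>R h + h']) x = c *\<^sub>R F u (hs[p := h]) x + F u (hs[p := h']) x"
  unfolding mlin_fam_def by blast

lemma mlin_fam_bound:
  assumes "mlin_fam a b m F"
  obtains C where "0 \<le> C" "\<And>u hs. u \<in> U \<Longrightarrow> length hs = m \<Longrightarrow> opn a b (F u hs) \<le> C * nprod hs"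
proof -
  obtain C where C: "\<forall>u\<in>U. \<forall>hs. length hs = m \<longrightarrow> opn a b (F u hs) \<le> C * nprod hs"
    using assms unfolding mlin_fam_def by blast
  have "opn a b (F u hs) \<le> max C 0 * nprod hs" if "u \<in> U" "length hs = m" for u hs
  proof -
    have "C * nprod hs \<le> max C 0 * nprod hs"
      using nprod_nonneg[of hs] by (simp add: mult_right_mono)
    then show ?thesis using C that by fastforce
  qed
  then show ?thesis by (intro that[of "max C 0"]) simp_all
qed

lemma mlin_famI:
  assumes "\<And>u hs. u \<in> U \<Longrightarrow> length hs = m \<Longrightarrow> bop a b (F u hs)"
    and "\<And>u hs p c h h' x. u \<in> U \<Longrightarrow> length hs = m \<Longrightarrow> p < m \<Longrightarrow> x \<in> V b \<Longrightarrow>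
           F u (hs[p := c *\<^sub>R h + h']) x = c *\<^sub>R F u (hs[p := h]) x + F u (hs[p := h']) x"
    and "\<And>u hs. u \<in> U \<Longrightarrow> length hs = m \<Longrightarrow> opn a b (F u hs) \<le> C * nprod hs"
  shows "mlin_fam a b m F"
  unfolding mlin_fam_def bop_fam_def using assms by blast

lemma fam_has_derivD:
  assumes "fam_has_deriv a b m F G" "u \<in> U" "0 < e"
  obtains d where "0 < d" "\<And>h hs. norm h < d \<Longrightarrow> u + h \<in> U \<Longrightarrow> length hs = m \<Longrightarrow>
      opn a b (\<lambda>x. F (u + h) hs x - F u hs x - G u (h # hs) x) \<le> e * norm h * nprod hs"
  using assms unfolding fam_has_deriv_def by blast

lemma fam_contD:
  assumes "fam_cont a b m F" "u \<in> U" "0 < e"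
  obtains d where "0 < d" "\<And>v hs. v \<in> U \<Longrightarrow> norm (v - u) < d \<Longrightarrow> length hs = m \<Longrightarrow>
      opn a b (\<lambda>x. F v hs x - F u hs x) \<le> e * nprod hs"
  using assms unfolding fam_cont_def by blast

lemma fam_holderD:
  assumes "fam_holder a b m \<alpha> F"
  obtains C where "\<And>u v hs. u \<in> U \<Longrightarrow> v \<in> U \<Longrightarrow> length hs = m \<Longrightarrow>
      opn a b (\<lambda>x. F u hs x - F v hs x) \<le> C * norm (u - v) powr \<alpha> * nprod hs"
  using assms unfolding fam_holder_def by blast

subsection \<open>Invariance under pointwise equality on \<open>X\<^sub>b\<close>\<close>

lemma bop_fam_cong:
  assumes "level b" "fam_eq b m F F'" "bop_fam a b m F"
  shows "bop_fam a b m F'"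
  unfolding bop_fam_def
proof (intro ballI allI impI)
  fix u and hs :: "'b list" assume "u \<in> U" "length hs = m"
  then show "bop a b (F' u hs)"
    using bop_cong[OF assms(1) _ bop_famD[OF assms(3)]] assms(2) by blast
qed

lemma mlin_fam_cong:
  assumes lb: "level b" and eq: "fam_eq b m F F'" and F: "mlin_fam a b m F"
  shows "mlin_fam a b m F'"
proof -
  obtain C where C: "\<And>u hs. u \<in> U \<Longrightarrow> length hs = m \<Longrightarrow> opn a b (F u hs) \<le> C * nprod hs"
    using mlin_fam_bound[OF F] by blast
  show ?thesis
  proof (rule mlin_famI[where C = C])
    fix u and hs :: "'b list" assume u: "u \<in> U" and l: "length hs = m"
    show "bop a b (F' u hs)" using bop_famD[OF bop_fam_cong[OF lb eq mlin_fam_bop_fam[OF F]] u l] .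
    have "opn a b (F' u hs) = opn a b (F u hs)" by (rule opn_cong) (use eq u l in metis)
    then show "opn a b (F' u hs) \<le> C * nprod hs" using C u l by simp
  next
    fix u and hs :: "'b list" and p c h h' x
    assume u: "u \<in> U" and l: "length hs = m" and p: "p < m" and x: "x \<in> V b"
    have "F' u (hs[p := w]) x = F u (hs[p := w]) x" for w using eq u l x by simp
    then show "F' u (hs[p := c *\<^sub>R h + h']) x = c *\<^sub>R F' u (hs[p := h]) x + F' u (hs[p := h']) x"
      using mlin_fam_linear[OF F u l p x] by simp
  qed
qed

lemma fam_cont_cong:
  assumes eq: "fam_eq b m F F'" and F: "fam_cont a b m F"
  shows "fam_cont a b m F'"
  unfolding fam_cont_def
proof (intro ballI allI impI)
  fix u e assume u: "u \<in> U" and e: "(0::real) < e"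
  obtain d where d: "0 < d" "\<And>v hs. v \<in> U \<Longrightarrow> norm (v - u) < d \<Longrightarrow> length hs = m \<Longrightarrow>
      opn a b (\<lambda>x. F v hs x - F u hs x) \<le> e * nprod hs"
    using fam_contD[OF F u e] by blast
  have "opn a b (\<lambda>x. F' v hs x - F' u hs x) \<le> e * nprod hs"
    if "v \<in> U" "norm (v - u) < d" "length hs = m" for v hs
  proof -
    have "opn a b (\<lambda>x. F' v hs x - F' u hs x) = opn a b (\<lambda>x. F v hs x - F u hs x)"
      by (rule opn_cong) (use eq u that in simp)
    then show ?thesis using d(2)[OF that] by simp
  qed
  then show "\<exists>d>0. \<forall>v\<in>U. norm (v - u) < d \<longrightarrow>
      (\<forall>hs. length hs = m \<longrightarrow> opn a b (\<lambda>x. F' v hs x - F' u hs x) \<le> e * nprod hs)"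
    using d(1) by blast
qed

lemma fam_holder_cong:
  assumes eq: "fam_eq b m F F'" and F: "fam_holder a b m \<alpha> F"
  shows "fam_holder a b m \<alpha> F'"
proof -
  obtain C where C: "\<And>u v hs. u \<in> U \<Longrightarrow> v \<in> U \<Longrightarrow> length hs = m \<Longrightarrow>
      opn a b (\<lambda>x. F u hs x - F v hs x) \<le> C * norm (u - v) powr \<alpha> * nprod hs"
    using fam_holderD[OF F] by blast
  have "opn a b (\<lambda>x. F' u hs x - F' v hs x) \<le> C * norm (u - v) powr \<alpha> * nprod hs"
    if "u \<in> U" "v \<in> U" "length hs = m" for u v hs
  proof -
    have "opn a b (\<lambda>x. F' u hs x - F' v hs x) = opn a b (\<lambda>x. F u hs x - F v hs x)"
      by (rule opn_cong) (use eq that in simp)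
    then show ?thesis using C[OF that] by simp
  qed
  then show ?thesis unfolding fam_holder_def by blast
qed

lemma fam_has_deriv_cong:
  assumes eqF: "fam_eq b m F F'" and eqG: "fam_eq b (Suc m) G G'" and FG: "fam_has_deriv a b m F G"
  shows "fam_has_deriv a b m F' G'"
  unfolding fam_has_deriv_def
proof (intro ballI allI impI)
  fix u e assume u: "u \<in> U" and e: "(0::real) < e"
  obtain d where d: "0 < d" "\<And>h hs. norm h < d \<Longrightarrow> u + h \<in> U \<Longrightarrow> length hs = m \<Longrightarrow>
      opn a b (\<lambda>x. F (u + h) hs x - F u hs x - G u (h # hs) x) \<le> e * norm h * nprod hs"
    using fam_has_derivD[OF FG u e] by blast
  have "opn a b (\<lambda>x. F' (u + h) hs x - F' u hs x - G' u (h # hs) x) \<le> e * norm h * nprod hs"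
    if "norm h < d" "u + h \<in> U" "length hs = m" for h hs
  proof -
    have "opn a b (\<lambda>x. F' (u + h) hs x - F' u hs x - G' u (h # hs) x)
        = opn a b (\<lambda>x. F (u + h) hs x - F u hs x - G u (h # hs) x)"
      by (rule opn_cong) (use eqF eqG u that in simp)
    then show ?thesis using d(2)[OF that] by simp
  qed
  then show "\<exists>d>0. \<forall>h. norm h < d \<and> u + h \<in> U \<longrightarrow> (\<forall>hs. length hs = m \<longrightarrow>
      opn a b (\<lambda>x. F' (u + h) hs x - F' u hs x - G' u (h # hs) x) \<le> e * norm h * nprod hs)"
    using d(1) by blast
qed

lemma fam_C_cong:
  assumes lb: "level b" and eq: "fam_eq b m F F'" and F: "fam_C a b m t F"
  shows "fam_C a b m t F'"
proof (cases "t = 0")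
  case True
  then show ?thesis using F mlin_fam_cong[OF lb eq] fam_cont_cong[OF eq] unfolding fam_C_def by simp
next
  case False
  then obtain D where "fam_eq b m (D 0) F" "deriv_tower a b m (ct_order t) (ct_exponent t) D"
    using F unfolding fam_C_def by auto
  then show ?thesis unfolding fam_C_def using False eq by auto
qed

lemma fam_holder_imp_cont:
  assumes \<alpha>: "0 < \<alpha>" and F: "fam_holder a b m \<alpha> F"
  shows "fam_cont a b m F"
  unfolding fam_cont_def
proof (intro ballI allI impI)
  fix u e assume u: "u \<in> U" and e: "(0::real) < e"
  obtain C where C: "\<And>u v hs. u \<in> U \<Longrightarrow> v \<in> U \<Longrightarrow> length hs = m \<Longrightarrow>
      opn a b (\<lambda>x. F u hs x - F v hs x) \<le> C * norm (u - v) powr \<alpha> * nprod hs"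
    using fam_holderD[OF F] by blast
  define d where "d = (e / (\<bar>C\<bar> + 1)) powr (1 / \<alpha>)"
  have e': "0 < e / (\<bar>C\<bar> + 1)" using e by simp
  have "d powr \<alpha> = (e / (\<bar>C\<bar> + 1)) powr (1 / \<alpha> * \<alpha>)"
    unfolding d_def by (rule powr_powr)
  also have "\<dots> = e / (\<bar>C\<bar> + 1)" using \<alpha> e by simp
  finally have "d powr \<alpha> = e / (\<bar>C\<bar> + 1)" .
  moreover have "0 < d" unfolding d_def using e' by (metis powr_gt_zero order_less_irrefl)
  ultimately have d: "0 < d" "d powr \<alpha> = e / (\<bar>C\<bar> + 1)" by simp_all
  show "\<exists>d>0. \<forall>v\<in>U. norm (v - u) < d \<longrightarrow>
      (\<forall>hs. length hs = m \<longrightarrow> opn a b (\<lambda>x. F v hs x - F u hs x) \<le> e * nprod hs)"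
  proof (intro exI[of _ d] conjI ballI impI allI)
    fix v and hs :: "'b list" assume v: "v \<in> U" and vu: "norm (v - u) < d" and l: "length hs = m"
    have "norm (v - u) powr \<alpha> \<le> e / (\<bar>C\<bar> + 1)"
      using powr_mono2[of \<alpha> "norm (v - u)" d] vu \<alpha> d by simp
    then have "\<bar>C\<bar> * norm (v - u) powr \<alpha> \<le> \<bar>C\<bar> * (e / (\<bar>C\<bar> + 1))"
      by (rule mult_left_mono) simp
    moreover have "C * norm (v - u) powr \<alpha> \<le> \<bar>C\<bar> * norm (v - u) powr \<alpha>"
      by (rule mult_right_mono) auto
    ultimately have "C * norm (v - u) powr \<alpha> \<le> \<bar>C\<bar> * (e / (\<bar>C\<bar> + 1))" by linarith
    also have "\<dots> \<le> e" using e by (simp add: field_simps)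
    finally have "C * norm (v - u) powr \<alpha> \<le> e" .
    then have "C * norm (v - u) powr \<alpha> * nprod hs \<le> e * nprod hs"
      using nprod_nonneg[of hs] by (simp add: mult_right_mono)
    then show "opn a b (\<lambda>x. F v hs x - F u hs x) \<le> e * nprod hs" using C[OF v u l] by linarith
  qed (use d in simp)
qed

lemma fam_C_imp_mlin:
  assumes lb: "level b" and F: "fam_C a b m t F"
  shows "mlin_fam a b m F"
proof (cases "t = 0")
  case True
  then show ?thesis using F unfolding fam_C_def by simp
next
  case False
  then obtain D where eq: "fam_eq b m (D 0) F" and "deriv_tower a b m (ct_order t) (ct_exponent t) D"
    using F unfolding fam_C_def by auto
  then have "mlin_fam a b m (D 0)" unfolding deriv_tower_def by (metis add_0 le0)
  then show ?thesis by (rule mlin_fam_cong[OF lb eq])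
qed

lemma fam_C_imp_holder:
  assumes "0 < t" "t \<le> 1" "fam_C a b m t F"
  shows "fam_holder a b m t F"
proof -
  obtain D where "fam_eq b m (D 0) F" "deriv_tower a b m (ct_order t) (ct_exponent t) D"
    using assms unfolding fam_C_def by auto
  then show ?thesis
    using fam_holder_cong ct_order_le_1[OF assms(1,2)] ct_exponent_le_1[OF assms(1,2)]
    unfolding deriv_tower_def by (metis add_0)
qed

lemma fam_C_imp_cont:
  assumes "0 \<le> t" "t \<le> 1" "fam_C a b m t F"
  shows "fam_cont a b m F"
proof (cases "t = 0")
  case True
  then show ?thesis using assms(3) unfolding fam_C_def by simp
next
  case False
  then have "0 < t" using assms(1) by simp
  then show ?thesis using fam_holder_imp_cont fam_C_imp_holder assms(2,3) by blast
qed

lemma fam_C_0I: "mlin_fam a b m F \<Longrightarrow> fam_cont a b m F \<Longrightarrow> fam_C a b m 0 F"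
  unfolding fam_C_def by simp

lemma fam_C_holderI:
  assumes "0 < t" "t \<le> 1" "mlin_fam a b m F" "fam_holder a b m t F"
  shows "fam_C a b m t F"
proof -
  have "deriv_tower a b m (ct_order t) (ct_exponent t) (\<lambda>_. F)"
    unfolding deriv_tower_def using ct_order_le_1 ct_exponent_le_1 assms by simp
  then show ?thesis unfolding fam_C_def using assms(1) by auto
qed

lemma fam_C_0_if_pos:
  assumes "level b" "0 < t" "t \<le> 1" "fam_C a b m t F"
  shows "fam_C a b m 0 F"
  using fam_C_0I[OF fam_C_imp_mlin[OF assms(1,4)] fam_C_imp_cont[OF less_imp_le[OF assms(2)] assms(3,4)]] .

lemma fam_C_derivD:
  assumes lb: "level b" and t: "1 < t" and F: "fam_C a b m t F"
  obtains G where "fam_has_deriv a b m F G" "fam_C a b (Suc m) (t - 1) G" "mlin_fam a b (Suc m) G"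
proof -
  obtain D where eq: "fam_eq b m (D 0) F" and D: "deriv_tower a b m (ct_order t) (ct_exponent t) D"
    using F t unfolding fam_C_def by auto
  have k: "ct_order t = Suc (ct_order (t - 1))" "ct_exponent t = ct_exponent (t - 1)"
    using ct_order_gt_1[OF t] ct_exponent_gt_1[OF t] by auto
  have "deriv_tower a b (Suc m) (ct_order (t - 1)) (ct_exponent (t - 1)) (\<lambda>i. D (Suc i))"
    using D unfolding deriv_tower_def k by (auto simp del: One_nat_def)
  then have "fam_C a b (Suc m) (t - 1) (D 1)"
    unfolding fam_C_def using t by auto
  moreover have "fam_has_deriv a b m (D 0) (D 1)"
    using D unfolding deriv_tower_def k by (metis One_nat_def add_0 zero_less_Suc)
  then have "fam_has_deriv a b m F (D 1)"
    using fam_has_deriv_cong[OF eq, of "D 1" "D 1"] by simp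
  moreover have "mlin_fam a b (Suc m) (D 1)"
    using D unfolding deriv_tower_def k by (metis One_nat_def Suc_le_mono add_Suc le0 plus_1_eq_Suc)
  ultimately show ?thesis using that by blast
qed

lemma fam_C_derivI:
  assumes lb: "level b" and t: "1 < t" and F: "mlin_fam a b m F" and FG: "fam_has_deriv a b m F G"
    and G: "fam_C a b (Suc m) (t - 1) G"
  shows "fam_C a b m t F"
proof -
  obtain DG where eq: "fam_eq b (Suc m) (DG 0) G"
    and DG: "deriv_tower a b (Suc m) (ct_order (t - 1)) (ct_exponent (t - 1)) DG"
    using G t unfolding fam_C_def by auto
  have k: "ct_order t = Suc (ct_order (t - 1))" "ct_exponent t = ct_exponent (t - 1)"
    using ct_order_gt_1[OF t] ct_exponent_gt_1[OF t] by auto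
  define D where "D i = (if i = 0 then F else DG (i - 1))" for i
  have DF: "fam_has_deriv a b m F (DG 0)"
    by (rule fam_has_deriv_cong[OF _ _ FG]) (use eq in auto)
  have tower: "deriv_tower a b m (ct_order t) (ct_exponent t) D"
    unfolding deriv_tower_def k
  proof (intro conjI allI impI)
    fix i assume "i \<le> Suc (ct_order (t - 1))"
    then show "mlin_fam a b (i + m) (D i)"
      using F DG unfolding deriv_tower_def D_def by (cases i) auto
  next
    fix i assume "i < Suc (ct_order (t - 1))"
    then show "fam_has_deriv a b (i + m) (D i) (D (Suc i))"
      using DF DG unfolding deriv_tower_def D_def by (cases i) auto
  next
    show "fam_holder a b (Suc (ct_order (t - 1)) + m) (ct_exponent (t - 1)) (D (Suc (ct_order (t - 1))))"
      using DG unfolding deriv_tower_def D_def by simp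
  qed
  moreover have "fam_eq b m (D 0) F" by (simp add: D_def)
  moreover have "t \<noteq> 0" using t by simp
  ultimately show ?thesis unfolding fam_C_def by auto
qed

end


lemma mult_eps_div_le:
  fixes K N e :: real
  assumes "0 \<le> K" "0 \<le> N" "0 < e"
  shows "K * (e / (K + 1)) * N \<le> e * N"
proof -
  have "K * (e / (K + 1)) \<le> e" using assms by (simp add: field_simps)
  then show ?thesis using assms(2) by (rule mult_right_mono)
qed

context scale_setting
begin

lemma bop_fam_comp_left:
  "level a \<Longrightarrow> level c \<Longrightarrow> level b \<Longrightarrow> bop a c L \<Longrightarrow> bop_fam c b m F \<Longrightarrow>
   bop_fam a b m (\<lambda>u hs x. L (F u hs x))"
  unfolding bop_fam_def using bop_comp(1) by blast

lemma bop_fam_comp_right: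
  "level a \<Longrightarrow> level c \<Longrightarrow> level b \<Longrightarrow> bop c b L \<Longrightarrow> bop_fam a c m F \<Longrightarrow>
   bop_fam a b m (\<lambda>u hs x. F u hs (L x))"
  unfolding bop_fam_def using bop_comp(1) by blast

lemma mlin_fam_comp_left:
  assumes la: "level a" and lc: "level c" and lb: "level b" and L: "bop a c L" and F: "mlin_fam c b m F"
  shows "mlin_fam a b m (\<lambda>u hs x. L (F u hs x))"
proof -
  obtain C where C: "\<And>u hs. u \<in> U \<Longrightarrow> length hs = m \<Longrightarrow> opn c b (F u hs) \<le> C * nprod hs"
    using mlin_fam_bound[OF F] by blast
  show ?thesis
  proof (rule mlin_famI[where C = "opn a c L * C"])
    fix u and hs :: "'b list" assume u: "u \<in> U" and l: "length hs = m"
    show "bop a b (\<lambda>x. L (F u hs x))" using bop_comp(1)[OF la lc lb L mlin_fam_bop[OF F u l]] .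
    show "opn a b (\<lambda>x. L (F u hs x)) \<le> opn a c L * C * nprod hs"
      using opn_comp_le[OF la lc lb L mlin_fam_bop[OF F u l] order_refl C[OF u l]] by (simp add: mult.assoc)
  next
    fix u and hs :: "'b list" and p c' h h' x
    assume u: "u \<in> U" and l: "length hs = m" and p: "p < m" and x: "x \<in> V b"
    have "F u (hs[p := w]) x \<in> V c" for w using bop_in[OF mlin_fam_bop[OF F u] x] l by simp
    then show "L (F u (hs[p := c' *\<^sub>R h + h']) x) = c' *\<^sub>R L (F u (hs[p := h]) x) + L (F u (hs[p := h']) x)"
      unfolding mlin_fam_linear[OF F u l p x] using bop_add[OF L] bop_scaleR[OF L] V_scaleR[OF lc] by simp
  qed
qed

lemma mlin_fam_comp_right:
  assumes la: "level a" and lc: "level c" and lb: "level b" and L: "bop c b L" and F: "mlin_fam a c m F"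
  shows "mlin_fam a b m (\<lambda>u hs x. F u hs (L x))"
proof -
  obtain C where C: "\<And>u hs. u \<in> U \<Longrightarrow> length hs = m \<Longrightarrow> opn a c (F u hs) \<le> C * nprod hs"
    using mlin_fam_bound[OF F] by blast
  show ?thesis
  proof (rule mlin_famI[where C = "C * opn c b L"])
    fix u and hs :: "'b list" assume u: "u \<in> U" and l: "length hs = m"
    show "bop a b (\<lambda>x. F u hs (L x))" using bop_comp(1)[OF la lc lb mlin_fam_bop[OF F u l] L] .
    show "opn a b (\<lambda>x. F u hs (L x)) \<le> C * opn c b L * nprod hs"
      using opn_comp_le[OF la lc lb mlin_fam_bop[OF F u l] L C[OF u l] order_refl] by (simp add: algebra_simps)
  next
    fix u and hs :: "'b list" and p c' h h' x
    assume u: "u \<in> U" and l: "length hs = m" and p: "p < m" and x: "x \<in> V b"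
    show "F u (hs[p := c' *\<^sub>R h + h']) (L x) = c' *\<^sub>R F u (hs[p := h]) (L x) + F u (hs[p := h']) (L x)"
      using mlin_fam_linear[OF F u l p bop_in[OF L x]] .
  qed
qed

lemma fam_has_deriv_comp_left:
  assumes la: "level a" and lc: "level c" and lb: "level b" and L: "bop a c L"
    and F: "bop_fam c b m F" and G: "bop_fam c b (Suc m) G" and FG: "fam_has_deriv c b m F G"
  shows "fam_has_deriv a b m (\<lambda>u hs x. L (F u hs x)) (\<lambda>u hs x. L (G u hs x))"
  unfolding fam_has_deriv_def
proof (intro ballI allI impI)
  fix u e assume u: "u \<in> U" and e: "(0::real) < e"
  have L0: "0 \<le> opn a c L" using opn_nonneg[OF la lc L] .
  obtain d where d: "0 < d" "\<And>h hs. norm h < d \<Longrightarrow> u + h \<in> U \<Longrightarrow> length hs = m \<Longrightarrow>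
      opn c b (\<lambda>x. F (u + h) hs x - F u hs x - G u (h # hs) x) \<le> e / (opn a c L + 1) * norm h * nprod hs"
    using fam_has_derivD[OF FG u, of "e / (opn a c L + 1)"] e L0 by auto
  have "opn a b (\<lambda>x. L (F (u + h) hs x) - L (F u hs x) - L (G u (h # hs) x)) \<le> e * norm h * nprod hs"
    if h: "norm h < d" "u + h \<in> U" and l: "length hs = m" for h hs
  proof -
    define T where "T x = F (u + h) hs x - F u hs x - G u (h # hs) x" for x
    have FG_bop: "bop c b (F (u + h) hs)" "bop c b (F u hs)" "bop c b (G u (h # hs))"
      using bop_famD[OF F] bop_famD[OF G] u h l by auto
    have T: "bop c b T" unfolding T_def by (rule bop_diff3_op[OF lc lb FG_bop])
    have "opn a b (\<lambda>x. L (F (u + h) hs x) - L (F u hs x) - L (G u (h # hs) x)) = opn a b (\<lambda>x. L (T x))"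
      by (rule opn_cong)
        (use bop_in[OF FG_bop(1)] bop_in[OF FG_bop(2)] bop_in[OF FG_bop(3)] in
          \<open>simp add: T_def bop_diff[OF lc L] V_diff[OF lc]\<close>)
    also have "\<dots> \<le> opn a c L * (e / (opn a c L + 1) * norm h * nprod hs)"
      by (rule opn_comp_le[OF la lc lb L T order_refl]) (unfold T_def, rule d(2)[OF h l])
    also have "\<dots> \<le> e * (norm h * nprod hs)"
      using mult_eps_div_le[OF L0 _ e, of "norm h * nprod hs"] nprod_nonneg[of hs] by (simp add: mult.assoc)
    finally show ?thesis by (simp add: mult.assoc)
  qed
  then show "\<exists>d>0. \<forall>h. norm h < d \<and> u + h \<in> U \<longrightarrow> (\<forall>hs. length hs = m \<longrightarrow>
      opn a b (\<lambda>x. L (F (u + h) hs x) - L (F u hs x) - L (G u (h # hs) x)) \<le> e * norm h * nprod hs)"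
    using d(1) by blast
qed

lemma fam_has_deriv_comp_right:
  assumes la: "level a" and lc: "level c" and lb: "level b" and L: "bop c b L"
    and F: "bop_fam a c m F" and G: "bop_fam a c (Suc m) G" and FG: "fam_has_deriv a c m F G"
  shows "fam_has_deriv a b m (\<lambda>u hs x. F u hs (L x)) (\<lambda>u hs x. G u hs (L x))"
  unfolding fam_has_deriv_def
proof (intro ballI allI impI)
  fix u e assume u: "u \<in> U" and e: "(0::real) < e"
  have L0: "0 \<le> opn c b L" using opn_nonneg[OF lc lb L] .
  obtain d where d: "0 < d" "\<And>h hs. norm h < d \<Longrightarrow> u + h \<in> U \<Longrightarrow> length hs = m \<Longrightarrow>
      opn a c (\<lambda>x. F (u + h) hs x - F u hs x - G u (h # hs) x) \<le> e / (opn c b L + 1) * norm h * nprod hs"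
    using fam_has_derivD[OF FG u, of "e / (opn c b L + 1)"] e L0 by auto
  have "opn a b (\<lambda>x. F (u + h) hs (L x) - F u hs (L x) - G u (h # hs) (L x)) \<le> e * norm h * nprod hs"
    if h: "norm h < d" "u + h \<in> U" and l: "length hs = m" for h hs
  proof -
    define T where "T x = F (u + h) hs x - F u hs x - G u (h # hs) x" for x
    have T: "bop a c T" unfolding T_def
      by (rule bop_diff3_op[OF la lc]) (use bop_famD[OF F] bop_famD[OF G] u h l in auto)
    have "opn a b (\<lambda>x. T (L x)) \<le> (e / (opn c b L + 1) * norm h * nprod hs) * opn c b L"
      by (rule opn_comp_le[OF la lc lb T L _ order_refl]) (unfold T_def, rule d(2)[OF h l])
    also have "\<dots> \<le> e * (norm h * nprod hs)"
      using mult_eps_div_le[OF L0 _ e, of "norm h * nprod hs"] nprod_nonneg[of hs]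
      by (simp add: algebra_simps)
    finally show ?thesis by (simp add: T_def mult.assoc)
  qed
  then show "\<exists>d>0. \<forall>h. norm h < d \<and> u + h \<in> U \<longrightarrow> (\<forall>hs. length hs = m \<longrightarrow>
      opn a b (\<lambda>x. F (u + h) hs (L x) - F u hs (L x) - G u (h # hs) (L x)) \<le> e * norm h * nprod hs)"
    using d(1) by blast
qed

lemma mlin_fam_zero_slot:
  assumes G: "mlin_fam a b (Suc m) G" and u: "u \<in> U" and l: "length hs = m" and x: "x \<in> V b"
  shows "G u (0 # hs) x = 0"
proof -
  have "G u ((0 # hs)[0 := 1 *\<^sub>R 0 + 0]) x = 1 *\<^sub>R G u ((0 # hs)[0 := 0]) x + G u ((0 # hs)[0 := 0]) x"
    by (rule mlin_fam_linear[OF G u _ _ x]) (use l in simp_all)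
  then show ?thesis by simp
qed

lemma mlin_fam_scaleR_slot:
  assumes G: "mlin_fam a b (Suc m) G" and u: "u \<in> U" and l: "length hs = m" and x: "x \<in> V b"
  shows "G u ((c *\<^sub>R h) # hs) x = c *\<^sub>R G u (h # hs) x"
proof -
  have "G u ((h # hs)[0 := c *\<^sub>R h + 0]) x = c *\<^sub>R G u ((h # hs)[0 := h]) x + G u ((h # hs)[0 := 0]) x"
    by (rule mlin_fam_linear[OF G u _ _ x]) (use l in simp_all)
  then show ?thesis using mlin_fam_zero_slot[OF G u l x] by simp
qed

text \<open>Derivatives are unique because \<open>U\<close> is open: every direction \<open>h\<close> can be scaled
  down to \<open>\<tau> h\<close> with \<open>u + \<tau> h \<in> U\<close>, and both candidates are linear in that slot.\<close>

lemma fam_has_deriv_unique: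
  assumes la: "level a" and lb: "level b" and F: "bop_fam a b m F"
    and G1: "mlin_fam a b (Suc m) G1" and G2: "mlin_fam a b (Suc m) G2"
    and FG1: "fam_has_deriv a b m F G1" and FG2: "fam_has_deriv a b m F G2"
  shows "fam_eq b (Suc m) G1 G2"
proof (intro ballI allI impI)
  fix u and hs :: "'b list" and x assume u: "u \<in> U" and l: "length hs = Suc m" and x: "x \<in> V b"
  obtain h hs' where hs: "hs = h # hs'" using l by (cases hs) auto
  have l': "length hs' = m" using l hs by simp
  define \<Delta> where "\<Delta> y = G1 u (h # hs') y - G2 u (h # hs') y" for y
  have \<Delta>: "bop a b \<Delta>"
    unfolding \<Delta>_def by (rule bop_diff_op(1)[OF la lb]) (use mlin_fam_bop[OF G1 u] mlin_fam_bop[OF G2 u] l hs in auto)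
  have "opn a b \<Delta> \<le> e * (2 * norm h * nprod hs')" if e: "0 < e" for e
  proof -
    obtain d1 where d1: "0 < d1" "\<And>h hs. norm h < d1 \<Longrightarrow> u + h \<in> U \<Longrightarrow> length hs = m \<Longrightarrow>
        opn a b (\<lambda>x. F (u + h) hs x - F u hs x - G1 u (h # hs) x) \<le> e * norm h * nprod hs"
      using fam_has_derivD[OF FG1 u e] by blast
    obtain d2 where d2: "0 < d2" "\<And>h hs. norm h < d2 \<Longrightarrow> u + h \<in> U \<Longrightarrow> length hs = m \<Longrightarrow>
        opn a b (\<lambda>x. F (u + h) hs x - F u hs x - G2 u (h # hs) x) \<le> e * norm h * nprod hs"
      using fam_has_derivD[OF FG2 u e] by blast
    obtain r where r: "0 < r" "ball u r \<subseteq> U" using open_U u open_contains_ball by blast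
    define d where "d = min r (min d1 d2)"
    define N where "N = norm h + 1"
    define \<tau> where "\<tau> = d / (2 * N)"
    have d: "0 < d" "d \<le> r" "d \<le> d1" "d \<le> d2" unfolding d_def using r d1 d2 by auto
    have n: "0 < N" unfolding N_def using norm_ge_zero[of h] by linarith
    have \<tau>0: "0 < \<tau>" unfolding \<tau>_def using d(1) n by simp
    have "\<tau> * norm h \<le> \<tau> * N" using \<tau>0 unfolding N_def by simp
    also have "\<dots> = d / 2" unfolding \<tau>_def using n by simp
    also have "\<dots> < d" using d(1) by simp
    finally have \<tau>: "0 < \<tau>" "\<tau> * norm h < d" using \<tau>0 by simp_all
    define k where "k = \<tau> *\<^sub>R h"
    have k: "norm k = \<tau> * norm h" "u + k \<in> U" "norm k < d1" "norm k < d2"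
      unfolding k_def using \<tau> d r(2) by (auto simp: dist_norm)
    define A1 where "A1 y = F (u + k) hs' y - F u hs' y - G1 u (k # hs') y" for y
    define A2 where "A2 y = F (u + k) hs' y - F u hs' y - G2 u (k # hs') y" for y
    have A: "bop a b A1" "bop a b A2" unfolding A1_def A2_def
      using bop_diff3_op[OF la lb bop_famD[OF F k(2) l'] bop_famD[OF F u l']] mlin_fam_bop[OF G1 u]
        mlin_fam_bop[OF G2 u] l' by simp_all
    have "\<Delta> y = (1 / \<tau>) *\<^sub>R (A2 y - A1 y)" if "y \<in> V b" for y
      using mlin_fam_scaleR_slot[OF G1 u l' that] mlin_fam_scaleR_slot[OF G2 u l' that] \<tau>(1)
      unfolding A1_def A2_def \<Delta>_def k_def by (simp add: scaleR_diff_right)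
    then have "opn a b \<Delta> = opn a b (\<lambda>y. (1 / \<tau>) *\<^sub>R (A2 y - A1 y))" by (rule opn_cong)
    also have "\<dots> \<le> \<bar>1 / \<tau>\<bar> * opn a b (\<lambda>y. A2 y - A1 y)"
      by (rule bop_scaleR_op(2)[OF la lb bop_diff_op(1)[OF la lb A(2,1)]])
    also have "\<dots> \<le> (1 / \<tau>) * (opn a b A2 + opn a b A1)"
      using bop_diff_op(2)[OF la lb A(2,1)] \<tau>(1) by (simp add: divide_right_mono)
    also have "\<dots> \<le> (1 / \<tau>) * (2 * (e * norm k * nprod hs'))"
      using d1(2)[OF k(3,2) l'] d2(2)[OF k(4,2) l'] \<tau>(1) unfolding A1_def A2_def
      by (intro mult_left_mono) auto
    also have "\<dots> = e * (2 * norm h * nprod hs')" using \<tau>(1) k(1) by simp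
    finally show ?thesis .
  qed
  moreover have "0 \<le> 2 * norm h * nprod hs'" using nprod_nonneg[of hs'] by simp
  ultimately have "opn a b \<Delta> \<le> 0" by (rule le_0_if_le_eps_mult[rotated])
  then show "G1 u hs x = G2 u hs x"
    using opn_le_0_imp_zero[OF la lb \<Delta> _ x] unfolding \<Delta>_def hs by simp
qed

lemma mlin_fam_add:
  assumes la: "level a" and lb: "level b" and F: "mlin_fam a b m F" and G: "mlin_fam a b m G"
  shows "mlin_fam a b m (\<lambda>u hs x. F u hs x + G u hs x)"
proof -
  obtain C1 where C1: "\<And>u hs. u \<in> U \<Longrightarrow> length hs = m \<Longrightarrow> opn a b (F u hs) \<le> C1 * nprod hs"
    using mlin_fam_bound[OF F] by blast
  obtain C2 where C2: "\<And>u hs. u \<in> U \<Longrightarrow> length hs = m \<Longrightarrow> opn a b (G u hs) \<le> C2 * nprod hs"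
    using mlin_fam_bound[OF G] by blast
  show ?thesis
  proof (rule mlin_famI[where C = "C1 + C2"])
    fix u and hs :: "'b list" assume u: "u \<in> U" and l: "length hs = m"
    show "bop a b (\<lambda>x. F u hs x + G u hs x)"
      by (rule bop_add_op(1)[OF la lb mlin_fam_bop[OF F u l] mlin_fam_bop[OF G u l]])
    show "opn a b (\<lambda>x. F u hs x + G u hs x) \<le> (C1 + C2) * nprod hs"
      using opn_add_le[OF la lb mlin_fam_bop[OF F u l] mlin_fam_bop[OF G u l] C1[OF u l] C2[OF u l]]
      by (simp add: algebra_simps)
  next
    fix u and hs :: "'b list" and p c h h' x
    assume u: "u \<in> U" and l: "length hs = m" and p: "p < m" and x: "x \<in> V b"
    show "F u (hs[p := c *\<^sub>R h + h']) x + G u (hs[p := c *\<^sub>R h + h']) x =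
          c *\<^sub>R (F u (hs[p := h]) x + G u (hs[p := h]) x) + (F u (hs[p := h']) x + G u (hs[p := h']) x)"
      unfolding mlin_fam_linear[OF F u l p x] mlin_fam_linear[OF G u l p x] by (simp add: algebra_simps)
  qed
qed

lemma fam_cont_add:
  assumes la: "level a" and lb: "level b" and BF: "bop_fam a b m F" and BG: "bop_fam a b m G"
    and F: "fam_cont a b m F" and G: "fam_cont a b m G"
  shows "fam_cont a b m (\<lambda>u hs x. F u hs x + G u hs x)"
  unfolding fam_cont_def
proof (intro ballI allI impI)
  fix u e assume u: "u \<in> U" and e: "(0::real) < e"
  obtain d1 where d1: "0 < d1" "\<And>v hs. v \<in> U \<Longrightarrow> norm (v - u) < d1 \<Longrightarrow> length hs = m \<Longrightarrow>
      opn a b (\<lambda>x. F v hs x - F u hs x) \<le> e / 2 * nprod hs"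
    using fam_contD[OF F u, of "e / 2"] e by auto
  obtain d2 where d2: "0 < d2" "\<And>v hs. v \<in> U \<Longrightarrow> norm (v - u) < d2 \<Longrightarrow> length hs = m \<Longrightarrow>
      opn a b (\<lambda>x. G v hs x - G u hs x) \<le> e / 2 * nprod hs"
    using fam_contD[OF G u, of "e / 2"] e by auto
  have "opn a b (\<lambda>x. F v hs x + G v hs x - (F u hs x + G u hs x)) \<le> e * nprod hs"
    if v: "v \<in> U" "norm (v - u) < min d1 d2" and l: "length hs = m" for v hs
    using opn_add_le[OF la lb bop_diff_op(1)[OF la lb bop_famD[OF BF v(1) l] bop_famD[OF BF u l]]
        bop_diff_op(1)[OF la lb bop_famD[OF BG v(1) l] bop_famD[OF BG u l]]
        d1(2)[OF v(1) _ l] d2(2)[OF v(1) _ l]] v(2)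
    by (simp add: algebra_simps)
  then show "\<exists>d>0. \<forall>v\<in>U. norm (v - u) < d \<longrightarrow> (\<forall>hs. length hs = m \<longrightarrow>
      opn a b (\<lambda>x. F v hs x + G v hs x - (F u hs x + G u hs x)) \<le> e * nprod hs)"
    using d1(1) d2(1) by (intro exI[of _ "min d1 d2"]) auto
qed

lemma fam_holder_add:
  assumes la: "level a" and lb: "level b" and BF: "bop_fam a b m F" and BG: "bop_fam a b m G"
    and F: "fam_holder a b m \<alpha> F" and G: "fam_holder a b m \<alpha> G"
  shows "fam_holder a b m \<alpha> (\<lambda>u hs x. F u hs x + G u hs x)"
proof -
  obtain C1 where C1: "\<And>u v hs. u \<in> U \<Longrightarrow> v \<in> U \<Longrightarrow> length hs = m \<Longrightarrow>
      opn a b (\<lambda>x. F u hs x - F v hs x) \<le> C1 * norm (u - v) powr \<alpha> * nprod hs"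
    using fam_holderD[OF F] by blast
  obtain C2 where C2: "\<And>u v hs. u \<in> U \<Longrightarrow> v \<in> U \<Longrightarrow> length hs = m \<Longrightarrow>
      opn a b (\<lambda>x. G u hs x - G v hs x) \<le> C2 * norm (u - v) powr \<alpha> * nprod hs"
    using fam_holderD[OF G] by blast
  have "opn a b (\<lambda>x. F u hs x + G u hs x - (F v hs x + G v hs x)) \<le> (C1 + C2) * norm (u - v) powr \<alpha> * nprod hs"
    if u: "u \<in> U" and v: "v \<in> U" and l: "length hs = m" for u v hs
    using opn_add_le[OF la lb bop_diff_op(1)[OF la lb bop_famD[OF BF u l] bop_famD[OF BF v l]]
        bop_diff_op(1)[OF la lb bop_famD[OF BG u l] bop_famD[OF BG v l]] C1[OF u v l] C2[OF u v l]]
    by (simp add: algebra_simps)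
  then show ?thesis unfolding fam_holder_def by blast
qed

lemma fam_has_deriv_add:
  assumes la: "level a" and lb: "level b" and BF: "bop_fam a b m F" and BG: "bop_fam a b m G"
    and BF': "bop_fam a b (Suc m) F'" and BG': "bop_fam a b (Suc m) G'"
    and F: "fam_has_deriv a b m F F'" and G: "fam_has_deriv a b m G G'"
  shows "fam_has_deriv a b m (\<lambda>u hs x. F u hs x + G u hs x) (\<lambda>u hs x. F' u hs x + G' u hs x)"
  unfolding fam_has_deriv_def
proof (intro ballI allI impI)
  fix u e assume u: "u \<in> U" and e: "(0::real) < e"
  obtain d1 where d1: "0 < d1" "\<And>h hs. norm h < d1 \<Longrightarrow> u + h \<in> U \<Longrightarrow> length hs = m \<Longrightarrow>
      opn a b (\<lambda>x. F (u + h) hs x - F u hs x - F' u (h # hs) x) \<le> e / 2 * norm h * nprod hs"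
    using fam_has_derivD[OF F u, of "e / 2"] e by auto
  obtain d2 where d2: "0 < d2" "\<And>h hs. norm h < d2 \<Longrightarrow> u + h \<in> U \<Longrightarrow> length hs = m \<Longrightarrow>
      opn a b (\<lambda>x. G (u + h) hs x - G u hs x - G' u (h # hs) x) \<le> e / 2 * norm h * nprod hs"
    using fam_has_derivD[OF G u, of "e / 2"] e by auto
  have "opn a b (\<lambda>x. F (u + h) hs x + G (u + h) hs x - (F u hs x + G u hs x) - (F' u (h # hs) x + G' u (h # hs) x))
      \<le> e * norm h * nprod hs"
    if h: "norm h < min d1 d2" "u + h \<in> U" and l: "length hs = m" for h hs
  proof -
    have l': "length (h # hs) = Suc m" using l by simp
    show ?thesis
      using opn_add_le[OF la lb
          bop_diff3_op[OF la lb bop_famD[OF BF h(2) l] bop_famD[OF BF u l] bop_famD[OF BF' u l']]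
          bop_diff3_op[OF la lb bop_famD[OF BG h(2) l] bop_famD[OF BG u l] bop_famD[OF BG' u l']]
          d1(2)[OF _ h(2) l] d2(2)[OF _ h(2) l]] h(1)
      by (simp add: algebra_simps)
  qed
  then show "\<exists>d>0. \<forall>h. norm h < d \<and> u + h \<in> U \<longrightarrow> (\<forall>hs. length hs = m \<longrightarrow>
      opn a b (\<lambda>x. F (u + h) hs x + G (u + h) hs x - (F u hs x + G u hs x) - (F' u (h # hs) x + G' u (h # hs) x))
        \<le> e * norm h * nprod hs)"
    using d1(1) d2(1) by (intro exI[of _ "min d1 d2"]) auto
qed

lemma fam_C_add:
  assumes la: "level a" and lb: "level b" and F: "fam_C a b m t F" and G: "fam_C a b m t G"
  shows "fam_C a b m t (\<lambda>u hs x. F u hs x + G u hs x)"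
proof (cases "t = 0")
  case True
  then show ?thesis
    using F G mlin_fam_add[OF la lb] fam_cont_add[OF la lb] mlin_fam_bop_fam unfolding fam_C_def by simp
next
  case False
  obtain D1 where eq1: "fam_eq b m (D1 0) F" and D1: "deriv_tower a b m (ct_order t) (ct_exponent t) D1"
    using F False unfolding fam_C_def by auto
  obtain D2 where eq2: "fam_eq b m (D2 0) G" and D2: "deriv_tower a b m (ct_order t) (ct_exponent t) D2"
    using G False unfolding fam_C_def by auto
  define D where "D i u hs x = D1 i u hs x + D2 i u hs x" for i u hs x
  have M: "mlin_fam a b (i + m) (D1 i)" "mlin_fam a b (i + m) (D2 i)" if "i \<le> ct_order t" for i
    using D1 D2 that unfolding deriv_tower_def by auto
  have "deriv_tower a b m (ct_order t) (ct_exponent t) D"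
    unfolding deriv_tower_def
  proof (intro conjI allI impI)
    fix i assume "i \<le> ct_order t"
    then show "mlin_fam a b (i + m) (D i)" unfolding D_def using M mlin_fam_add[OF la lb] by blast
  next
    fix i assume i: "i < ct_order t"
    then have "fam_has_deriv a b (i + m) (D1 i) (D1 (Suc i))" "fam_has_deriv a b (i + m) (D2 i) (D2 (Suc i))"
      using D1 D2 unfolding deriv_tower_def by auto
    then show "fam_has_deriv a b (i + m) (D i) (D (Suc i))"
      unfolding D_def using fam_has_deriv_add[OF la lb] M[of i] M[of "Suc i"] i mlin_fam_bop_fam by simp
  next
    show "fam_holder a b (ct_order t + m) (ct_exponent t) (D (ct_order t))"
      unfolding D_def using D1 D2 M[of "ct_order t"] fam_holder_add[OF la lb] mlin_fam_bop_fam
      unfolding deriv_tower_def by blast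
  qed
  moreover have "fam_eq b m (D 0) (\<lambda>u hs x. F u hs x + G u hs x)" unfolding D_def using eq1 eq2 by simp
  ultimately show ?thesis unfolding fam_C_def using False by auto
qed

end


lemma C_t_pos_iff:
  "t \<noteq> 0 \<Longrightarrow> C_t V nrm a b U t F \<longleftrightarrow> C_k_alpha V nrm a b U (ct_order t) (ct_exponent t) F"
  unfolding C_t_def ct_order_def ct_exponent_def by simp

context scale_setting
begin

lemma mlin_fam_bound_ex:
  "mlin_fam a b m F \<Longrightarrow> \<exists>C. \<forall>u\<in>U. \<forall>hs. length hs = m \<longrightarrow> opn a b (F u hs) \<le> C * nprod hs"
  unfolding mlin_fam_def by (elim conjE)

lemma C_k_alpha_tower:
  fixes F :: "'b \<Rightarrow> 'x \<Rightarrow> 'x"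
  assumes "C_k_alpha V nrm a b U k \<alpha> F"
  shows "\<exists>D :: nat \<Rightarrow> ('b, 'x) mfam. (\<forall>u\<in>U. \<forall>x\<in>V b. D 0 u [] x = F u x) \<and>
    (\<forall>i. 1 \<le> i \<and> i \<le> k \<longrightarrow> mlin_fam a b i (D i)) \<and>
    (\<forall>i<k. fam_has_deriv a b i (D i) (D (Suc i))) \<and> fam_holder a b k \<alpha> (D k)"
proof -
  obtain D :: "nat \<Rightarrow> ('b, 'x) mfam" where
    D0: "\<forall>u\<in>U. \<forall>x\<in>V b. D 0 u [] x = F u x" and
    bop: "\<forall>i\<le>k. \<forall>u\<in>U. \<forall>hs. length hs = i \<longrightarrow> bop a b (D i u hs)" and
    lin: "\<forall>i\<le>k. \<forall>u\<in>U. \<forall>hs p c h h'. length hs = i \<and> p < i \<longrightarrow>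
          (\<forall>x\<in>V b. D i u (hs[p := c *\<^sub>R h + h']) x = c *\<^sub>R D i u (hs[p := h]) x + D i u (hs[p := h']) x)" and
    "\<forall>i\<le>k. \<forall>u\<in>U. \<exists>C. \<forall>hs. length hs = i \<longrightarrow> opn a b (D i u hs) \<le> C * nprod hs" and
    der: "\<forall>i<k. \<forall>u\<in>U. \<forall>e>0. \<exists>d>0. \<forall>h. norm h < d \<and> u + h \<in> U \<longrightarrow>
          (\<forall>hs. length hs = i \<longrightarrow>
             opn a b (\<lambda>x. D i (u + h) hs x - D i u hs x - D (Suc i) u (h # hs) x) \<le> e * norm h * nprod hs)" and
    bnd: "\<forall>i. 1 \<le> i \<and> i \<le> k \<longrightarrow> (\<exists>C. \<forall>u\<in>U. \<forall>hs. length hs = i \<longrightarrow> opn a b (D i u hs) \<le> C * nprod hs)" and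
    hol: "\<exists>C. \<forall>u\<in>U. \<forall>v\<in>U. \<forall>hs. length hs = k \<longrightarrow>
          opn a b (\<lambda>x. D k u hs x - D k v hs x) \<le> C * norm (u - v) powr \<alpha> * nprod hs"
    using assms unfolding C_k_alpha_def by (elim exE conjE) blast
  have "mlin_fam a b i (D i)" if i: "1 \<le> i" "i \<le> k" for i
  proof -
    obtain C where "\<forall>u\<in>U. \<forall>hs. length hs = i \<longrightarrow> opn a b (D i u hs) \<le> C * nprod hs"
      using bnd i by blast
    then show ?thesis using bop lin i by (intro mlin_famI[where C = C]) simp_all
  qed
  moreover have "fam_has_deriv a b i (D i) (D (Suc i))" if "i < k" for i
    unfolding fam_has_deriv_def using der that by simp
  moreover have "fam_holder a b k \<alpha> (D k)" unfolding fam_holder_def using hol .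
  ultimately show ?thesis using D0 by blast
qed

lemma C_t_imp_holder:
  fixes F :: "'b \<Rightarrow> 'x \<Rightarrow> 'x"
  assumes t: "0 < t" "t \<le> 1" and F: "C_t V nrm a b U t F"
  shows "fam_holder a b 0 t (\<lambda>u hs. F u)"
proof -
  have Ck: "C_k_alpha V nrm a b U 0 t F"
    using F ct_order_le_1[OF t] ct_exponent_le_1[OF t] t(1) by (simp add: C_t_pos_iff)
  obtain D :: "nat \<Rightarrow> ('b, 'x) mfam" where
    D0: "\<forall>u\<in>U. \<forall>x\<in>V b. D 0 u [] x = F u x" and hol: "fam_holder a b 0 t (D 0)"
    using C_k_alpha_tower[OF Ck] by blast
  have "fam_eq b 0 (D 0) (\<lambda>u hs. F u)" using D0 by simp
  then show ?thesis by (rule fam_holder_cong[OF _ hol])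
qed

lemma C_t_imp_deriv:
  fixes F :: "'b \<Rightarrow> 'x \<Rightarrow> 'x"
  assumes t: "1 < t" and F: "C_t V nrm a b U t F"
  obtains G where "fam_has_deriv a b 0 (\<lambda>u hs. F u) G" "fam_C a b 1 (t - 1) G" "mlin_fam a b 1 G"
proof -
  have k: "ct_order t = Suc (ct_order (t - 1))" "ct_exponent t = ct_exponent (t - 1)"
    using ct_order_gt_1[OF t] ct_exponent_gt_1[OF t] by auto
  have Ck: "C_k_alpha V nrm a b U (ct_order t) (ct_exponent t) F"
    using F t by (simp add: C_t_pos_iff)
  obtain D :: "nat \<Rightarrow> ('b, 'x) mfam" where
    D0: "\<forall>u\<in>U. \<forall>x\<in>V b. D 0 u [] x = F u x" and
    lin: "\<forall>i. 1 \<le> i \<and> i \<le> ct_order t \<longrightarrow> mlin_fam a b i (D i)" and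
    der: "\<forall>i<ct_order t. fam_has_deriv a b i (D i) (D (Suc i))" and
    hol: "fam_holder a b (ct_order t) (ct_exponent t) (D (ct_order t))"
    using C_k_alpha_tower[OF Ck] by blast
  have "deriv_tower a b 1 (ct_order (t - 1)) (ct_exponent (t - 1)) (\<lambda>i. D (Suc i))"
    unfolding deriv_tower_def using lin der hol unfolding k by simp
  then have "fam_C a b 1 (t - 1) (D 1)" unfolding fam_C_def using t by auto
  moreover have "fam_has_deriv a b 0 (\<lambda>u hs. F u) (D 1)"
    by (rule fam_has_deriv_cong[OF _ _ der[rule_format, of 0]]) (use D0 k in simp_all)
  moreover have "mlin_fam a b 1 (D 1)" using lin k by simp
  ultimately show ?thesis using that by blast
qed

lemma fam_C_imp_C_t:
  assumes lb: "level b" and t: "0 \<le> t" and F: "fam_C a b 0 t F"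
  shows "C_t V nrm a b U t (\<lambda>u. F u [])"
proof (cases "t = 0")
  case True
  have cont: "fam_cont a b 0 F" using F True unfolding fam_C_def by simp
  show ?thesis unfolding C_t_def if_P[OF True]
  proof (intro ballI allI impI)
    fix u e assume u: "u \<in> U" and e: "(0::real) < e"
    obtain d where d: "0 < d" "\<And>v hs. v \<in> U \<Longrightarrow> norm (v - u) < d \<Longrightarrow> length hs = 0 \<Longrightarrow>
        opn a b (\<lambda>x. F v hs x - F u hs x) \<le> e / 2 * nprod hs"
      using fam_contD[OF cont u, of "e / 2"] e by auto
    have "opn a b (\<lambda>x. F v [] x - F u [] x) < e" if "v \<in> U" "norm (v - u) < d" for v
      using d(2)[OF that, of "[]"] e by simp
    then show "\<exists>d>0. \<forall>v\<in>U. norm (v - u) < d \<longrightarrow> opn a b (\<lambda>x. F v [] x - F u [] x) < e"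
      using d(1) by blast
  qed
next
  case False
  obtain D where D0: "fam_eq b 0 (D 0) F" and D: "deriv_tower a b 0 (ct_order t) (ct_exponent t) D"
    using F False unfolding fam_C_def by auto
  have lin: "mlin_fam a b i (D i)" if "i \<le> ct_order t" for i
    using D that unfolding deriv_tower_def by simp
  have der: "\<forall>i<ct_order t. fam_has_deriv a b i (D i) (D (Suc i))"
    and hol: "fam_holder a b (ct_order t) (ct_exponent t) (D (ct_order t))"
    using D unfolding deriv_tower_def by simp_all
  have "C_k_alpha V nrm a b U (ct_order t) (ct_exponent t) (\<lambda>u. F u [])"
    unfolding C_k_alpha_def
  proof (intro exI[of _ D] conjI)
    show "\<forall>u\<in>U. \<forall>x\<in>V b. D 0 u [] x = F u [] x" using D0 by simp
    show "\<forall>i\<le>ct_order t. \<forall>u\<in>U. \<forall>hs. length hs = i \<longrightarrow> bop a b (D i u hs)"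
      unfolding bop_fam_def[symmetric] using mlin_fam_bop_fam[OF lin] by blast
    show "\<forall>i\<le>ct_order t. \<forall>u\<in>U. \<forall>hs p c h h'. length hs = i \<and> p < i \<longrightarrow>
        (\<forall>x\<in>V b. D i u (hs[p := c *\<^sub>R h + h']) x = c *\<^sub>R D i u (hs[p := h]) x + D i u (hs[p := h']) x)"
      using mlin_fam_linear[OF lin] by blast
    show "\<forall>i\<le>ct_order t. \<forall>u\<in>U. \<exists>C. \<forall>hs. length hs = i \<longrightarrow> opn a b (D i u hs) \<le> C * nprod hs"
      using mlin_fam_bound_ex[OF lin] by blast
    show "\<forall>i. 1 \<le> i \<and> i \<le> ct_order t \<longrightarrow>
        (\<exists>C. \<forall>u\<in>U. \<forall>hs. length hs = i \<longrightarrow> opn a b (D i u hs) \<le> C * nprod hs)"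
      using mlin_fam_bound_ex[OF lin] by blast
    show "\<forall>i<ct_order t. \<forall>u\<in>U. \<forall>e>0. \<exists>d>0. \<forall>h. norm h < d \<and> u + h \<in> U \<longrightarrow>
        (\<forall>hs. length hs = i \<longrightarrow>
           opn a b (\<lambda>x. D i (u + h) hs x - D i u hs x - D (Suc i) u (h # hs) x) \<le> e * norm h * nprod hs)"
      unfolding fam_has_deriv_def[symmetric] by (rule der)
    show "\<exists>C. \<forall>u\<in>U. \<forall>v\<in>U. \<forall>hs. length hs = ct_order t \<longrightarrow>
        opn a b (\<lambda>x. D (ct_order t) u hs x - D (ct_order t) v hs x)
          \<le> C * norm (u - v) powr ct_exponent t * nprod hs"
      unfolding fam_holder_def[symmetric] by (rule hol)
  qed
  then show ?thesis using False by (simp add: C_t_pos_iff)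
qed

end


definition marked :: "bool list \<Rightarrow> 'a list \<Rightarrow> 'a list" where
  "marked ms xs = map fst (filter snd (zip xs ms))"

definition unmarked :: "bool list \<Rightarrow> 'a list \<Rightarrow> 'a list" where
  "unmarked ms xs = map fst (filter (Not \<circ> snd) (zip xs ms))"

abbreviation nmarked :: "bool list \<Rightarrow> nat" where
  "nmarked ms \<equiv> length (filter (\<lambda>b. b) ms)"

abbreviation nunmarked :: "bool list \<Rightarrow> nat" where
  "nunmarked ms \<equiv> length (filter Not ms)"

lemma marked_simps [simp]:
  "marked [] xs = []" "marked ms [] = []"
  "marked (True # ms) (x # xs) = x # marked ms xs" "marked (False # ms) (x # xs) = marked ms xs"
  unfolding marked_def by auto

lemma unmarked_simps [simp]:
  "unmarked [] xs = []" "unmarked ms [] = []"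
  "unmarked (True # ms) (x # xs) = unmarked ms xs" "unmarked (False # ms) (x # xs) = x # unmarked ms xs"
  unfolding unmarked_def by auto

lemma nmarked_add_nunmarked: "nmarked ms + nunmarked ms = length ms"
  by (induction ms) auto

lemma length_marked:
  "length xs = length ms \<Longrightarrow> length (marked ms xs) = nmarked ms \<and> length (unmarked ms xs) = nunmarked ms"
  by (induction xs ms rule: list_induct2) (auto split: bool.split)

lemma nprod_marked:
  "length xs = length ms \<Longrightarrow> nprod xs = nprod (marked ms xs) * nprod (unmarked ms xs)"
proof (induction xs ms rule: list_induct2)
  case (Cons x xs m ms)
  then show ?case by (cases m) auto
qed simp

lemma marked_update:
  "length xs = length ms \<Longrightarrow> p < length ms \<Longrightarrow> ms ! p \<Longrightarrow>
   marked ms (xs[p := v]) = (marked ms xs)[nmarked (take p ms) := v] \<and>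
   unmarked ms (xs[p := v]) = unmarked ms xs \<and> nmarked (take p ms) < nmarked ms"
proof (induction xs ms arbitrary: p rule: list_induct2)
  case (Cons x xs m ms)
  then show ?case by (cases p; cases m) auto
qed simp

lemma unmarked_update:
  "length xs = length ms \<Longrightarrow> p < length ms \<Longrightarrow> \<not> ms ! p \<Longrightarrow>
   unmarked ms (xs[p := v]) = (unmarked ms xs)[nunmarked (take p ms) := v] \<and>
   marked ms (xs[p := v]) = marked ms xs \<and> nunmarked (take p ms) < nunmarked ms"
proof (induction xs ms arbitrary: p rule: list_induct2)
  case (Cons x xs m ms)
  then show ?case by (cases p; cases m) auto
qed simp

text \<open>The product of an \<open>m\<^sub>1\<close>-linear and an \<open>m\<^sub>2\<close>-linear family; the list \<open>ms\<close> says which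
  of the \<open>m\<^sub>1 + m\<^sub>2\<close> slots go to the left factor, so that all slot orders arising from the
  Leibniz rule are covered.\<close>

definition mprod :: "bool list \<Rightarrow> ('b, 'x) mfam \<Rightarrow> ('b, 'x) mfam \<Rightarrow> ('b, 'x) mfam" where
  "mprod ms A B u gs x = A u (marked ms gs) (B u (unmarked ms gs) x)"

lemma length_marked_split:
  assumes "length ms = m1 + m2" "nmarked ms = m1" "length gs = m1 + m2"
  shows "length (marked ms gs) = m1" "length (unmarked ms gs) = m2"
  using length_marked[of gs ms] nmarked_add_nunmarked[of ms] assms by auto

context scale_setting
begin

lemma mlin_fam_mprod:
  assumes la: "level a" and lc: "level c" and lb: "level b"
    and A: "mlin_fam a c m1 A" and B: "mlin_fam c b m2 B"
    and ms: "length ms = m1 + m2" "nmarked ms = m1"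
  shows "mlin_fam a b (m1 + m2) (mprod ms A B)"
proof -
  obtain CA where CA: "0 \<le> CA" "\<And>u hs. u \<in> U \<Longrightarrow> length hs = m1 \<Longrightarrow> opn a c (A u hs) \<le> CA * nprod hs"
    using mlin_fam_bound[OF A] by blast
  obtain CB where CB: "\<And>u hs. u \<in> U \<Longrightarrow> length hs = m2 \<Longrightarrow> opn c b (B u hs) \<le> CB * nprod hs"
    using mlin_fam_bound[OF B] by blast
  note L = length_marked_split[OF ms]
  show ?thesis
  proof (rule mlin_famI[where C = "CA * CB"])
    fix u and hs :: "'b list" assume u: "u \<in> U" and l: "length hs = m1 + m2"
    note bA = mlin_fam_bop[OF A u L(1)[OF l]] and bB = mlin_fam_bop[OF B u L(2)[OF l]]
    show "bop a b (mprod ms A B u hs)" unfolding mprod_def using bop_comp(1)[OF la lc lb bA bB] .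
    have "opn a b (mprod ms A B u hs) \<le> (CA * nprod (marked ms hs)) * (CB * nprod (unmarked ms hs))"
      unfolding mprod_def by (rule opn_comp_le[OF la lc lb bA bB CA(2)[OF u L(1)[OF l]] CB[OF u L(2)[OF l]]])
    then show "opn a b (mprod ms A B u hs) \<le> CA * CB * nprod hs"
      using nprod_marked[of hs ms] l ms by (simp add: algebra_simps)
  next
    fix u and hs :: "'b list" and p c' h h' x
    assume u: "u \<in> U" and l: "length hs = m1 + m2" and p: "p < m1 + m2" and x: "x \<in> V b"
    have l': "length hs = length ms" using l ms by simp
    show "mprod ms A B u (hs[p := c' *\<^sub>R h + h']) x =
        c' *\<^sub>R mprod ms A B u (hs[p := h]) x + mprod ms A B u (hs[p := h']) x"
      unfolding mprod_def
    proof (cases "ms ! p")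
      case True
      note upd = marked_update[OF l' _ True] p ms
      have "B u (unmarked ms hs) x \<in> V c" using bop_in[OF mlin_fam_bop[OF B u L(2)[OF l]] x] .
      then show "A u (marked ms (hs[p := c' *\<^sub>R h + h'])) (B u (unmarked ms (hs[p := c' *\<^sub>R h + h'])) x) =
          c' *\<^sub>R A u (marked ms (hs[p := h])) (B u (unmarked ms (hs[p := h])) x) +
          A u (marked ms (hs[p := h'])) (B u (unmarked ms (hs[p := h'])) x)"
        using upd mlin_fam_linear[OF A u L(1)[OF l]] by auto
    next
      case False
      note upd = unmarked_update[OF l' _ False] p ms
      have q: "nunmarked (take p ms) < m2" using upd ms nmarked_add_nunmarked[of ms] by auto
      note bA = mlin_fam_bop[OF A u L(1)[OF l]]
      have y: "B u ((unmarked ms hs)[nunmarked (take p ms) := w]) x \<in> V c" for w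
        using bop_in[OF mlin_fam_bop[OF B u] x] L(2)[OF l] by simp
      show "A u (marked ms (hs[p := c' *\<^sub>R h + h'])) (B u (unmarked ms (hs[p := c' *\<^sub>R h + h'])) x) =
          c' *\<^sub>R A u (marked ms (hs[p := h])) (B u (unmarked ms (hs[p := h])) x) +
          A u (marked ms (hs[p := h'])) (B u (unmarked ms (hs[p := h'])) x)"
        using upd mlin_fam_linear[OF B u L(2)[OF l] q x] bop_add[OF bA V_scaleR[OF lc y] y] bop_scaleR[OF bA y]
        by auto
    qed
  qed
qed

end


lemma mult_eps_le:
  fixes K e :: real
  assumes "0 \<le> K" "0 < e"
  shows "K * (e / (K + 1)) \<le> e"
  using assms by (simp add: field_simps)

context scale_setting
begin

lemma fam_cont_mprod:
  assumes la: "level a" and lc: "level c" and lb: "level b"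
    and A: "mlin_fam a c m1 A" and B: "mlin_fam c b m2 B"
    and CA: "fam_cont a c m1 A" and CB: "fam_cont c b m2 B"
    and ms: "length ms = m1 + m2" "nmarked ms = m1"
  shows "fam_cont a b (m1 + m2) (mprod ms A B)"
  unfolding fam_cont_def
proof (intro ballI allI impI)
  fix u e assume u: "u \<in> U" and e: "(0::real) < e"
  obtain KA where KA: "0 \<le> KA" "\<And>u hs. u \<in> U \<Longrightarrow> length hs = m1 \<Longrightarrow> opn a c (A u hs) \<le> KA * nprod hs"
    using mlin_fam_bound[OF A] by blast
  obtain KB where KB: "0 \<le> KB" "\<And>u hs. u \<in> U \<Longrightarrow> length hs = m2 \<Longrightarrow> opn c b (B u hs) \<le> KB * nprod hs"
    using mlin_fam_bound[OF B] by blast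
  define e1 where "e1 = e / 2 / (KB + 1)"
  define e2 where "e2 = e / 2 / (KA + 1)"
  obtain d1 where d1: "0 < d1" "\<And>v hs. v \<in> U \<Longrightarrow> norm (v - u) < d1 \<Longrightarrow> length hs = m1 \<Longrightarrow>
      opn a c (\<lambda>x. A v hs x - A u hs x) \<le> e1 * nprod hs"
    using fam_contD[OF CA u, of e1] e KB(1) unfolding e1_def by auto
  obtain d2 where d2: "0 < d2" "\<And>v hs. v \<in> U \<Longrightarrow> norm (v - u) < d2 \<Longrightarrow> length hs = m2 \<Longrightarrow>
      opn c b (\<lambda>x. B v hs x - B u hs x) \<le> e2 * nprod hs"
    using fam_contD[OF CB u, of e2] e KA(1) unfolding e2_def by auto
  have "opn a b (\<lambda>x. mprod ms A B v hs x - mprod ms A B u hs x) \<le> e * nprod hs"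
    if v: "v \<in> U" "norm (v - u) < min d1 d2" and l: "length hs = m1 + m2" for v hs
  proof -
    define g1 where "g1 = marked ms hs"
    define g2 where "g2 = unmarked ms hs"
    have g: "length g1 = m1" "length g2 = m2" unfolding g1_def g2_def using length_marked_split[OF ms l] by auto
    have bA: "bop a c (A v g1)" "bop a c (A u g1)" and bB: "bop c b (B v g2)" "bop c b (B u g2)"
      using mlin_fam_bop[OF A _ g(1)] mlin_fam_bop[OF B _ g(2)] u v by auto
    have "opn a b (\<lambda>x. mprod ms A B v hs x - mprod ms A B u hs x)
        \<le> (e1 * nprod g1) * (KB * nprod g2) + (KA * nprod g1) * (e2 * nprod g2)"
    proof (rule opn_sum2_le[OF la lc lc lb bop_diff_op(1)[OF la lc bA] bB(1) bA(2) bop_diff_op(1)[OF lc lb bB]])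
      show "opn a c (\<lambda>y. A v g1 y - A u g1 y) \<le> e1 * nprod g1" using d1(2)[OF v(1) _ g(1)] v(2) by simp
      show "opn c b (B v g2) \<le> KB * nprod g2" using KB(2)[OF v(1) g(2)] .
      show "opn a c (A u g1) \<le> KA * nprod g1" using KA(2)[OF u g(1)] .
      show "opn c b (\<lambda>y. B v g2 y - B u g2 y) \<le> e2 * nprod g2" using d2(2)[OF v(1) _ g(2)] v(2) by simp
      show "mprod ms A B v hs x - mprod ms A B u hs x
          = (A v g1 (B v g2 x) - A u g1 (B v g2 x)) + A u g1 (B v g2 x - B u g2 x)" if "x \<in> V b" for x
        unfolding mprod_def g1_def[symmetric] g2_def[symmetric]
        using bop_diff[OF lc bA(2) bop_in[OF bB(1) that] bop_in[OF bB(2) that]] by simp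
    qed
    also have "\<dots> = (KB * e1 + KA * e2) * nprod hs"
      using nprod_marked[of hs ms] l ms unfolding g1_def g2_def by (simp add: algebra_simps)
    also have "\<dots> \<le> e * nprod hs"
    proof (rule mult_right_mono[OF _ nprod_nonneg])
      have "KB * e1 \<le> e / 2" unfolding e1_def by (rule mult_eps_le) (simp_all add: KB(1) e)
      moreover have "KA * e2 \<le> e / 2" unfolding e2_def by (rule mult_eps_le) (simp_all add: KA(1) e)
      ultimately show "KB * e1 + KA * e2 \<le> e" by simp
    qed
    finally show ?thesis .
  qed
  then show "\<exists>d>0. \<forall>v\<in>U. norm (v - u) < d \<longrightarrow> (\<forall>hs. length hs = m1 + m2 \<longrightarrow>
      opn a b (\<lambda>x. mprod ms A B v hs x - mprod ms A B u hs x) \<le> e * nprod hs)"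
    using d1(1) d2(1) by (intro exI[of _ "min d1 d2"]) auto
qed

text \<open>For Holder continuity and differentiability the two factors are split at two different
  levels \<open>c\<close> and \<open>c'\<close>: the hypothesis \<open>coh\<close> says that both splittings give the same product.\<close>

lemma fam_holder_mprod:
  assumes la: "level a" and lc: "level c" and lc': "level c'" and lb: "level b"
    and A: "mlin_fam a c m1 A" and B: "mlin_fam c b m2 B"
    and A': "mlin_fam a c' m1 A'" and B': "mlin_fam c' b m2 B'"
    and HA: "fam_holder a c m1 \<alpha> A" and HB': "fam_holder c' b m2 \<alpha> B'"
    and coh: "\<And>u v gs1 gs2 x. u \<in> U \<Longrightarrow> v \<in> U \<Longrightarrow> length gs1 = m1 \<Longrightarrow> length gs2 = m2 \<Longrightarrow>
      x \<in> V b \<Longrightarrow> A u gs1 (B v gs2 x) = A' u gs1 (B' v gs2 x)"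
    and ms: "length ms = m1 + m2" "nmarked ms = m1"
  shows "fam_holder a b (m1 + m2) \<alpha> (mprod ms A B)"
proof -
  obtain KB where KB: "0 \<le> KB" "\<And>u hs. u \<in> U \<Longrightarrow> length hs = m2 \<Longrightarrow> opn c b (B u hs) \<le> KB * nprod hs"
    using mlin_fam_bound[OF B] by blast
  obtain KA where KA: "0 \<le> KA" "\<And>u hs. u \<in> U \<Longrightarrow> length hs = m1 \<Longrightarrow> opn a c' (A' u hs) \<le> KA * nprod hs"
    using mlin_fam_bound[OF A'] by blast
  obtain C1 where C1: "\<And>u v hs. u \<in> U \<Longrightarrow> v \<in> U \<Longrightarrow> length hs = m1 \<Longrightarrow>
      opn a c (\<lambda>x. A u hs x - A v hs x) \<le> C1 * norm (u - v) powr \<alpha> * nprod hs"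
    using fam_holderD[OF HA] by blast
  obtain C2 where C2: "\<And>u v hs. u \<in> U \<Longrightarrow> v \<in> U \<Longrightarrow> length hs = m2 \<Longrightarrow>
      opn c' b (\<lambda>x. B' u hs x - B' v hs x) \<le> C2 * norm (u - v) powr \<alpha> * nprod hs"
    using fam_holderD[OF HB'] by blast
  have "opn a b (\<lambda>x. mprod ms A B u hs x - mprod ms A B v hs x)
      \<le> (C1 * KB + KA * C2) * norm (u - v) powr \<alpha> * nprod hs"
    if u: "u \<in> U" and v: "v \<in> U" and l: "length hs = m1 + m2" for u v hs
  proof -
    define g1 where "g1 = marked ms hs"
    define g2 where "g2 = unmarked ms hs"
    have g: "length g1 = m1" "length g2 = m2" unfolding g1_def g2_def using length_marked_split[OF ms l] by auto
    have bA: "bop a c (A u g1)" "bop a c (A v g1)" and bA': "bop a c' (A' v g1)"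
      and bB: "bop c b (B u g2)" and bB': "bop c' b (B' u g2)" "bop c' b (B' v g2)"
      using mlin_fam_bop[OF A _ g(1)] mlin_fam_bop[OF A' _ g(1)] mlin_fam_bop[OF B _ g(2)]
        mlin_fam_bop[OF B' _ g(2)] u v by auto
    have "opn a b (\<lambda>x. mprod ms A B u hs x - mprod ms A B v hs x)
        \<le> (C1 * norm (u - v) powr \<alpha> * nprod g1) * (KB * nprod g2)
          + (KA * nprod g1) * (C2 * norm (u - v) powr \<alpha> * nprod g2)"
    proof (rule opn_sum2_le[OF la lc lc' lb bop_diff_op(1)[OF la lc bA] bB bA' bop_diff_op(1)[OF lc' lb bB']])
      show "opn a c (\<lambda>y. A u g1 y - A v g1 y) \<le> C1 * norm (u - v) powr \<alpha> * nprod g1" using C1[OF u v g(1)] .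
      show "opn c b (B u g2) \<le> KB * nprod g2" using KB(2)[OF u g(2)] .
      show "opn a c' (A' v g1) \<le> KA * nprod g1" using KA(2)[OF v g(1)] .
      show "opn c' b (\<lambda>y. B' u g2 y - B' v g2 y) \<le> C2 * norm (u - v) powr \<alpha> * nprod g2" using C2[OF u v g(2)] .
      show "mprod ms A B u hs x - mprod ms A B v hs x
          = (A u g1 (B u g2 x) - A v g1 (B u g2 x)) + A' v g1 (B' u g2 x - B' v g2 x)" if x: "x \<in> V b" for x
        unfolding mprod_def g1_def[symmetric] g2_def[symmetric]
        using coh[OF v u g x] coh[OF v v g x] bop_diff[OF lc' bA' bop_in[OF bB'(1) x] bop_in[OF bB'(2) x]]
        by simp
    qed
    also have "\<dots> = (C1 * KB + KA * C2) * norm (u - v) powr \<alpha> * nprod hs"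
      using nprod_marked[of hs ms] l ms unfolding g1_def g2_def by (simp add: algebra_simps)
    finally show ?thesis .
  qed
  then show ?thesis unfolding fam_holder_def by blast
qed

end


context scale_setting
begin

lemma fam_has_deriv_mprod:
  assumes la: "level a" and lc: "level c" and lc': "level c'" and lb: "level b"
    and A: "mlin_fam a c m1 A" and B: "mlin_fam c b m2 B"
    and A': "mlin_fam a c' m1 A'" and B': "mlin_fam c' b m2 B'"
    and DA: "mlin_fam a c (Suc m1) DA" and DB': "mlin_fam c' b (Suc m2) DB'"
    and HA: "fam_has_deriv a c m1 A DA" and HB': "fam_has_deriv c' b m2 B' DB'"
    and CB: "fam_cont c b m2 B"
    and coh: "\<And>u v gs1 gs2 x. u \<in> U \<Longrightarrow> v \<in> U \<Longrightarrow> length gs1 = m1 \<Longrightarrow> length gs2 = m2 \<Longrightarrow>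
      x \<in> V b \<Longrightarrow> A u gs1 (B v gs2 x) = A' u gs1 (B' v gs2 x)"
    and ms: "length ms = m1 + m2" "nmarked ms = m1"
  shows "fam_has_deriv a b (m1 + m2) (mprod ms A B)
    (\<lambda>u gs x. mprod (True # ms) DA B u gs x + mprod (False # ms) A' DB' u gs x)"
  unfolding fam_has_deriv_def
proof (intro ballI allI impI)
  fix u e assume u: "u \<in> U" and e: "(0::real) < e"
  obtain KB where KB: "0 \<le> KB" "\<And>u hs. u \<in> U \<Longrightarrow> length hs = m2 \<Longrightarrow> opn c b (B u hs) \<le> KB * nprod hs"
    using mlin_fam_bound[OF B] by blast
  obtain KD where KD: "0 \<le> KD" "\<And>u hs. u \<in> U \<Longrightarrow> length hs = Suc m1 \<Longrightarrow> opn a c (DA u hs) \<le> KD * nprod hs"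
    using mlin_fam_bound[OF DA] by blast
  obtain KA where KA: "0 \<le> KA" "\<And>u hs. u \<in> U \<Longrightarrow> length hs = m1 \<Longrightarrow> opn a c' (A' u hs) \<le> KA * nprod hs"
    using mlin_fam_bound[OF A'] by blast
  define e1 where "e1 = e / 3 / (KB + 1)"
  define e2 where "e2 = e / 3 / (KD + 1)"
  define e3 where "e3 = e / 3 / (KA + 1)"
  have "KB * e1 \<le> e / 3" unfolding e1_def by (rule mult_eps_le) (simp_all add: KB(1) e)
  moreover have "KD * e2 \<le> e / 3" unfolding e2_def by (rule mult_eps_le) (simp_all add: KD(1) e)
  moreover have "KA * e3 \<le> e / 3" unfolding e3_def by (rule mult_eps_le) (simp_all add: KA(1) e)
  ultimately have eps: "e1 * KB + KD * e2 + KA * e3 \<le> e" by (simp add: mult.commute)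
  obtain d1 where d1: "0 < d1" "\<And>h hs. norm h < d1 \<Longrightarrow> u + h \<in> U \<Longrightarrow> length hs = m1 \<Longrightarrow>
      opn a c (\<lambda>x. A (u + h) hs x - A u hs x - DA u (h # hs) x) \<le> e1 * norm h * nprod hs"
    using fam_has_derivD[OF HA u, of e1] e KB(1) unfolding e1_def by auto
  obtain d2 where d2: "0 < d2" "\<And>v hs. v \<in> U \<Longrightarrow> norm (v - u) < d2 \<Longrightarrow> length hs = m2 \<Longrightarrow>
      opn c b (\<lambda>x. B v hs x - B u hs x) \<le> e2 * nprod hs"
    using fam_contD[OF CB u, of e2] e KD(1) unfolding e2_def by auto
  obtain d3 where d3: "0 < d3" "\<And>h hs. norm h < d3 \<Longrightarrow> u + h \<in> U \<Longrightarrow> length hs = m2 \<Longrightarrow>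
      opn c' b (\<lambda>x. B' (u + h) hs x - B' u hs x - DB' u (h # hs) x) \<le> e3 * norm h * nprod hs"
    using fam_has_derivD[OF HB' u, of e3] e KA(1) unfolding e3_def by auto
  have "opn a b (\<lambda>x. mprod ms A B (u + h) hs x - mprod ms A B u hs x -
        (mprod (True # ms) DA B u (h # hs) x + mprod (False # ms) A' DB' u (h # hs) x))
      \<le> e * norm h * nprod hs"
    if h: "norm h < min d1 (min d2 d3)" "u + h \<in> U" and l: "length hs = m1 + m2" for h hs
  proof -
    define w where "w = u + h"
    define g1 where "g1 = marked ms hs"
    define g2 where "g2 = unmarked ms hs"
    have w: "w \<in> U" using h unfolding w_def by simp
    have g: "length g1 = m1" "length g2 = m2" "length (h # g1) = Suc m1" "length (h # g2) = Suc m2"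
      unfolding g1_def g2_def using length_marked_split[OF ms l] by auto
    have bA: "bop a c (A w g1)" "bop a c (A u g1)" and bDA: "bop a c (DA u (h # g1))"
      and bA': "bop a c' (A' u g1)" and bB: "bop c b (B w g2)" "bop c b (B u g2)"
      and bB': "bop c' b (B' w g2)" "bop c' b (B' u g2)" and bDB: "bop c' b (DB' u (h # g2))"
      using mlin_fam_bop[OF A _ g(1)] mlin_fam_bop[OF DA u g(3)] mlin_fam_bop[OF A' u g(1)]
        mlin_fam_bop[OF B _ g(2)] mlin_fam_bop[OF B' _ g(2)] mlin_fam_bop[OF DB' u g(4)] u w by auto
    have "opn a b (\<lambda>x. mprod ms A B w hs x - mprod ms A B u hs x -
          (mprod (True # ms) DA B u (h # hs) x + mprod (False # ms) A' DB' u (h # hs) x))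
        \<le> (e1 * norm h * nprod g1) * (KB * nprod g2) + (KD * nprod (h # g1)) * (e2 * nprod g2)
          + (KA * nprod g1) * (e3 * norm h * nprod g2)"
    proof (rule opn_sum3_le[OF la lc lc lc' lb bop_diff3_op[OF la lc bA bDA] bB(1) bDA
          bop_diff_op(1)[OF lc lb bB] bA' bop_diff3_op[OF lc' lb bB' bDB]])
      show "opn a c (\<lambda>y. A w g1 y - A u g1 y - DA u (h # g1) y) \<le> e1 * norm h * nprod g1"
        using d1(2)[OF _ h(2) g(1)] h(1) unfolding w_def by simp
      show "opn c b (B w g2) \<le> KB * nprod g2" using KB(2)[OF w g(2)] .
      show "opn a c (DA u (h # g1)) \<le> KD * nprod (h # g1)" using KD(2)[OF u g(3)] .
      show "opn c b (\<lambda>y. B w g2 y - B u g2 y) \<le> e2 * nprod g2"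
        using d2(2)[OF w _ g(2)] h(1) unfolding w_def by simp
      show "opn a c' (A' u g1) \<le> KA * nprod g1" using KA(2)[OF u g(1)] .
      show "opn c' b (\<lambda>y. B' w g2 y - B' u g2 y - DB' u (h # g2) y) \<le> e3 * norm h * nprod g2"
        using d3(2)[OF _ h(2) g(2)] h(1) unfolding w_def by simp
    next
      fix x assume x: "x \<in> V b"
      have Bx: "B w g2 x \<in> V c" "B u g2 x \<in> V c" using bop_in[OF bB(1) x] bop_in[OF bB(2) x] by auto
      have B'x: "B' w g2 x \<in> V c'" "B' u g2 x \<in> V c'" "DB' u (h # g2) x \<in> V c'"
        using bop_in[OF bB'(1) x] bop_in[OF bB'(2) x] bop_in[OF bDB x] by auto
      show "mprod ms A B w hs x - mprod ms A B u hs x -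
          (mprod (True # ms) DA B u (h # hs) x + mprod (False # ms) A' DB' u (h # hs) x) =
        (A w g1 (B w g2 x) - A u g1 (B w g2 x) - DA u (h # g1) (B w g2 x)) +
        DA u (h # g1) (B w g2 x - B u g2 x) +
        A' u g1 (B' w g2 x - B' u g2 x - DB' u (h # g2) x)"
        unfolding mprod_def
        using coh[OF u w g(1,2) x] coh[OF u u g(1,2) x] bop_diff[OF lc bDA Bx]
          bop_diff[OF lc' bA' V_diff[OF lc' B'x(1,2)] B'x(3)] bop_diff[OF lc' bA' B'x(1,2)]
        by (simp add: g1_def[symmetric] g2_def[symmetric])
    qed
    also have "\<dots> = (e1 * KB + KD * e2 + KA * e3) * norm h * nprod hs"
      using nprod_marked[of hs ms] l ms unfolding g1_def g2_def by (simp add: algebra_simps)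
    also have "\<dots> \<le> e * norm h * nprod hs"
      using eps nprod_nonneg[of hs] by (simp add: mult_right_mono mult.assoc)
    finally show ?thesis unfolding w_def .
  qed
  then show "\<exists>d>0. \<forall>h. norm h < d \<and> u + h \<in> U \<longrightarrow> (\<forall>hs. length hs = m1 + m2 \<longrightarrow>
      opn a b (\<lambda>x. mprod ms A B (u + h) hs x - mprod ms A B u hs x -
        (mprod (True # ms) DA B u (h # hs) x + mprod (False # ms) A' DB' u (h # hs) x))
      \<le> e * norm h * nprod hs)"
    using d1(1) d2(1) d3(1) by (intro exI[of _ "min d1 (min d2 d3)"]) auto
qed

end


type_synonym ('b, 'x) sfam = "real \<Rightarrow> real \<Rightarrow> ('b, 'x) mfam"

lemma exists_pos_le_1_less:
  fixes x y :: real
  assumes "0 < x" "0 < y"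
  obtains \<beta> where "0 < \<beta>" "\<beta> \<le> 1" "\<beta> < x" "\<beta> < y"
  using assms by (intro that[of "min 1 (min x y) / 2"]) auto

context scale_setting
begin

lemma j_bop: "0 < a \<Longrightarrow> a \<le> c \<Longrightarrow> c \<le> r0 \<Longrightarrow> bop a c (j a c)"
  using scale[unfolded banach_scale_def, THEN conjunct2, THEN conjunct1] by blast

lemma j_inj: "0 < a \<Longrightarrow> a \<le> c \<Longrightarrow> c \<le> r0 \<Longrightarrow> inj_on (j a c) (V c)"
  using scale[unfolded banach_scale_def, THEN conjunct2, THEN conjunct1] by blast

lemma j_id: "0 < a \<Longrightarrow> a \<le> r0 \<Longrightarrow> x \<in> V a \<Longrightarrow> j a a x = x"
  using scale[unfolded banach_scale_def, THEN conjunct2, THEN conjunct2, THEN conjunct1] by blast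

lemma j_comp: "0 < a \<Longrightarrow> a \<le> c \<Longrightarrow> c \<le> b \<Longrightarrow> b \<le> r0 \<Longrightarrow> x \<in> V b \<Longrightarrow> j a c (j c b x) = j a b x"
  using scale[unfolded banach_scale_def, THEN conjunct2, THEN conjunct2, THEN conjunct2] by blast

definition fam_coherent :: "('b, 'x) sfam \<Rightarrow> nat \<Rightarrow> real \<Rightarrow> bool" where
  "fam_coherent \<Phi> m \<delta> \<longleftrightarrow> (\<forall>u\<in>U. \<forall>hs. length hs = m \<longrightarrow>
     (\<forall>a c b x. 0 < a \<longrightarrow> a \<le> c \<longrightarrow> c + \<delta> < b \<longrightarrow> b \<le> r0 \<longrightarrow> x \<in> V b \<longrightarrow>
        \<Phi> a b u hs x = j a c (\<Phi> c b u hs x)) \<and>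
     (\<forall>a c b x. 0 < a \<longrightarrow> a + \<delta> < c \<longrightarrow> c \<le> b \<longrightarrow> b \<le> r0 \<longrightarrow> x \<in> V b \<longrightarrow>
        \<Phi> a b u hs x = \<Phi> a c u hs (j c b x)))"

text \<open>A scale family \<open>\<Phi>\<close> with loss \<open>\<delta>\<close> and regularity \<open>g\<close>: \<open>\<Phi> a b\<close> maps \<open>X\<^sub>b\<close> to \<open>X\<^sub>a\<close> and is
  \<open>C\<^sup>t\<close> for \<open>t < min g (b - a - \<delta>)\<close>; coherence makes it independent of the levels up to the
  embeddings \<open>j\<close>. The families \<open>j a b \<circ> R b\<close>, \<open>DQ\<close> and all their products are of this kind.\<close>

definition scale_fam :: "('b, 'x) sfam \<Rightarrow> nat \<Rightarrow> real \<Rightarrow> real \<Rightarrow> bool" where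
  "scale_fam \<Phi> m \<delta> g \<longleftrightarrow> 0 \<le> \<delta> \<and> 0 < g \<and> fam_coherent \<Phi> m \<delta> \<and>
     (\<forall>a b t. 0 < a \<longrightarrow> b \<le> r0 \<longrightarrow> 0 \<le> t \<longrightarrow> t < b - a - \<delta> \<longrightarrow> t < g \<longrightarrow> fam_C a b m t (\<Phi> a b))"

lemma scale_famD:
  assumes "scale_fam \<Phi> m \<delta> g"
  shows "0 \<le> \<delta>" "0 < g" "fam_coherent \<Phi> m \<delta>"
    and "\<And>a b t. 0 < a \<Longrightarrow> b \<le> r0 \<Longrightarrow> 0 \<le> t \<Longrightarrow> t < b - a - \<delta> \<Longrightarrow> t < g \<Longrightarrow> fam_C a b m t (\<Phi> a b)"
  using assms unfolding scale_fam_def by blast+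

lemma scale_fam_mlin:
  assumes "scale_fam \<Phi> m \<delta> g" "0 < a" "a + \<delta> < b" "b \<le> r0"
  shows "mlin_fam a b m (\<Phi> a b)"
proof (rule fam_C_imp_mlin)
  show "level b" using scale_famD(1)[OF assms(1)] assms(2-4) by simp
  show "fam_C a b m 0 (\<Phi> a b)"
    using scale_famD(1,2,4)[OF assms(1)] assms(2-4) by simp
qed

lemma scale_fam_cont:
  assumes "scale_fam \<Phi> m \<delta> g" "0 < a" "a + \<delta> < b" "b \<le> r0"
  shows "fam_cont a b m (\<Phi> a b)"
  using fam_C_imp_cont[of 0] scale_famD[OF assms(1)] assms(2-4) by simp

lemma scale_fam_holder:
  assumes "scale_fam \<Phi> m \<delta> g" "0 < t" "t \<le> 1" "t < g" "0 < a" "t < b - a - \<delta>" "b \<le> r0"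
  shows "fam_holder a b m t (\<Phi> a b)"
  using fam_C_imp_holder scale_famD(4)[OF assms(1,5,7)] assms(2-4,6) by simp

lemma fam_coherent_left:
  "fam_coherent \<Phi> m \<delta> \<Longrightarrow> u \<in> U \<Longrightarrow> length hs = m \<Longrightarrow> 0 < a \<Longrightarrow> a \<le> c \<Longrightarrow> c + \<delta> < b \<Longrightarrow>
   b \<le> r0 \<Longrightarrow> x \<in> V b \<Longrightarrow> \<Phi> a b u hs x = j a c (\<Phi> c b u hs x)"
  unfolding fam_coherent_def by blast

lemma fam_coherent_right:
  "fam_coherent \<Phi> m \<delta> \<Longrightarrow> u \<in> U \<Longrightarrow> length hs = m \<Longrightarrow> 0 < a \<Longrightarrow> a + \<delta> < c \<Longrightarrow> c \<le> b \<Longrightarrow>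
   b \<le> r0 \<Longrightarrow> x \<in> V b \<Longrightarrow> \<Phi> a b u hs x = \<Phi> a c u hs (j c b x)"
  unfolding fam_coherent_def by blast

lemma fam_C_deriv_from_above:
  assumes lb: "level b" and t: "0 \<le> t" "t < T - 1"
    and above: "\<And>s. 1 < s \<Longrightarrow> s < T \<Longrightarrow>
      \<exists>G. fam_has_deriv a b m F G \<and> fam_C a b (Suc m) (s - 1) G \<and> mlin_fam a b (Suc m) G"
  shows "\<exists>G. fam_has_deriv a b m F G \<and> fam_C a b (Suc m) t G \<and> mlin_fam a b (Suc m) G"
proof (cases "t = 0")
  case True
  obtain \<beta> where \<beta>: "0 < \<beta>" "\<beta> \<le> 1" "\<beta> < T - 1" "\<beta> < 1"
    using exists_pos_le_1_less[of "T - 1" 1] t by auto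
  then show ?thesis using above[of "1 + \<beta>"] fam_C_0_if_pos[OF lb \<beta>(1,2)] True by auto
next
  case False
  then show ?thesis using above[of "t + 1"] t by simp
qed

definition fam_deriv :: "('b, 'x) sfam \<Rightarrow> nat \<Rightarrow> ('b, 'x) sfam" where
  "fam_deriv \<Phi> m a b = (SOME G. fam_has_deriv a b m (\<Phi> a b) G \<and> mlin_fam a b (Suc m) G)"

lemma fam_deriv_someI:
  "fam_has_deriv a b m (\<Phi> a b) G \<Longrightarrow> mlin_fam a b (Suc m) G \<Longrightarrow>
   fam_has_deriv a b m (\<Phi> a b) (fam_deriv \<Phi> m a b) \<and> mlin_fam a b (Suc m) (fam_deriv \<Phi> m a b)"
  unfolding fam_deriv_def by (rule someI[where P = "\<lambda>G. fam_has_deriv a b m (\<Phi> a b) G \<and> mlin_fam a b (Suc m) G"]) simp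

lemma fam_deriv_coherent:
  assumes \<delta>: "0 \<le> \<delta>" and coh: "fam_coherent \<Phi> m \<delta>"
    and bop: "\<And>a b. 0 < a \<Longrightarrow> a + \<delta> < b \<Longrightarrow> b \<le> r0 \<Longrightarrow> bop_fam a b m (\<Phi> a b)"
    and D: "\<And>a b. 0 < a \<Longrightarrow> a + \<delta> + 1 < b \<Longrightarrow> b \<le> r0 \<Longrightarrow>
      fam_has_deriv a b m (\<Phi> a b) (fam_deriv \<Phi> m a b) \<and> mlin_fam a b (Suc m) (fam_deriv \<Phi> m a b)"
  shows "fam_coherent (fam_deriv \<Phi> m) (Suc m) (\<delta> + 1)"
  unfolding fam_coherent_def
proof (intro ballI allI impI conjI)
  fix u and hs :: "'b list" and a c b x
  assume u: "u \<in> U" and l: "length hs = Suc m" and a: "0 < a" "a \<le> c" "c + (\<delta> + 1) < b" "b \<le> r0"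
    and x: "x \<in> V b"
  have la: "level a" and lc: "level c" and lb: "level b" using a \<delta> by auto
  note Dc = D[of c b] and Da = D[of a b]
  have "fam_has_deriv a b m (\<lambda>u hs x. j a c (\<Phi> c b u hs x)) (\<lambda>u hs x. j a c (fam_deriv \<Phi> m c b u hs x))"
    by (rule fam_has_deriv_comp_left[OF la lc lb j_bop bop mlin_fam_bop_fam])
      (use a \<delta> Dc in auto)
  then have D': "fam_has_deriv a b m (\<Phi> a b) (\<lambda>u hs x. j a c (fam_deriv \<Phi> m c b u hs x))"
    by (rule fam_has_deriv_cong[rotated 2]) (use fam_coherent_left[OF coh] a \<delta> in auto)
  have M': "mlin_fam a b (Suc m) (\<lambda>u hs x. j a c (fam_deriv \<Phi> m c b u hs x))"
    by (rule mlin_fam_comp_left[OF la lc lb j_bop]) (use a \<delta> Dc in auto)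
  have "bop_fam a b m (\<Phi> a b)" using bop a \<delta> by simp
  from fam_has_deriv_unique[OF la lb this _ M' _ D'] show "fam_deriv \<Phi> m a b u hs x = j a c (fam_deriv \<Phi> m c b u hs x)"
    using Da a \<delta> u l x by auto
next
  fix u and hs :: "'b list" and a c b x
  assume u: "u \<in> U" and l: "length hs = Suc m" and a: "0 < a" "a + (\<delta> + 1) < c" "c \<le> b" "b \<le> r0"
    and x: "x \<in> V b"
  have la: "level a" and lc: "level c" and lb: "level b" using a \<delta> by auto
  note Dc = D[of a c] and Da = D[of a b]
  have "fam_has_deriv a b m (\<lambda>u hs x. \<Phi> a c u hs (j c b x)) (\<lambda>u hs x. fam_deriv \<Phi> m a c u hs (j c b x))"
    by (rule fam_has_deriv_comp_right[OF la lc lb j_bop bop mlin_fam_bop_fam])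
      (use a \<delta> Dc in auto)
  then have D': "fam_has_deriv a b m (\<Phi> a b) (\<lambda>u hs x. fam_deriv \<Phi> m a c u hs (j c b x))"
    by (rule fam_has_deriv_cong[rotated 2]) (use fam_coherent_right[OF coh _ _ a(1) _ a(3,4)] a in auto)
  have M': "mlin_fam a b (Suc m) (\<lambda>u hs x. fam_deriv \<Phi> m a c u hs (j c b x))"
    by (rule mlin_fam_comp_right[OF la lc lb j_bop]) (use a \<delta> Dc in auto)
  have "bop_fam a b m (\<Phi> a b)" using bop a \<delta> by simp
  from fam_has_deriv_unique[OF la lb this _ M' _ D'] show "fam_deriv \<Phi> m a b u hs x = fam_deriv \<Phi> m a c u hs (j c b x)"
    using Da a \<delta> u l x by auto
qed

lemma scale_fam_derivI:
  assumes \<delta>: "0 \<le> \<delta>" and g: "0 < g" and coh: "fam_coherent \<Phi> m \<delta>"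
    and bop: "\<And>a b. 0 < a \<Longrightarrow> a + \<delta> < b \<Longrightarrow> b \<le> r0 \<Longrightarrow> bop_fam a b m (\<Phi> a b)"
    and der: "\<And>a b t. 0 < a \<Longrightarrow> b \<le> r0 \<Longrightarrow> 0 \<le> t \<Longrightarrow> t < b - a - \<delta> - 1 \<Longrightarrow> t < g \<Longrightarrow>
      \<exists>G. fam_has_deriv a b m (\<Phi> a b) G \<and> fam_C a b (Suc m) t G \<and> mlin_fam a b (Suc m) G"
  shows "scale_fam (fam_deriv \<Phi> m) (Suc m) (\<delta> + 1) g"
proof -
  have D: "fam_has_deriv a b m (\<Phi> a b) (fam_deriv \<Phi> m a b) \<and> mlin_fam a b (Suc m) (fam_deriv \<Phi> m a b)"
    if "0 < a" "a + \<delta> + 1 < b" "b \<le> r0" for a b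
    using der[of a b 0] that g fam_deriv_someI by auto
  have "fam_C a b (Suc m) t (fam_deriv \<Phi> m a b)"
    if a: "0 < a" "b \<le> r0" and t: "0 \<le> t" "t < b - a - (\<delta> + 1)" "t < g" for a b t
  proof -
    have la: "level a" and lb: "level b" using a t \<delta> by auto
    obtain G where G: "fam_has_deriv a b m (\<Phi> a b) G" "fam_C a b (Suc m) t G" "mlin_fam a b (Suc m) G"
      using der[OF a t(1) _ t(3)] t(2) by auto
    have "fam_eq b (Suc m) G (fam_deriv \<Phi> m a b)"
      using fam_has_deriv_unique[OF la lb bop G(3) _ G(1)] D[OF a(1) _ a(2)] a t \<delta> by auto
    then show ?thesis using fam_C_cong[OF lb _ G(2)] by blast
  qed
  then show ?thesis
    unfolding scale_fam_def using fam_deriv_coherent[OF \<delta> coh bop D] \<delta> g by auto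
qed

lemma scale_fam_deriv_exists:
  assumes F: "scale_fam \<Phi> m \<delta> g" and a: "0 < a" "b \<le> r0"
    and t: "0 \<le> t" "t < b - a - \<delta> - 1" "t < g - 1"
  shows "\<exists>G. fam_has_deriv a b m (\<Phi> a b) G \<and> fam_C a b (Suc m) t G \<and> mlin_fam a b (Suc m) G"
proof (rule fam_C_deriv_from_above[OF _ t(1), of b "min g (b - a - \<delta>)"])
  show "level b" using a t scale_famD(1)[OF F] by auto
  show "t < min g (b - a - \<delta>) - 1" using t by simp
  fix s assume s: "1 < s" "s < min g (b - a - \<delta>)"
  have "fam_C a b m s (\<Phi> a b)" using scale_famD(4)[OF F a] s by simp
  then show "\<exists>G. fam_has_deriv a b m (\<Phi> a b) G \<and> fam_C a b (Suc m) (s - 1) G \<and> mlin_fam a b (Suc m) G"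
    using fam_C_derivD[OF \<open>level b\<close> s(1)] by metis
qed

lemma scale_fam_has_deriv:
  assumes "scale_fam \<Phi> m \<delta> g" "1 < g" "0 < a" "a + \<delta> + 1 < b" "b \<le> r0"
  shows "fam_has_deriv a b m (\<Phi> a b) (fam_deriv \<Phi> m a b)" "mlin_fam a b (Suc m) (fam_deriv \<Phi> m a b)"
  using scale_fam_deriv_exists[OF assms(1,3,5), of 0] assms(2,4) fam_deriv_someI by auto

lemma scale_fam_deriv:
  assumes F: "scale_fam \<Phi> m \<delta> g" and g: "1 < g"
  shows "scale_fam (fam_deriv \<Phi> m) (Suc m) (\<delta> + 1) (g - 1)"
proof (rule scale_fam_derivI)
  show "0 \<le> \<delta>" "0 < g - 1" "fam_coherent \<Phi> m \<delta>" using scale_famD(1,3)[OF F] g by auto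
  show "bop_fam a b m (\<Phi> a b)" if "0 < a" "a + \<delta> < b" "b \<le> r0" for a b
    using mlin_fam_bop_fam[OF scale_fam_mlin[OF F that]] .
  show "\<exists>G. fam_has_deriv a b m (\<Phi> a b) G \<and> fam_C a b (Suc m) t G \<and> mlin_fam a b (Suc m) G"
    if "0 < a" "b \<le> r0" "0 \<le> t" "t < b - a - \<delta> - 1" "t < g - 1" for a b t
    by (rule scale_fam_deriv_exists[OF F that])
qed

end


definition mid_level :: "real \<Rightarrow> real \<Rightarrow> real \<Rightarrow> real \<Rightarrow> real" where
  "mid_level \<delta>1 \<delta>2 a b = (a + \<delta>1 + (b - \<delta>2)) / 2"

lemma mid_level_bounds:
  "a + \<delta>1 + \<delta>2 < b \<Longrightarrow> a + \<delta>1 < mid_level \<delta>1 \<delta>2 a b \<and> mid_level \<delta>1 \<delta>2 a b + \<delta>2 < b"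
  unfolding mid_level_def by (simp add: field_simps)

lemma split_levels:
  fixes t :: real
  assumes "t < b - a - \<delta>1 - \<delta>2"
  obtains c c' where "a + \<delta>1 + t < c" "c + \<delta>2 < b" "a + \<delta>1 < c'" "c' + \<delta>2 + t < b"
proof -
  define s where "s = (b - a - \<delta>1 - \<delta>2 - t) / 2"
  have "0 < s" "2 * s = b - a - \<delta>1 - \<delta>2 - t" using assms unfolding s_def by simp_all
  then show ?thesis by (intro that[of "b - \<delta>2 - s" "a + \<delta>1 + s"]) linarith+
qed

text \<open>The splitting level is the midpoint of the admissible interval; by coherence any other
  admissible level gives the same family (\<open>fam_prod_eq\<close>).\<close>

definition fam_prod :: "bool list \<Rightarrow> real \<Rightarrow> real \<Rightarrow> ('b, 'x) sfam \<Rightarrow> ('b, 'x) sfam \<Rightarrow> ('b, 'x) sfam" where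
  "fam_prod ms \<delta>1 \<delta>2 \<Phi> \<Psi> a b = mprod ms (\<Phi> a (mid_level \<delta>1 \<delta>2 a b)) (\<Psi> (mid_level \<delta>1 \<delta>2 a b) b)"

context scale_setting
begin

lemma scale_fam_split_indep:
  assumes F1: "scale_fam \<Phi> m1 \<delta>1 g1" and F2: "scale_fam \<Psi> m2 \<delta>2 g2" and a: "0 < a" "b \<le> r0"
    and c: "a + \<delta>1 < c" "c + \<delta>2 < b" and c': "a + \<delta>1 < c'" "c' + \<delta>2 < b"
    and u: "u \<in> U" "v \<in> U" and l: "length gs1 = m1" "length gs2 = m2" and x: "x \<in> V b"
  shows "\<Phi> a c u gs1 (\<Psi> c b v gs2 x) = \<Phi> a c' u gs1 (\<Psi> c' b v gs2 x)"
proof -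
  have \<delta>: "0 \<le> \<delta>1" "0 \<le> \<delta>2" using scale_famD(1)[OF F1] scale_famD(1)[OF F2] .
  have *: "\<Phi> a c u gs1 (\<Psi> c b v gs2 x) = \<Phi> a c' u gs1 (\<Psi> c' b v gs2 x)"
    if c: "a + \<delta>1 < c" "c + \<delta>2 < b" and c': "a + \<delta>1 < c'" "c' + \<delta>2 < b" and cc': "c \<le> c'" for c c'
  proof -
    have y: "\<Psi> c' b v gs2 x \<in> V c'"
      using bop_in[OF mlin_fam_bop[OF scale_fam_mlin[OF F2 _ c'(2) a(2)] u(2) l(2)] x] a c' \<delta> by simp
    have "\<Psi> c b v gs2 x = j c c' (\<Psi> c' b v gs2 x)"
      using fam_coherent_left[OF scale_famD(3)[OF F2] u(2) l(2) _ cc' c'(2) a(2) x] a c \<delta> by simp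
    moreover have "\<Phi> a c' u gs1 (\<Psi> c' b v gs2 x) = \<Phi> a c u gs1 (j c c' (\<Psi> c' b v gs2 x))"
      using fam_coherent_right[OF scale_famD(3)[OF F1] u(1) l(1) a(1) c(1) cc' _ y] a c' \<delta> by simp
    ultimately show ?thesis by simp
  qed
  show ?thesis using *[OF c c'] *[OF c' c] by fastforce
qed

lemma fam_prod_eq:
  assumes F1: "scale_fam \<Phi> m1 \<delta>1 g1" and F2: "scale_fam \<Psi> m2 \<delta>2 g2"
    and ms: "length ms = m1 + m2" "nmarked ms = m1"
    and a: "0 < a" "b \<le> r0" and c: "a + \<delta>1 < c" "c + \<delta>2 < b"
  shows "fam_eq b (m1 + m2) (fam_prod ms \<delta>1 \<delta>2 \<Phi> \<Psi> a b) (mprod ms (\<Phi> a c) (\<Psi> c b))"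
proof (intro ballI allI impI)
  fix u and hs :: "'b list" and x assume u: "u \<in> U" and l: "length hs = m1 + m2" and x: "x \<in> V b"
  have "a + \<delta>1 < mid_level \<delta>1 \<delta>2 a b" "mid_level \<delta>1 \<delta>2 a b + \<delta>2 < b"
    using mid_level_bounds[of a \<delta>1 \<delta>2 b] c by auto
  from scale_fam_split_indep[OF F1 F2 a this c u u length_marked_split[OF ms l] x]
  show "fam_prod ms \<delta>1 \<delta>2 \<Phi> \<Psi> a b u hs x = mprod ms (\<Phi> a c) (\<Psi> c b) u hs x"
    unfolding fam_prod_def mprod_def .
qed

lemma fam_prod_coherent:
  assumes F1: "scale_fam \<Phi> m1 \<delta>1 g1" and F2: "scale_fam \<Psi> m2 \<delta>2 g2"
    and ms: "length ms = m1 + m2" "nmarked ms = m1"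
  shows "fam_coherent (fam_prod ms \<delta>1 \<delta>2 \<Phi> \<Psi>) (m1 + m2) (\<delta>1 + \<delta>2)"
  unfolding fam_coherent_def
proof (intro ballI allI impI conjI)
  have \<delta>: "0 \<le> \<delta>1" "0 \<le> \<delta>2" using scale_famD(1)[OF F1] scale_famD(1)[OF F2] .
  fix u and hs :: "'b list" assume u: "u \<in> U" and l: "length hs = m1 + m2"
  note L = length_marked_split[OF ms l]
  fix a c b x
  {
    assume a: "0 < a" "a \<le> c" "c + (\<delta>1 + \<delta>2) < b" "b \<le> r0" and x: "x \<in> V b"
    define m where "m = mid_level \<delta>1 \<delta>2 c b"
    have m: "c + \<delta>1 < m" "m + \<delta>2 < b" using mid_level_bounds[of c \<delta>1 \<delta>2 b] a unfolding m_def by auto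
    have y: "\<Psi> m b u (unmarked ms hs) x \<in> V m"
      using bop_in[OF mlin_fam_bop[OF scale_fam_mlin[OF F2 _ m(2) a(4)] u L(2)] x] a m \<delta> by simp
    have "j a c (fam_prod ms \<delta>1 \<delta>2 \<Phi> \<Psi> c b u hs x) = \<Phi> a m u (marked ms hs) (\<Psi> m b u (unmarked ms hs) x)"
      unfolding fam_prod_def mprod_def m_def[symmetric]
      using fam_coherent_left[OF scale_famD(3)[OF F1] u L(1) a(1,2) m(1) _ y] m a \<delta> by simp
    also have "\<dots> = fam_prod ms \<delta>1 \<delta>2 \<Phi> \<Psi> a b u hs x"
      using fam_prod_eq[OF F1 F2 ms a(1,4), of m] m a u l x unfolding mprod_def by simp
    finally show "fam_prod ms \<delta>1 \<delta>2 \<Phi> \<Psi> a b u hs x = j a c (fam_prod ms \<delta>1 \<delta>2 \<Phi> \<Psi> c b u hs x)" by simp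
  }
  {
    assume a: "0 < a" "a + (\<delta>1 + \<delta>2) < c" "c \<le> b" "b \<le> r0" and x: "x \<in> V b"
    define m where "m = mid_level \<delta>1 \<delta>2 a c"
    have m: "a + \<delta>1 < m" "m + \<delta>2 < c" using mid_level_bounds[of a \<delta>1 \<delta>2 c] a unfolding m_def by auto
    have "fam_prod ms \<delta>1 \<delta>2 \<Phi> \<Psi> a c u hs (j c b x) = \<Phi> a m u (marked ms hs) (\<Psi> m b u (unmarked ms hs) x)"
      unfolding fam_prod_def mprod_def m_def[symmetric]
      using fam_coherent_right[OF scale_famD(3)[OF F2] u L(2) _ m(2) a(3,4) x] m a \<delta> by simp
    also have "\<dots> = fam_prod ms \<delta>1 \<delta>2 \<Phi> \<Psi> a b u hs x"
      using fam_prod_eq[OF F1 F2 ms a(1,4), of m] m a u l x unfolding mprod_def by simp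
    finally show "fam_prod ms \<delta>1 \<delta>2 \<Phi> \<Psi> a b u hs x = fam_prod ms \<delta>1 \<delta>2 \<Phi> \<Psi> a c u hs (j c b x)" by simp
  }
qed

lemma fam_prod_C_le_1:
  assumes F1: "scale_fam \<Phi> m1 \<delta>1 g1" and F2: "scale_fam \<Psi> m2 \<delta>2 g2"
    and ms: "length ms = m1 + m2" "nmarked ms = m1" and a: "0 < a" "b \<le> r0"
    and t: "0 \<le> t" "t \<le> 1" "t < b - a - \<delta>1 - \<delta>2" "t < g1" "t < g2"
  shows "fam_C a b (m1 + m2) t (fam_prod ms \<delta>1 \<delta>2 \<Phi> \<Psi> a b)"
proof -
  have \<delta>: "0 \<le> \<delta>1" "0 \<le> \<delta>2" using scale_famD(1)[OF F1] scale_famD(1)[OF F2] .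
  define m where "m = mid_level \<delta>1 \<delta>2 a b"
  have m: "a + \<delta>1 < m" "m + \<delta>2 < b" using mid_level_bounds[of a \<delta>1 \<delta>2 b] t unfolding m_def by auto
  have la: "level a" and lm: "level m" and lb: "level b" using a m \<delta> by auto
  have lin: "mlin_fam a b (m1 + m2) (fam_prod ms \<delta>1 \<delta>2 \<Phi> \<Psi> a b)"
    unfolding fam_prod_def m_def[symmetric]
    using mlin_fam_mprod[OF la lm lb scale_fam_mlin[OF F1 a(1) m(1)] scale_fam_mlin[OF F2 _ m(2) a(2)] ms] lm
    by simp
  show ?thesis
  proof (cases "t = 0")
    case True
    have "fam_cont a b (m1 + m2) (fam_prod ms \<delta>1 \<delta>2 \<Phi> \<Psi> a b)"
      unfolding fam_prod_def m_def[symmetric]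
      by (rule fam_cont_mprod[OF la lm lb scale_fam_mlin[OF F1 a(1) m(1)] scale_fam_mlin[OF F2 _ m(2) a(2)]
            scale_fam_cont[OF F1 a(1) m(1)] scale_fam_cont[OF F2 _ m(2) a(2)] ms]) (use lm in auto)
    then show ?thesis using fam_C_0I[OF lin] True by simp
  next
    case False
    then have t0: "0 < t" using t by simp
    obtain c c' where c: "a + \<delta>1 + t < c" "c + \<delta>2 < b" and c': "a + \<delta>1 < c'" "c' + \<delta>2 + t < b"
      using split_levels[OF t(3)] .
    have lc: "level c" and lc': "level c'" using a c c' \<delta> t by auto
    have "fam_holder a b (m1 + m2) t (mprod ms (\<Phi> a c) (\<Psi> c b))"
    proof (rule fam_holder_mprod[OF la lc lc' lb])
      show "mlin_fam a c m1 (\<Phi> a c)" "mlin_fam a c' m1 (\<Phi> a c')"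
        using scale_fam_mlin[OF F1 a(1)] c c' lc lc' t by auto
      show "mlin_fam c b m2 (\<Psi> c b)" "mlin_fam c' b m2 (\<Psi> c' b)"
        using scale_fam_mlin[OF F2 _ _ a(2)] c c' lc lc' t by auto
      show "fam_holder a c m1 t (\<Phi> a c)" using scale_fam_holder[OF F1 t0 t(2,4) a(1)] c lc by simp
      show "fam_holder c' b m2 t (\<Psi> c' b)" using scale_fam_holder[OF F2 t0 t(2,5) _ _ a(2)] c' lc' by simp
      show "\<Phi> a c u gs1 (\<Psi> c b v gs2 x) = \<Phi> a c' u gs1 (\<Psi> c' b v gs2 x)"
        if "u \<in> U" "v \<in> U" "length gs1 = m1" "length gs2 = m2" "x \<in> V b" for u v gs1 gs2 x
        using scale_fam_split_indep[OF F1 F2 a _ c(2) _ _ that] c c' t by simp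
    qed (rule ms)+
    then have "fam_holder a b (m1 + m2) t (fam_prod ms \<delta>1 \<delta>2 \<Phi> \<Psi> a b)"
      by (rule fam_holder_cong[rotated]) (use fam_prod_eq[OF F1 F2 ms a, of c] c t in auto)
    then show ?thesis using fam_C_holderI[OF t0 t(2) lin] by simp
  qed
qed

lemma fam_prod_has_deriv:
  assumes F1: "scale_fam \<Phi> m1 \<delta>1 g1" and F2: "scale_fam \<Psi> m2 \<delta>2 g2" and g: "1 < g1" "1 < g2"
    and ms: "length ms = m1 + m2" "nmarked ms = m1" and a: "0 < a" "b \<le> r0" and ab: "1 < b - a - \<delta>1 - \<delta>2"
  shows "fam_has_deriv a b (m1 + m2) (fam_prod ms \<delta>1 \<delta>2 \<Phi> \<Psi> a b)
    (\<lambda>u gs x. fam_prod (True # ms) (\<delta>1 + 1) \<delta>2 (fam_deriv \<Phi> m1) \<Psi> a b u gs x +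
              fam_prod (False # ms) \<delta>1 (\<delta>2 + 1) \<Phi> (fam_deriv \<Psi> m2) a b u gs x)"
proof -
  have \<delta>: "0 \<le> \<delta>1" "0 \<le> \<delta>2" using scale_famD(1)[OF F1] scale_famD(1)[OF F2] .
  obtain c c' where c: "a + \<delta>1 + 1 < c" "c + \<delta>2 < b" and c': "a + \<delta>1 < c'" "c' + \<delta>2 + 1 < b"
    using split_levels[OF ab] .
  have la: "level a" and lc: "level c" and lc': "level c'" and lb: "level b" using a c c' \<delta> by auto
  have ms': "length (True # ms) = Suc m1 + m2" "nmarked (True # ms) = Suc m1"
    "length (False # ms) = m1 + Suc m2" "nmarked (False # ms) = m1" using ms by auto
  have D: "fam_has_deriv a b (m1 + m2) (mprod ms (\<Phi> a c) (\<Psi> c b))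
      (\<lambda>u gs x. mprod (True # ms) (fam_deriv \<Phi> m1 a c) (\<Psi> c b) u gs x +
                mprod (False # ms) (\<Phi> a c') (fam_deriv \<Psi> m2 c' b) u gs x)"
  proof (rule fam_has_deriv_mprod[OF la lc lc' lb])
    show "mlin_fam a c m1 (\<Phi> a c)" "mlin_fam a c' m1 (\<Phi> a c')"
      using scale_fam_mlin[OF F1 a(1)] c c' lc lc' by auto
    show "mlin_fam c b m2 (\<Psi> c b)" "mlin_fam c' b m2 (\<Psi> c' b)"
      using scale_fam_mlin[OF F2 _ _ a(2)] c c' lc lc' by auto
    show "fam_has_deriv a c m1 (\<Phi> a c) (fam_deriv \<Phi> m1 a c)" "mlin_fam a c (Suc m1) (fam_deriv \<Phi> m1 a c)"
      using scale_fam_has_deriv[OF F1 g(1) a(1)] c lc by auto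
    show "fam_has_deriv c' b m2 (\<Psi> c' b) (fam_deriv \<Psi> m2 c' b)" "mlin_fam c' b (Suc m2) (fam_deriv \<Psi> m2 c' b)"
      using scale_fam_has_deriv[OF F2 g(2) _ _ a(2)] c' lc' by auto
    show "fam_cont c b m2 (\<Psi> c b)" using scale_fam_cont[OF F2 _ c(2) a(2)] lc by simp
    show "\<Phi> a c u gs1 (\<Psi> c b v gs2 x) = \<Phi> a c' u gs1 (\<Psi> c' b v gs2 x)"
      if "u \<in> U" "v \<in> U" "length gs1 = m1" "length gs2 = m2" "x \<in> V b" for u v gs1 gs2 x
      using scale_fam_split_indep[OF F1 F2 a _ c(2) _ _ that] c c' by simp
  qed (rule ms)+
  have eq0: "fam_eq b (m1 + m2) (mprod ms (\<Phi> a c) (\<Psi> c b)) (fam_prod ms \<delta>1 \<delta>2 \<Phi> \<Psi> a b)"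
    using fam_prod_eq[OF F1 F2 ms a, of c] c by auto
  have eq1: "fam_eq b (Suc m1 + m2) (mprod (True # ms) (fam_deriv \<Phi> m1 a c) (\<Psi> c b))
      (fam_prod (True # ms) (\<delta>1 + 1) \<delta>2 (fam_deriv \<Phi> m1) \<Psi> a b)"
    using fam_prod_eq[OF scale_fam_deriv[OF F1 g(1)] F2 ms'(1,2) a, of c] c by auto
  have eq2: "fam_eq b (m1 + Suc m2) (mprod (False # ms) (\<Phi> a c') (fam_deriv \<Psi> m2 c' b))
      (fam_prod (False # ms) \<delta>1 (\<delta>2 + 1) \<Phi> (fam_deriv \<Psi> m2) a b)"
    using fam_prod_eq[OF F1 scale_fam_deriv[OF F2 g(2)] ms'(3,4) a, of c'] c' by auto
  have "fam_eq b (Suc (m1 + m2))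
      (\<lambda>u gs x. mprod (True # ms) (fam_deriv \<Phi> m1 a c) (\<Psi> c b) u gs x +
                mprod (False # ms) (\<Phi> a c') (fam_deriv \<Psi> m2 c' b) u gs x)
      (\<lambda>u gs x. fam_prod (True # ms) (\<delta>1 + 1) \<delta>2 (fam_deriv \<Phi> m1) \<Psi> a b u gs x +
                fam_prod (False # ms) \<delta>1 (\<delta>2 + 1) \<Phi> (fam_deriv \<Psi> m2) a b u gs x)"
    using eq1 eq2 by simp
  then show ?thesis by (rule fam_has_deriv_cong[OF eq0 _ D])
qed

lemma fam_prod_C:
  fixes n :: nat
  assumes "t \<le> real n + 1" and F1: "scale_fam \<Phi> m1 \<delta>1 g1" and F2: "scale_fam \<Psi> m2 \<delta>2 g2"
    and ms: "length ms = m1 + m2" "nmarked ms = m1" and a: "0 < a" "b \<le> r0"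
    and t: "0 \<le> t" "t < b - a - \<delta>1 - \<delta>2" "t < g1" "t < g2"
  shows "fam_C a b (m1 + m2) t (fam_prod ms \<delta>1 \<delta>2 \<Phi> \<Psi> a b)"
  using assms
proof (induction n arbitrary: \<Phi> \<Psi> m1 m2 \<delta>1 \<delta>2 g1 g2 ms t)
  case 0
  then show ?case using fam_prod_C_le_1 by simp
next
  case (Suc n)
  show ?case
  proof (cases "t \<le> 1")
    case True
    then show ?thesis using fam_prod_C_le_1[OF Suc.prems(2-7)] Suc.prems(8-11) by simp
  next
    case False
    then have t1: "1 < t" by simp
    note F1 = Suc.prems(2) and F2 = Suc.prems(3) and ms = Suc.prems(4,5)
    have \<delta>: "0 \<le> \<delta>1" "0 \<le> \<delta>2" using scale_famD(1)[OF F1] scale_famD(1)[OF F2] .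
    have la: "level a" and lb: "level b" using a Suc.prems(8,9) \<delta> by auto
    have g: "1 < g1" "1 < g2" using Suc.prems(10,11) t1 by auto
    have "fam_C a b (Suc m1 + m2) (t - 1) (fam_prod (True # ms) (\<delta>1 + 1) \<delta>2 (fam_deriv \<Phi> m1) \<Psi> a b)"
      by (rule Suc.IH[OF _ scale_fam_deriv[OF F1 g(1)] F2]) (use Suc.prems ms t1 in auto)
    moreover have "fam_C a b (m1 + Suc m2) (t - 1) (fam_prod (False # ms) \<delta>1 (\<delta>2 + 1) \<Phi> (fam_deriv \<Psi> m2) a b)"
      by (rule Suc.IH[OF _ F1 scale_fam_deriv[OF F2 g(2)]]) (use Suc.prems ms t1 in auto)
    ultimately have "fam_C a b (Suc (m1 + m2)) (t - 1)
        (\<lambda>u gs x. fam_prod (True # ms) (\<delta>1 + 1) \<delta>2 (fam_deriv \<Phi> m1) \<Psi> a b u gs x +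
                  fam_prod (False # ms) \<delta>1 (\<delta>2 + 1) \<Phi> (fam_deriv \<Psi> m2) a b u gs x)"
      using fam_C_add[OF la lb] by simp
    moreover have "mlin_fam a b (m1 + m2) (fam_prod ms \<delta>1 \<delta>2 \<Phi> \<Psi> a b)"
      using fam_C_imp_mlin[OF lb fam_prod_C_le_1[OF F1 F2 ms a, of 0]] Suc.prems by simp
    ultimately show ?thesis
      using fam_C_derivI[OF lb t1] fam_prod_has_deriv[OF F1 F2 g ms a] Suc.prems(9) t1 by simp
  qed
qed

theorem scale_fam_prod:
  assumes F1: "scale_fam \<Phi> m1 \<delta>1 g1" and F2: "scale_fam \<Psi> m2 \<delta>2 g2"
    and ms: "length ms = m1 + m2" "nmarked ms = m1"
  shows "scale_fam (fam_prod ms \<delta>1 \<delta>2 \<Phi> \<Psi>) (m1 + m2) (\<delta>1 + \<delta>2) (min g1 g2)"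
proof -
  have "fam_C a b (m1 + m2) t (fam_prod ms \<delta>1 \<delta>2 \<Phi> \<Psi> a b)"
    if "0 < a" "b \<le> r0" "0 \<le> t" "t < b - a - (\<delta>1 + \<delta>2)" "t < min g1 g2" for a b t
  proof -
    obtain n :: nat where "t \<le> real n + 1" using real_arch_simple[of t] by (meson add_increasing2 zero_le_one)
    then show ?thesis using fam_prod_C[OF _ F1 F2 ms] that by simp
  qed
  then show ?thesis
    unfolding scale_fam_def using scale_famD(1,2)[OF F1] scale_famD(1,2)[OF F2] fam_prod_coherent[OF F1 F2 ms]
    by simp
qed

end


context scale_setting
begin

lemma fam_has_deriv_lipschitz_at:
  assumes la: "level a" and lb: "level b" and BF: "bop_fam a b m F" and G: "mlin_fam a b (Suc m) G"
    and FG: "fam_has_deriv a b m F G" and u: "u \<in> U"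
  obtains K d where "0 \<le> K" "0 < d" "\<And>h hs. norm h < d \<Longrightarrow> u + h \<in> U \<Longrightarrow> length hs = m \<Longrightarrow>
    opn a b (\<lambda>x. F (u + h) hs x - F u hs x) \<le> K * norm h * nprod hs"
proof -
  obtain K where K: "0 \<le> K" "\<And>u hs. u \<in> U \<Longrightarrow> length hs = Suc m \<Longrightarrow> opn a b (G u hs) \<le> K * nprod hs"
    using mlin_fam_bound[OF G] by blast
  obtain d where d: "0 < d" "\<And>h hs. norm h < d \<Longrightarrow> u + h \<in> U \<Longrightarrow> length hs = m \<Longrightarrow>
      opn a b (\<lambda>x. F (u + h) hs x - F u hs x - G u (h # hs) x) \<le> 1 * norm h * nprod hs"
    using fam_has_derivD[OF FG u, of 1] by auto
  have "opn a b (\<lambda>x. F (u + h) hs x - F u hs x) \<le> (1 + K) * norm h * nprod hs"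
    if h: "norm h < d" "u + h \<in> U" and l: "length hs = m" for h hs
  proof -
    have l': "length (h # hs) = Suc m" using l by simp
    have "opn a b (\<lambda>x. F (u + h) hs x - F u hs x) \<le> 1 * norm h * nprod hs + K * nprod (h # hs)"
      by (rule opn_add_le[OF la lb bop_diff3_op[OF la lb bop_famD[OF BF h(2) l] bop_famD[OF BF u l]
            mlin_fam_bop[OF G u l']] mlin_fam_bop[OF G u l'] d(2)[OF h l] K(2)[OF u l']]) simp
    then show ?thesis by (simp add: algebra_simps)
  qed
  then show ?thesis using that[of "1 + K" d] K(1) d(1) by simp
qed

end

locale resolvent_setting = scale_setting r0 V nrm j U
  for r0 :: real and V :: "real \<Rightarrow> 'x::real_vector set" and nrm :: "real \<Rightarrow> 'x \<Rightarrow> real"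
    and j :: "real \<Rightarrow> real \<Rightarrow> 'x \<Rightarrow> 'x" and U :: "'b::real_normed_vector set" +
  fixes \<gamma> :: real and Q :: "real \<Rightarrow> real \<Rightarrow> 'b \<Rightarrow> 'x \<Rightarrow> 'x" and R :: "real \<Rightarrow> 'b \<Rightarrow> 'x \<Rightarrow> 'x"
  assumes gamma_pos: "0 < \<gamma>"
    and Q_reg: "equivariant_regular r0 V nrm j U \<gamma> Q"
    and R_inverse: "\<forall>s u. 0 < s \<and> s \<le> r0 \<and> u \<in> U \<longrightarrow>
      bop s s (R s u) \<and> (\<forall>x\<in>V s. R s u (x - Q s s u x) = x) \<and> (\<forall>x\<in>V s. R s u x - Q s s u (R s u x) = x)"
    and R_bounded: "\<forall>\<epsilon>>0. \<exists>C. \<forall>s u. \<epsilon> < s \<and> s \<le> r0 \<and> u \<in> U \<longrightarrow> opn s s (R s u) \<le> C"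
begin

lemma Q_bop: "0 < a \<Longrightarrow> a \<le> b \<Longrightarrow> b \<le> r0 \<Longrightarrow> u \<in> U \<Longrightarrow> bop a b (Q a b u)"
  using Q_reg[unfolded equivariant_regular_def, THEN conjunct1] by blast

lemma Q_equivariant:
  "0 < s \<Longrightarrow> s \<le> r \<Longrightarrow> s < s' \<Longrightarrow> r < r' \<Longrightarrow> s' \<le> r' \<Longrightarrow> r' \<le> r0 \<Longrightarrow> u \<in> U \<Longrightarrow> x \<in> V r' \<Longrightarrow>
   j s s' (Q s' r' u x) = Q s r u (j r r' x)"
  using Q_reg[unfolded equivariant_regular_def, THEN conjunct2, THEN conjunct1] by auto

lemma Q_C_t: "0 < a \<Longrightarrow> b \<le> r0 \<Longrightarrow> 0 \<le> t \<Longrightarrow> t < \<gamma> \<Longrightarrow> t < b - a \<Longrightarrow> C_t V nrm a b U t (Q a b)"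
  using Q_reg[unfolded equivariant_regular_def, THEN conjunct2, THEN conjunct2] by simp

lemma R_bop: "0 < s \<Longrightarrow> s \<le> r0 \<Longrightarrow> u \<in> U \<Longrightarrow> bop s s (R s u)"
  using R_inverse by blast

lemma R_left_inverse: "0 < s \<Longrightarrow> s \<le> r0 \<Longrightarrow> u \<in> U \<Longrightarrow> x \<in> V s \<Longrightarrow> R s u (x - Q s s u x) = x"
  using R_inverse by blast

lemma R_right_inverse: "0 < s \<Longrightarrow> s \<le> r0 \<Longrightarrow> u \<in> U \<Longrightarrow> x \<in> V s \<Longrightarrow> R s u x - Q s s u (R s u x) = x"
  using R_inverse by blast

lemma Q_factor_diag:
  assumes a: "0 < a" "a \<le> b" "b \<le> r0" and u: "u \<in> U" and x: "x \<in> V b"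
  shows "Q a b u x = Q a a u (j a b x)"
proof (cases "a = b")
  case True
  then show ?thesis using j_id a x by simp
next
  case False
  then have ab: "a < b" using a by simp
  have jx: "j a b x \<in> V a" using bop_in[OF j_bop x] a by simp
  have "j (a / 2) a (Q a b u x) = Q (a / 2) (a / 2) u (j (a / 2) b x)"
    using Q_equivariant[of "a / 2" "a / 2" a b] a ab u x by simp
  also have "\<dots> = Q (a / 2) (a / 2) u (j (a / 2) a (j a b x))" using j_comp[of "a / 2" a b] a x by simp
  also have "\<dots> = j (a / 2) a (Q a a u (j a b x))"
    using Q_equivariant[of "a / 2" "a / 2" a a] a u jx by simp
  finally show ?thesis
    using j_inj[of "a / 2" a] bop_in[OF Q_bop x] bop_in[OF Q_bop jx] a u unfolding inj_on_def by auto
qed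

lemma R_commutes_j:
  assumes c: "0 < c" "c \<le> b" "b \<le> r0" and u: "u \<in> U" and x: "x \<in> V b"
  shows "R c u (j c b x) = j c b (R b u x)"
proof (cases "c = b")
  case True
  then show ?thesis using bop_in[OF R_bop x] j_id c u x by simp
next
  case False
  define y where "y = R b u x"
  have lb: "level b" using c by simp
  have y: "y \<in> V b" unfolding y_def using bop_in[OF R_bop x] c u by simp
  have jy: "j c b y \<in> V c" using bop_in[OF j_bop y] c by simp
  have "j c b x = j c b (y - Q b b u y)" unfolding y_def using R_right_inverse c u x by simp
  also have "\<dots> = j c b y - Q c c u (j c b y)"
    using bop_diff[OF lb j_bop y bop_in[OF Q_bop y]] Q_equivariant[of c c b b] c False u y by simp
  finally show ?thesis using R_left_inverse[OF _ _ u jy] c unfolding y_def by simp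
qed

end


context resolvent_setting
begin

definition Qfam :: "('b, 'x) sfam" where
  "Qfam a b u hs = Q a b u"

definition DQ :: "('b, 'x) sfam" where
  "DQ = fam_deriv Qfam 0"

lemma Qfam_coherent: "fam_coherent Qfam 0 0"
  unfolding fam_coherent_def Qfam_def
proof (intro ballI allI impI conjI)
  fix u and a c b x assume u: "u \<in> U" and a: "0 < a" "a \<le> c" "c + 0 < b" "b \<le> r0" and x: "x \<in> V b"
  have jx: "j c b x \<in> V c" using bop_in[OF j_bop x] a by simp
  show "Q a b u x = j a c (Q c b u x)"
  proof (cases "a = c")
    case True
    then show ?thesis using j_id bop_in[OF Q_bop x] a u by simp
  next
    case False
    have "j a c (Q c b u x) = j a c (Q c c u (j c b x))" using Q_factor_diag[of c b u x] a u x by simp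
    also have "\<dots> = Q a a u (j a c (j c b x))" using Q_equivariant[of a a c c] False a u jx by simp
    also have "\<dots> = Q a b u x" using j_comp Q_factor_diag[of a b u x] a u x by simp
    finally show ?thesis by simp
  qed
next
  fix u and a c b x assume u: "u \<in> U" and a: "0 < a" "a + 0 < c" "c \<le> b" "b \<le> r0" and x: "x \<in> V b"
  have jx: "j c b x \<in> V c" using bop_in[OF j_bop x] a by simp
  show "Q a b u x = Q a c u (j c b x)"
    using Q_factor_diag[of a c u "j c b x"] Q_factor_diag[of a b u x] j_comp[of a c b x] a u x jx by simp
qed

lemma Qfam_deriv_exists:
  assumes a: "0 < a" "b \<le> r0" and t: "0 \<le> t" "t < b - a - 1" "t < \<gamma> - 1"
  shows "\<exists>G. fam_has_deriv a b 0 (Qfam a b) G \<and> fam_C a b (Suc 0) t G \<and> mlin_fam a b (Suc 0) G"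
proof (rule fam_C_deriv_from_above[OF _ t(1), of b "min \<gamma> (b - a)"])
  show "level b" "t < min \<gamma> (b - a) - 1" using a t by auto
  fix s assume s: "1 < s" "s < min \<gamma> (b - a)"
  obtain G where "fam_has_deriv a b 0 (\<lambda>u hs. Q a b u) G" "fam_C a b 1 (s - 1) G" "mlin_fam a b 1 G"
    using C_t_imp_deriv[OF s(1) Q_C_t[OF a]] s by auto
  then show "\<exists>G. fam_has_deriv a b 0 (Qfam a b) G \<and> fam_C a b (Suc 0) (s - 1) G \<and> mlin_fam a b (Suc 0) G"
    unfolding Qfam_def by auto
qed

lemma DQ_is_deriv:
  assumes "1 < \<gamma>" "0 < a" "a + 1 < b" "b \<le> r0"
  shows "fam_has_deriv a b 0 (Qfam a b) (DQ a b)" "mlin_fam a b (Suc 0) (DQ a b)"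
  using Qfam_deriv_exists[of a b 0] fam_deriv_someI[of a b 0 Qfam] assms unfolding DQ_def by auto

lemma scale_fam_DQ:
  assumes "1 < \<gamma>"
  shows "scale_fam DQ 1 1 (\<gamma> - 1)"
proof -
  have "scale_fam (fam_deriv Qfam 0) (Suc 0) (0 + 1) (\<gamma> - 1)"
  proof (rule scale_fam_derivI[OF order_refl _ Qfam_coherent])
    show "0 < \<gamma> - 1" using assms by simp
    show "bop_fam a b 0 (Qfam a b)" if "0 < a" "a + 0 < b" "b \<le> r0" for a b
      unfolding bop_fam_def Qfam_def using Q_bop that by simp
  qed (use Qfam_deriv_exists in simp)
  then show ?thesis unfolding DQ_def by simp
qed

definition Rfam :: "('b, 'x) sfam" where
  "Rfam a b u hs x = j a b (R b u x)"

lemma Rfam_bop: "0 < a \<Longrightarrow> a \<le> b \<Longrightarrow> b \<le> r0 \<Longrightarrow> u \<in> U \<Longrightarrow> bop a b (Rfam a b u hs)"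
  unfolding Rfam_def using bop_comp(1)[OF _ _ _ j_bop R_bop] by simp

lemma Rfam_bound:
  assumes a: "0 < a" "a \<le> b" "b \<le> r0"
  shows "\<exists>K\<ge>0. \<forall>u\<in>U. \<forall>hs. opn a b (Rfam a b u hs) \<le> K"
proof -
  obtain C where C: "\<forall>s u. a / 2 < s \<and> s \<le> r0 \<and> u \<in> U \<longrightarrow> opn s s (R s u) \<le> C"
    using R_bounded a by (meson half_gt_zero)
  have la: "level a" and lb: "level b" using a by auto
  have "opn a b (Rfam a b u hs) \<le> opn a b (j a b) * max C 0" if u: "u \<in> U" for u hs
    unfolding Rfam_def
    by (rule opn_comp_le[OF la lb lb j_bop R_bop order_refl]) (use a u C[rule_format, of b u] in auto)
  moreover have "0 \<le> opn a b (j a b) * max C 0" using opn_nonneg[OF la lb j_bop] a by simp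
  ultimately show ?thesis by blast
qed

lemma Rfam_mlin:
  assumes "0 < a" "a \<le> b" "b \<le> r0"
  shows "mlin_fam a b 0 (Rfam a b)"
proof -
  obtain K where K: "\<forall>u\<in>U. \<forall>hs. opn a b (Rfam a b u hs) \<le> K"
    using Rfam_bound[OF assms] by blast
  show ?thesis by (rule mlin_famI[where C = K]) (use Rfam_bop K assms in auto)
qed

lemma Rfam_coherent: "fam_coherent Rfam 0 0"
  unfolding fam_coherent_def Rfam_def
proof (intro ballI allI impI conjI)
  fix u and a c b x assume u: "u \<in> U" and a: "0 < a" "a \<le> c" "c + 0 < b" "b \<le> r0" and x: "x \<in> V b"
  show "j a b (R b u x) = j a c (j c b (R b u x))"
    using j_comp bop_in[OF R_bop x] a u by simp
next
  fix u and a c b x assume u: "u \<in> U" and a: "0 < a" "a + 0 < c" "c \<le> b" "b \<le> r0" and x: "x \<in> V b"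
  show "j a b (R b u x) = j a c (R c u (j c b x))"
    using j_comp bop_in[OF R_bop x] R_commutes_j[of c b u x] a u x by simp
qed

lemma R_resolvent_identity:
  assumes b: "0 < b" "b \<le> r0" and u: "u \<in> U" "v \<in> U" and x: "x \<in> V b"
  shows "R b u x - R b v x = R b u (Q b b u (R b v x) - Q b b v (R b v x))"
proof -
  have lb: "level b" using b by simp
  define y where "y = R b v x"
  have y: "y \<in> V b" unfolding y_def using bop_in[OF R_bop x] b u by simp
  have Qy: "Q b b u y \<in> V b" using bop_in[OF Q_bop y] b u by simp
  have e1: "R b u (Q b b u y) = R b u y - y"
    using R_left_inverse[OF b u(1) y] bop_diff[OF lb R_bop[OF b u(1)] y Qy] by (simp add: algebra_simps)
  have e2: "Q b b v y = y - x" unfolding y_def using R_right_inverse[OF b u(2) x] by (simp add: algebra_simps)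
  have "R b u (Q b b u y - Q b b v y) = R b u (Q b b u y) - R b u (Q b b v y)"
    by (rule bop_diff[OF lb R_bop[OF b u(1)] Qy bop_in[OF Q_bop y]]) (use b u in auto)
  also have "\<dots> = R b u x - y"
    unfolding e1 e2 using bop_diff[OF lb R_bop[OF b u(1)] y x] by simp
  finally show ?thesis unfolding y_def by simp
qed

text \<open>The resolvent identity, transported along the scale: the difference of the \<open>R\<close>'s passes
  through \<open>Q\<close> between two intermediate levels \<open>c < c'\<close>, where \<open>Q\<close> is regular.\<close>

lemma Rfam_diff:
  assumes a: "0 < a" "a \<le> c" "c < c'" "c' \<le> b" "b \<le> r0" and u: "w \<in> U" "u \<in> U" and x: "x \<in> V b"
  shows "Rfam a b w hs x - Rfam a b u hs x = Rfam a c w hs (Q c c' w (Rfam c' b u hs x) - Q c c' u (Rfam c' b u hs x))"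
proof -
  have lb: "level b" and lc: "level c" using a by auto
  define y where "y = R b u x"
  have y: "y \<in> V b" unfolding y_def using bop_in[OF R_bop x] a u by simp
  have Qy: "Q b b w y \<in> V b" "Q b b u y \<in> V b" using bop_in[OF Q_bop y] a u by auto
  have jy: "j c' b y \<in> V c'" and jcy: "j c b y = j c c' (j c' b y)" using bop_in[OF j_bop y] j_comp[of c c' b y] a y by auto
  have "Rfam a b w hs x - Rfam a b u hs x = j a b (R b w x - R b u x)"
    unfolding Rfam_def using bop_diff[OF lb j_bop[of a b] bop_in[OF R_bop x] bop_in[OF R_bop x]] a u by simp
  also have "\<dots> = j a b (R b w (Q b b w y - Q b b u y))"
    unfolding y_def using R_resolvent_identity[OF _ _ u x] a by simp
  also have "\<dots> = j a c (R c w (j c b (Q b b w y - Q b b u y)))"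
    using j_comp[of a c b] R_commutes_j[of c b w] bop_in[OF R_bop V_diff[OF lb Qy]] V_diff[OF lb Qy] a u by simp
  also have "j c b (Q b b w y - Q b b u y) = Q c c w (j c b y) - Q c c u (j c b y)"
    using bop_diff[OF lb j_bop Qy] Q_equivariant[of c c b b] j_id[of b] a u y Qy
    by (cases "c = b") auto
  also have "\<dots> = Q c c' w (j c' b y) - Q c c' u (j c' b y)"
    using Q_factor_diag[of c c' _ "j c' b y"] jy jcy a u by simp
  finally show ?thesis unfolding Rfam_def y_def by simp
qed

lemma Rfam_holder:
  assumes t: "0 < t" "t \<le> 1" "t < \<gamma>" and a: "0 < a" "t < b - a" "b \<le> r0"
  shows "fam_holder a b 0 t (Rfam a b)"
proof -
  have la: "level a" and lb: "level b" and ab: "a \<le> b" using a t by auto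
  obtain Ka where Ka: "\<forall>u\<in>U. \<forall>hs. opn a a (Rfam a a u hs) \<le> Ka"
    using Rfam_bound[OF a(1) order_refl] la by blast
  obtain Kb where Kb: "\<forall>u\<in>U. \<forall>hs. opn b b (Rfam b b u hs) \<le> Kb"
    using Rfam_bound[OF _ order_refl a(3)] lb by blast
  have "fam_holder a b 0 t (\<lambda>u hs. Q a b u)"
    by (rule C_t_imp_holder[OF t(1,2) Q_C_t]) (use a t in auto)
  then obtain C where C: "\<forall>u\<in>U. \<forall>v\<in>U. \<forall>hs :: 'b list. length hs = 0 \<longrightarrow>
      opn a b (\<lambda>x. Q a b u x - Q a b v x) \<le> C * norm (u - v) powr t * nprod hs"
    unfolding fam_holder_def by blast
  have "opn a b (\<lambda>x. Rfam a b u hs x - Rfam a b v hs x) \<le> Ka * C * Kb * norm (u - v) powr t * nprod hs"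
    if u: "u \<in> U" and v: "v \<in> U" and l: "length hs = 0" for u v hs
  proof -
    have dQ: "bop a b (\<lambda>y. Q a b u y - Q a b v y)"
      using bop_diff_op(1)[OF la lb Q_bop[OF a(1) ab a(3) u] Q_bop[OF a(1) ab a(3) v]] .
    have Ra: "bop a a (Rfam a a u hs)" using Rfam_bop[OF a(1) order_refl _ u] la by simp
    have Rb: "bop b b (Rfam b b v hs)" using Rfam_bop[OF _ order_refl a(3) v] lb by simp
    have "opn a b (\<lambda>x. Rfam a b u hs x - Rfam a b v hs x)
        = opn a b (\<lambda>x. Rfam a a u hs (Q a b u (Rfam b b v hs x) - Q a b v (Rfam b b v hs x)))"
      by (rule opn_cong) (use Rfam_diff[of a a b b] a t u v in simp)
    also have "\<dots> \<le> Ka * ((C * norm (u - v) powr t) * Kb)"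
    proof (rule opn_comp_le[OF la la lb Ra bop_comp(1)[OF la lb lb dQ Rb] Ka[rule_format, OF u]])
      have "opn a b (\<lambda>y. Q a b u y - Q a b v y) \<le> C * norm (u - v) powr t" using C u v l by simp
      then show "opn a b (\<lambda>x. Q a b u (Rfam b b v hs x) - Q a b v (Rfam b b v hs x))
          \<le> C * norm (u - v) powr t * Kb"
        by (rule opn_comp_le[OF la lb lb dQ Rb _ Kb[rule_format, OF v]])
    qed
    finally show ?thesis using l by (simp add: algebra_simps)
  qed
  then show ?thesis unfolding fam_holder_def by blast
qed

lemma Rfam_C_le_1:
  assumes a: "0 < a" "b \<le> r0" and t: "0 \<le> t" "t \<le> 1" "t < b - a" "t < \<gamma>"
  shows "fam_C a b 0 t (Rfam a b)"
proof -
  have lin: "mlin_fam a b 0 (Rfam a b)" using Rfam_mlin a t by simp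
  show ?thesis
  proof (cases "t = 0")
    case True
    obtain \<beta> where \<beta>: "0 < \<beta>" "\<beta> \<le> 1" "\<beta> < b - a" "\<beta> < \<gamma>"
      using exists_pos_le_1_less[of "b - a" \<gamma>] t by auto
    then show ?thesis
      using fam_C_0I[OF lin fam_holder_imp_cont[OF \<beta>(1) Rfam_holder[OF \<beta>(1,2,4) a(1) \<beta>(3) a(2)]]] True
      by simp
  next
    case False
    then show ?thesis using fam_C_holderI[OF _ t(2) lin Rfam_holder] a t by simp
  qed
qed

abbreviation DR :: "('b, 'x) sfam" where
  "DR \<equiv> fam_prod [False] 0 1 Rfam (fam_prod [True] 1 0 DQ Rfam)"

lemma DR_eq:
  assumes FR: "scale_fam Rfam 0 0 g" and \<gamma>: "1 < \<gamma>"
    and a: "0 < a" "a < c" "c + 1 < c'" "c' < b" "b \<le> r0" and u: "u \<in> U" and x: "x \<in> V b"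
  shows "DR a b u [h] x = Rfam a c u [] (DQ c c' u [h] (Rfam c' b u [] x))"
proof -
  have FP: "scale_fam (fam_prod [True] 1 0 DQ Rfam) 1 1 (min (\<gamma> - 1) g)"
    using scale_fam_prod[OF scale_fam_DQ[OF \<gamma>] FR, of "[True]"] by simp
  have "DR a b u [h] x = Rfam a c u [] (fam_prod [True] 1 0 DQ Rfam c b u [h] x)"
    using fam_prod_eq[OF FR FP, of "[False]" a b c] a u x unfolding mprod_def by simp
  also have "\<dots> = Rfam a c u [] (DQ c c' u [h] (Rfam c' b u [] x))"
    using fam_prod_eq[OF scale_fam_DQ[OF \<gamma>] FR, of "[True]" c b c'] a u x unfolding mprod_def by simp
  finally show ?thesis .
qed

text \<open>With \<open>a < c < c + 1 < c' < b\<close> and \<open>w = u + h\<close>, the transported resolvent identity gives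
  \<open>R\<^sub>a\<^sub>b(w) - R\<^sub>a\<^sub>b(u) - R\<^sub>a\<^sub>c(u) DQ(u)h R\<^sub>c\<^sub>'\<^sub>b(u) =
   R\<^sub>a\<^sub>c(u) [Q(w) - Q(u) - DQ(u)h] R\<^sub>c\<^sub>'\<^sub>b(u) + [R\<^sub>a\<^sub>c(w) - R\<^sub>a\<^sub>c(u)] [Q(w) - Q(u)] R\<^sub>c\<^sub>'\<^sub>b(u)\<close>;
  the first term is \<open>o(h)\<close> by differentiability of \<open>Q\<close>, the second by continuity of \<open>R\<close> and
  the local Lipschitz bound on \<open>Q\<close>.\<close>

lemma Rfam_has_deriv:
  assumes FR: "scale_fam Rfam 0 0 g" and \<gamma>: "1 < \<gamma>" and a: "0 < a" "1 < b - a" "b \<le> r0"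
  shows "fam_has_deriv a b 0 (Rfam a b) (DR a b)"
  unfolding fam_has_deriv_def
proof (intro ballI allI impI)
  fix u e assume u: "u \<in> U" and e: "(0::real) < e"
  define s where "s = (b - a - 1) / 3"
  define c where "c = a + s"
  define c' where "c' = b - s"
  have "0 < s" "3 * s = b - a - 1" unfolding s_def using a by auto
  then have c: "a < c" "c + 1 < c'" "c' < b" unfolding c_def c'_def by linarith+
  have la: "level a" and lc: "level c" and lc': "level c'" and lb: "level b" using a c by auto
  obtain KRa where KRa: "0 \<le> KRa" "\<forall>w\<in>U. \<forall>hs. opn a c (Rfam a c w hs) \<le> KRa"
    using Rfam_bound[of a c] a c lc by auto
  obtain KRb where KRb: "0 \<le> KRb" "\<forall>w\<in>U. \<forall>hs. opn c' b (Rfam c' b w hs) \<le> KRb"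
    using Rfam_bound[of c' b] a c lc' by auto
  have DQ: "fam_has_deriv c c' 0 (Qfam c c') (DQ c c')" "mlin_fam c c' (Suc 0) (DQ c c')"
    using DQ_is_deriv[OF \<gamma> _ c(2)] lc lc' by auto
  have BQ: "bop_fam c c' 0 (Qfam c c')" unfolding bop_fam_def Qfam_def using Q_bop c lc lc' by auto
  obtain K d0 where K: "0 \<le> K" "0 < d0" "\<And>h hs. norm h < d0 \<Longrightarrow> u + h \<in> U \<Longrightarrow> length hs = 0 \<Longrightarrow>
      opn c c' (\<lambda>x. Qfam c c' (u + h) hs x - Qfam c c' u hs x) \<le> K * norm h * nprod hs"
    using fam_has_deriv_lipschitz_at[OF lc lc' BQ DQ(2,1) u] by blast
  define e1 where "e1 = e / 2 / (KRa * KRb + 1)"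
  define e2 where "e2 = e / 2 / (K * KRb + 1)"
  have e12: "0 < e1" "0 < e2" unfolding e1_def e2_def using e KRa(1) KRb(1) K(1) by (simp_all add: add_nonneg_pos)
  have "(KRa * KRb) * e1 \<le> e / 2" unfolding e1_def by (rule mult_eps_le) (use KRa KRb e in auto)
  moreover have "(K * KRb) * e2 \<le> e / 2" unfolding e2_def by (rule mult_eps_le) (use K KRb e in auto)
  ultimately have eps: "KRa * (e1 * KRb) + e2 * (K * KRb) \<le> e" by (simp add: algebra_simps)
  obtain d1 where d1: "0 < d1" "\<And>h hs. norm h < d1 \<Longrightarrow> u + h \<in> U \<Longrightarrow> length hs = 0 \<Longrightarrow>
      opn c c' (\<lambda>x. Qfam c c' (u + h) hs x - Qfam c c' u hs x - DQ c c' u (h # hs) x) \<le> e1 * norm h * nprod hs"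
    using fam_has_derivD[OF DQ(1) u e12(1)] by blast
  have "fam_cont a c 0 (Rfam a c)" using scale_fam_cont[OF FR a(1)] c lc by simp
  then obtain d2 where d2: "0 < d2" "\<And>v hs. v \<in> U \<Longrightarrow> norm (v - u) < d2 \<Longrightarrow> length hs = 0 \<Longrightarrow>
      opn a c (\<lambda>x. Rfam a c v hs x - Rfam a c u hs x) \<le> e2 * nprod hs"
    using fam_contD[OF _ u e12(2)] by blast
  have "opn a b (\<lambda>x. Rfam a b (u + h) hs x - Rfam a b u hs x - DR a b u (h # hs) x) \<le> e * norm h * nprod hs"
    if h: "norm h < min d0 (min d1 d2)" "u + h \<in> U" and l: "length hs = 0" for h hs
  proof -
    define w where "w = u + h"
    have w: "w \<in> U" and hs: "hs = []" using h l unfolding w_def by auto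
    define A where "A y = Q c c' w y - Q c c' u y - DQ c c' u [h] y" for y
    define \<Delta>Q where "\<Delta>Q y = Q c c' w y - Q c c' u y" for y
    have bQ: "bop c c' (Q c c' w)" "bop c c' (Q c c' u)" using Q_bop c lc lc' w u by auto
    have bDQ: "bop c c' (DQ c c' u [h])" using mlin_fam_bop[OF DQ(2) u] by simp
    have bA: "bop c c' A" unfolding A_def by (rule bop_diff3_op[OF lc lc' bQ bDQ])
    have b\<Delta>Q: "bop c c' \<Delta>Q" unfolding \<Delta>Q_def by (rule bop_diff_op(1)[OF lc lc' bQ])
    have Ra: "bop a c (Rfam a c u [])" "bop a c (Rfam a c w [])" using Rfam_bop c la lc u w by auto
    have Rb: "bop c' b (Rfam c' b u [])" using Rfam_bop c lc' lb u by auto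
    have \<Delta>R: "bop a c (\<lambda>z. Rfam a c w [] z - Rfam a c u [] z)" by (rule bop_diff_op(1)[OF la lc Ra(2,1)])
    have oA: "opn c c' A \<le> e1 * norm h"
      unfolding A_def using d1(2)[of h "[]"] h unfolding Qfam_def w_def by simp
    have o\<Delta>Q: "opn c c' \<Delta>Q \<le> K * norm h"
      unfolding \<Delta>Q_def using K(3)[of h "[]"] h unfolding Qfam_def w_def by simp
    have oRb: "opn c' b (Rfam c' b u []) \<le> KRb" using KRb(2) u by blast
    have "opn a b (\<lambda>x. Rfam a b w [] x - Rfam a b u [] x - DR a b u [h] x)
        \<le> KRa * (e1 * norm h * KRb) + e2 * (K * norm h * KRb)"
    proof (rule opn_sum2_le[OF la lc lc lb Ra(1) bop_comp(1)[OF lc lc' lb bA Rb] \<Delta>R bop_comp(1)[OF lc lc' lb b\<Delta>Q Rb]])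
      show "opn a c (Rfam a c u []) \<le> KRa" using KRa(2) u by blast
      show "opn c b (\<lambda>x. A (Rfam c' b u [] x)) \<le> e1 * norm h * KRb"
        by (rule opn_comp_le[OF lc lc' lb bA Rb oA oRb])
      show "opn a c (\<lambda>z. Rfam a c w [] z - Rfam a c u [] z) \<le> e2"
        using d2(2)[OF w _ l] h hs unfolding w_def by simp
      show "opn c b (\<lambda>x. \<Delta>Q (Rfam c' b u [] x)) \<le> K * norm h * KRb"
        by (rule opn_comp_le[OF lc lc' lb b\<Delta>Q Rb o\<Delta>Q oRb])
    next
      fix x assume x: "x \<in> V b"
      define y where "y = Rfam c' b u [] x"
      have y: "y \<in> V c'" unfolding y_def using bop_in[OF Rb x] .
      have "Rfam a b w [] x - Rfam a b u [] x = Rfam a c w [] (\<Delta>Q y)"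
        using Rfam_diff[of a c c' b w u x "[]"] c a w u x unfolding \<Delta>Q_def y_def by simp
      moreover have "DR a b u [h] x = Rfam a c u [] (DQ c c' u [h] y)"
        using DR_eq[OF FR \<gamma> a(1) c a(3) u x] unfolding y_def .
      moreover have "Rfam a c u [] (A y) = Rfam a c u [] (\<Delta>Q y) - Rfam a c u [] (DQ c c' u [h] y)"
        unfolding A_def \<Delta>Q_def[symmetric] using bop_diff[OF lc Ra(1) bop_in[OF b\<Delta>Q y] bop_in[OF bDQ y]] .
      ultimately show "Rfam a b w [] x - Rfam a b u [] x - DR a b u [h] x =
          Rfam a c u [] (A (Rfam c' b u [] x)) + (Rfam a c w [] (\<Delta>Q (Rfam c' b u [] x)) - Rfam a c u [] (\<Delta>Q (Rfam c' b u [] x)))"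
        unfolding y_def by simp
    qed
    also have "\<dots> = (KRa * (e1 * KRb) + e2 * (K * KRb)) * norm h" by (simp add: algebra_simps)
    also have "\<dots> \<le> e * norm h" using eps by (simp add: mult_right_mono)
    finally show ?thesis unfolding w_def hs by simp
  qed
  then show "\<exists>d>0. \<forall>h. norm h < d \<and> u + h \<in> U \<longrightarrow> (\<forall>hs. length hs = 0 \<longrightarrow>
      opn a b (\<lambda>x. Rfam a b (u + h) hs x - Rfam a b u hs x - DR a b u (h # hs) x) \<le> e * norm h * nprod hs)"
    using K(2) d1(1) d2(1) by (intro exI[of _ "min d0 (min d1 d2)"]) auto
qed

lemma scale_fam_Rfam: "scale_fam Rfam 0 0 (min \<gamma> (real n + 1))"
proof (induction n)
  case 0
  show ?case
    unfolding scale_fam_def using Rfam_coherent Rfam_C_le_1 gamma_pos by simp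
next
  case (Suc n)
  have "fam_C a b 0 t (Rfam a b)"
    if a: "0 < a" "b \<le> r0" and t: "0 \<le> t" "t < b - a" "t < min \<gamma> (real (Suc n) + 1)" for a b t
  proof (cases "t \<le> 1")
    case True
    then show ?thesis using Rfam_C_le_1[OF a t(1) True t(2)] t(3) by simp
  next
    case False
    then have t1: "1 < t" and \<gamma>: "1 < \<gamma>" using t by auto
    have "scale_fam DR 1 1 (min (min \<gamma> (real n + 1)) (min (\<gamma> - 1) (min \<gamma> (real n + 1))))"
      using scale_fam_prod[OF Suc.IH scale_fam_prod[OF scale_fam_DQ[OF \<gamma>] Suc.IH, of "[True]"], of "[False]"]
      by simp
    then have "fam_C a b (Suc 0) (t - 1) (DR a b)"
      using scale_famD(4)[OF _ a, of DR "Suc 0" 1] t t1 by simp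
    then show ?thesis
      using fam_C_derivI[OF _ t1 Rfam_mlin Rfam_has_deriv[OF Suc.IH \<gamma> a(1) _ a(2)]] a t t1 by simp
  qed
  then show ?case unfolding scale_fam_def using Rfam_coherent gamma_pos by simp
qed

lemma Rfam_C:
  assumes "0 < a" "b \<le> r0" "0 \<le> t" "t < b - a" "t < \<gamma>"
  shows "fam_C a b 0 t (Rfam a b)"
proof -
  obtain n :: nat where "t < real n + 1" using reals_Archimedean2[of t] by (meson less_add_one less_trans)
  then show ?thesis using scale_famD(4)[OF scale_fam_Rfam assms(1,2,3)] assms(4,5) by simp
qed

end

theorem lemmaD6:
  fixes r0 \<gamma> :: real
    and V :: "real \<Rightarrow> 'x::real_vector set" and nrm :: "real \<Rightarrow> 'x \<Rightarrow> real"
    and j :: "real \<Rightarrow> real \<Rightarrow> 'x \<Rightarrow> 'x"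
    and U :: "'b::banach set"
    and Q :: "real \<Rightarrow> real \<Rightarrow> 'b \<Rightarrow> 'x \<Rightarrow> 'x"
    and R :: "real \<Rightarrow> 'b \<Rightarrow> 'x \<Rightarrow> 'x"
  assumes "0 < r0" and "0 < \<gamma>" and "\<gamma> \<le> r0"
    and "banach_scale r0 V nrm j"
    and "open U" and "convex U" and "U \<noteq> {}"
    and "equivariant_regular r0 V nrm j U \<gamma> Q"
    and "\<forall>s u. 0 < s \<and> s \<le> r0 \<and> u \<in> U \<longrightarrow>
           bounded_op V nrm s s (R s u) \<and>
           (\<forall>x\<in>V s. R s u (x - Q s s u x) = x) \<and>
           (\<forall>x\<in>V s. R s u x - Q s s u (R s u x) = x)"
    and "\<forall>\<epsilon>>0. \<exists>C. \<forall>s u. \<epsilon> < s \<and> s \<le> r0 \<and> u \<in> U \<longrightarrow> opnorm V nrm s s (R s u) \<le> C"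
  shows "equivariant_regular r0 V nrm j U \<gamma> (\<lambda>s r u x. j s r (R r u x))"
proof -
  interpret resolvent_setting r0 V nrm j U \<gamma> Q R
    by unfold_locales (use assms in auto)
  have R_eq: "(\<lambda>u x. j s r (R r u x)) = (\<lambda>u. Rfam s r u [])" for s r
    unfolding Rfam_def by simp
  show ?thesis
    unfolding equivariant_regular_def R_eq
  proof (intro conjI allI impI ballI)
    show "bop s r (Rfam s r u [])" if "0 < s \<and> s \<le> r \<and> r \<le> r0 \<and> u \<in> U" for s r u
      using Rfam_bop that by blast
    show "j s s' (Rfam s' r' u [] x) = Rfam s r u [] (j r r' x)"
      if "0 < s \<and> s \<le> r \<and> r \<le> r0 \<and> 0 < s' \<and> s' \<le> r' \<and> r' \<le> r0 \<and> s < s' \<and> r < r' \<and> u \<in> U"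
        and "x \<in> V r'" for s r s' r' u x
      using j_comp[of s s' r'] j_comp[of s r r'] R_commutes_j[of r r' u x] bop_in[OF R_bop that(2)] that
      unfolding Rfam_def by simp
    show "C_t V nrm s r U t (\<lambda>u. Rfam s r u [])"
      if "0 < s \<and> s \<le> r \<and> r \<le> r0 \<and> 0 \<le> t \<and> t < min \<gamma> (r - s)" for s r t
      using fam_C_imp_C_t[OF _ _ Rfam_C] that by simp
  qed
qed


end
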